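(* For any separable complex Hilbert space $\mathcal{H}$ and any $p\in(0,1]$ and $p'\in(0,\infty)$, $\mathbf{C}^{(3)}_p(\mathcal{H})\subseteq\mathbf{C}_{p'}(\mathcal{H})$.
   Context: Observables are self-adjoint operators on $\mathcal{H}$; $A^T$ is the operator on the dual $\mathcal{H}^*$ with $(A^T\eta)(\varphi)=\eta(A\varphi)$. For a finite collection $\mathcal{A}=\{A_1,\dots,A_K\}$ of observables and $0<p<\infty$, $C_{\mathcal{A},p}=\sum_{k=1}^K|A_k\otimes I^T-I\otimes A_k^T|^p$ on $\mathcal{H}\otimes\mathcal{H}^*$. $\mathbf{C}_p(\mathcal{H})=\{C_{\mathcal{A},p}:\ \mathcal{A}\text{ a finite collection of observables each with finite spectrum}\}$, and for $k\in\mathbb{N}$, $\mathbf{C}^{(k)}_p(\mathcal{H})=\{C_{\mathcal{A},p}:\ \mathcal{A}\text{ a finite collection of observables with }\#\mathrm{spec}(A)\le k\text{ for all }A\in\mathcal{A}\}$. *)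

theory Defs
  imports "HOL-Analysis.Analysis"
begin

text \<open>Concrete model of a separable complex Hilbert space: the space l2(I) of
square-summable complex families indexed by a set I of natural numbers
(extended by zero outside I). Every separable complex Hilbert space is unitarily
isomorphic to such a space, and all notions below are unitarily invariant.\<close>

definition sep_l2 :: "'i set \<Rightarrow> ('i \<Rightarrow> complex) set" where
  "sep_l2 I = {f. (\<forall>i. i \<notin> I \<longrightarrow> f i = 0) \<and> (\<lambda>i. (cmod (f i))^2) summable_on I}"

definition sep_inner :: "'i set \<Rightarrow> ('i \<Rightarrow> complex) \<Rightarrow> ('i \<Rightarrow> complex) \<Rightarrow> complex" where
  "sep_inner I f g = (\<Sum>\<^sub>\<infinity>i\<in>I. cnj (f i) * g i)"

definition sep_norm :: "'i set \<Rightarrow> ('i \<Rightarrow> complex) \<Rightarrow> real" where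
  "sep_norm I f = sqrt (\<Sum>\<^sub>\<infinity>i\<in>I. (cmod (f i))^2)"

definition sep_bounded_op :: "'i set \<Rightarrow> (('i \<Rightarrow> complex) \<Rightarrow> ('i \<Rightarrow> complex)) \<Rightarrow> bool" where
  "sep_bounded_op I T \<longleftrightarrow>
     (\<forall>x\<in>sep_l2 I. T x \<in> sep_l2 I) \<and>
     (\<forall>x\<in>sep_l2 I. \<forall>y\<in>sep_l2 I. \<forall>a b.
         T (\<lambda>i. a * x i + b * y i) = (\<lambda>i. a * T x i + b * T y i)) \<and>
     (\<exists>c. \<forall>x\<in>sep_l2 I. sep_norm I (T x) \<le> c * sep_norm I x) \<and>
     (\<forall>x. x \<notin> sep_l2 I \<longrightarrow> T x = (\<lambda>_. 0))"

text \<open>Observable = self-adjoint operator. (Observables with finite spectrum are bounded.)\<close>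
definition sep_observable :: "'i set \<Rightarrow> (('i \<Rightarrow> complex) \<Rightarrow> ('i \<Rightarrow> complex)) \<Rightarrow> bool" where
  "sep_observable I T \<longleftrightarrow> sep_bounded_op I T \<and>
     (\<forall>x\<in>sep_l2 I. \<forall>y\<in>sep_l2 I. sep_inner I (T x) y = sep_inner I x (T y))"

definition sep_spectrum :: "'i set \<Rightarrow> (('i \<Rightarrow> complex) \<Rightarrow> ('i \<Rightarrow> complex)) \<Rightarrow> complex set" where
  "sep_spectrum I T = {c. \<not> bij_betw (\<lambda>x i. T x i - c * x i) (sep_l2 I) (sep_l2 I)}"

definition sep_eigenspace :: "'i set \<Rightarrow> (('i \<Rightarrow> complex) \<Rightarrow> ('i \<Rightarrow> complex)) \<Rightarrow> complex \<Rightarrow> ('i \<Rightarrow> complex) set" where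
  "sep_eigenspace I T c = {x \<in> sep_l2 I. T x = (\<lambda>i. c * x i)}"

definition sep_proj :: "'i set \<Rightarrow> ('i \<Rightarrow> complex) set \<Rightarrow> ('i \<Rightarrow> complex) \<Rightarrow> ('i \<Rightarrow> complex)" where
  "sep_proj I M x = (if x \<in> sep_l2 I then
      (THE m. m \<in> M \<and> (\<forall>y\<in>M. sep_inner I y (\<lambda>i. x i - m i) = 0)) else (\<lambda>_. 0))"

text \<open>Functional calculus |T|^p for a self-adjoint operator T with finite spectrum:
  |T|^p = sum over the spectrum of |lambda|^p times the spectral projection onto ker(T - lambda).\<close>
definition sep_abs_powr :: "'i set \<Rightarrow> real \<Rightarrow> (('i \<Rightarrow> complex) \<Rightarrow> ('i \<Rightarrow> complex)) \<Rightarrow> ('i \<Rightarrow> complex) \<Rightarrow> ('i \<Rightarrow> complex)" where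
  "sep_abs_powr I p T x = (\<lambda>i. \<Sum>c\<in>sep_spectrum I T.
      complex_of_real (cmod c powr p) * sep_proj I (sep_eigenspace I T c) x i)"

text \<open>Elementary tensors in l2(I x I) = H (x) H*, the dual H* identified with l2(I)
  via eta <-> (eta(e_i))_i.\<close>
definition sep_tensor :: "(nat \<Rightarrow> complex) \<Rightarrow> (nat \<Rightarrow> complex) \<Rightarrow> (nat \<times> nat \<Rightarrow> complex)" where
  "sep_tensor x y = (\<lambda>(i, j). x i * y j)"

definition sep_unit :: "nat \<Rightarrow> nat \<Rightarrow> complex" where
  "sep_unit i = (\<lambda>k. if k = i then 1 else 0)"

text \<open>Transpose A^T on H*: (A^T eta)(phi) = eta(A phi); in coordinates
  (A^T eta)_i = eta(A e_i) = sum_j eta_j (A e_i)_j.\<close>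
definition sep_transp :: "nat set \<Rightarrow> ((nat \<Rightarrow> complex) \<Rightarrow> (nat \<Rightarrow> complex)) \<Rightarrow> (nat \<Rightarrow> complex) \<Rightarrow> (nat \<Rightarrow> complex)" where
  "sep_transp I A y = (\<lambda>i. if i \<in> I then (\<Sum>\<^sub>\<infinity>j\<in>I. y j * A (sep_unit i) j) else 0)"

text \<open>A (x) I^T - I (x) A^T on H (x) H*: the unique bounded operator acting on elementary tensors.\<close>
definition sep_comm_op :: "nat set \<Rightarrow> ((nat \<Rightarrow> complex) \<Rightarrow> (nat \<Rightarrow> complex)) \<Rightarrow> (nat \<times> nat \<Rightarrow> complex) \<Rightarrow> (nat \<times> nat \<Rightarrow> complex)" where
  "sep_comm_op I A = (THE T. sep_bounded_op (I \<times> I) T \<and>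
      (\<forall>x\<in>sep_l2 I. \<forall>y\<in>sep_l2 I.
         T (sep_tensor x y) = (\<lambda>ij. sep_tensor (A x) y ij - sep_tensor x (sep_transp I A y) ij)))"

definition sep_C :: "nat set \<Rightarrow> ((nat \<Rightarrow> complex) \<Rightarrow> (nat \<Rightarrow> complex)) list \<Rightarrow> real \<Rightarrow> (nat \<times> nat \<Rightarrow> complex) \<Rightarrow> (nat \<times> nat \<Rightarrow> complex)" where
  "sep_C I As p = (\<lambda>z ij. (\<Sum>A\<leftarrow>As. sep_abs_powr (I \<times> I) p (sep_comm_op I A) z ij))"

definition sep_Cclass :: "nat set \<Rightarrow> real \<Rightarrow> ((nat \<times> nat \<Rightarrow> complex) \<Rightarrow> (nat \<times> nat \<Rightarrow> complex)) set" where
  "sep_Cclass I p = {sep_C I As p | As.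
      \<forall>A\<in>set As. sep_observable I A \<and> finite (sep_spectrum I A)}"

definition sep_Cclass_k :: "nat set \<Rightarrow> nat \<Rightarrow> real \<Rightarrow> ((nat \<times> nat \<Rightarrow> complex) \<Rightarrow> (nat \<times> nat \<Rightarrow> complex)) set" where
  "sep_Cclass_k I k p = {sep_C I As p | As.
      \<forall>A\<in>set As. sep_observable I A \<and> finite (sep_spectrum I A) \<and> card (sep_spectrum I A) \<le> k}"

end

theory Submission
  imports Defs "HOL-Computational_Algebra.Fundamental_Theorem_Algebra"
begin

(* Let A be an observable with at most three spectral values and spectral projections P_a.
   Then A (x) 1 - 1 (x) A^T is diagonal in the product resolution P_a (x) P_b^T, with eigenvalue
   a - b, so that |A (x) 1 - 1 (x) A^T|^p = sum_{a,b} |a - b|^p P_a (x) P_b^T.  For p <= 1 the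
   function |a - b|^p is a metric on the spectrum, and every metric on at most three points is a
   nonnegative combination sum_k c_k d_k of the star metrics d_k(a, b) = [a = k] + [b = k]
   (a <> b).  As c_k d_k(a, b) = |f_k a - f_k b|^p' for f_k = c_k^(1/p') [. = k], the summand of
   A in C_{A,p} equals the sum of the summands of the observables f_k(A) in C_{B,p'}.

   The spectrum here is the algebraic one (failure of bijectivity), so the spectral decomposition
   of A is derived from scratch: q(A) = 0 for q = prod_{l in spec A} (X - l), since otherwise the
   symmetric bijection q*(A) q(A) - |q(A)|^2 would have a bounded inverse (Baire) while being
   arbitrarily small on unit vectors; Lagrange interpolation at the spectrum then yields the
   spectral projections. *)

section \<open>The sequence space\<close>

definition sep_norm_sq :: "'j set \<Rightarrow> ('j \<Rightarrow> complex) \<Rightarrow> real" where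
  "sep_norm_sq J x = (\<Sum>\<^sub>\<infinity>i\<in>J. (cmod (x i))^2)"

lemma sep_l2_outside: "x \<in> sep_l2 J \<Longrightarrow> i \<notin> J \<Longrightarrow> x i = 0"
  by (simp add: sep_l2_def)

lemma sep_l2_summable: "x \<in> sep_l2 J \<Longrightarrow> (\<lambda>i. (cmod (x i))^2) summable_on J"
  by (simp add: sep_l2_def)

lemma sep_l2_zero [simp]: "(\<lambda>_. 0) \<in> sep_l2 J"
  by (simp add: sep_l2_def)

lemma norm_add_sq_le: "(cmod (a + b))^2 \<le> 2 * (cmod a)^2 + 2 * (cmod b)^2"
proof -
  have "(cmod (a + b))^2 \<le> (cmod a + cmod b)^2"
    by (simp add: power_mono norm_triangle_ineq)
  also have "\<dots> \<le> 2 * (cmod a)^2 + 2 * (cmod b)^2"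
    using sum_squares_bound[of "cmod a" "cmod b"] by (simp add: power2_sum)
  finally show ?thesis .
qed

lemma sep_l2_lincomb [intro]:
  assumes "x \<in> sep_l2 J" "y \<in> sep_l2 J"
  shows "(\<lambda>i. a * x i + b * y i) \<in> sep_l2 J"
proof -
  have bound: "(\<lambda>i. 2 * (cmod a)^2 * (cmod (x i))^2 + 2 * (cmod b)^2 * (cmod (y i))^2)
      summable_on J"
    using assms by (intro summable_on_add summable_on_cmult_right sep_l2_summable)
  have "(\<lambda>i. (cmod (a * x i + b * y i))^2) summable_on J"
  proof (rule summable_on_comparison_test[OF bound])
    fix i
    show "(cmod (a * x i + b * y i))^2
        \<le> 2 * (cmod a)^2 * (cmod (x i))^2 + 2 * (cmod b)^2 * (cmod (y i))^2"
      using norm_add_sq_le[of "a * x i" "b * y i"] by (simp add: norm_mult power_mult_distrib)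
  qed simp
  thus ?thesis using assms by (simp add: sep_l2_def)
qed

lemma sep_l2_scale [intro]: "x \<in> sep_l2 J \<Longrightarrow> (\<lambda>i. a * x i) \<in> sep_l2 J"
  using sep_l2_lincomb[of x J x a 0] by simp

lemma sep_l2_add [intro]: "x \<in> sep_l2 J \<Longrightarrow> y \<in> sep_l2 J \<Longrightarrow> (\<lambda>i. x i + y i) \<in> sep_l2 J"
  using sep_l2_lincomb[of x J y 1 1] by simp

lemma sep_l2_diff [intro]: "x \<in> sep_l2 J \<Longrightarrow> y \<in> sep_l2 J \<Longrightarrow> (\<lambda>i. x i - y i) \<in> sep_l2 J"
  using sep_l2_lincomb[of x J y 1 "-1"] by simp

lemma sep_l2_sum [intro]:
  "finite S \<Longrightarrow> (\<And>s. s \<in> S \<Longrightarrow> f s \<in> sep_l2 J) \<Longrightarrow> (\<lambda>i. \<Sum>s\<in>S. f s i) \<in> sep_l2 J"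
  by (induction S rule: finite_induct) auto

lemma sep_inner_summable:
  assumes "x \<in> sep_l2 J" "y \<in> sep_l2 J"
  shows "(\<lambda>i. cnj (x i) * y i) summable_on J"
proof -
  have bound: "(\<lambda>i. (cmod (x i))^2 + (cmod (y i))^2) summable_on J"
    using assms by (intro summable_on_add sep_l2_summable)
  have "(\<lambda>i. norm (cnj (x i) * y i)) summable_on J"
  proof (rule summable_on_comparison_test[OF bound])
    fix i
    have "2 * (cmod (x i) * cmod (y i)) \<le> (cmod (x i))^2 + (cmod (y i))^2"
      using sum_squares_bound[of "cmod (x i)" "cmod (y i)"] by (simp only: mult.assoc)
    moreover have "0 \<le> cmod (x i) * cmod (y i)" by simp
    moreover have "norm (cnj (x i) * y i) = cmod (x i) * cmod (y i)" by (simp add: norm_mult)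
    ultimately show "norm (cnj (x i) * y i) \<le> (cmod (x i))^2 + (cmod (y i))^2"
      by linarith
  qed simp
  thus ?thesis by (simp only: summable_on_iff_abs_summable_on_complex)
qed

lemma sep_norm_sq_nonneg: "0 \<le> sep_norm_sq J x"
  unfolding sep_norm_sq_def by (simp add: infsum_nonneg)

lemma sep_inner_self: "x \<in> sep_l2 J \<Longrightarrow> sep_inner J x x = complex_of_real (sep_norm_sq J x)"
proof -
  assume x: "x \<in> sep_l2 J"
  have "sep_inner J x x = (\<Sum>\<^sub>\<infinity>i\<in>J. complex_of_real ((cmod (x i))^2))"
    unfolding sep_inner_def by (intro infsum_cong) (simp only: complex_norm_square mult.commute)
  also have "\<dots> = complex_of_real (sep_norm_sq J x)"
    unfolding sep_norm_sq_def
    using has_sum_of_real[OF has_sum_infsum[OF sep_l2_summable[OF x]], where 'a=complex]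
    by (simp add: infsumI)
  finally show ?thesis .
qed

lemma sep_norm_sqrt: "sep_norm J x = sqrt (sep_norm_sq J x)"
  by (simp add: sep_norm_def sep_norm_sq_def)

lemma sep_norm_sq_eq: "sep_norm_sq J x = (sep_norm J x)^2"
  using sep_norm_sq_nonneg[of J x] by (simp add: sep_norm_sqrt)

lemma sep_norm_nonneg: "0 \<le> sep_norm J x"
  using sep_norm_sq_nonneg[of J x] by (simp add: sep_norm_sqrt)

lemma sep_norm_sq_zeroD:
  assumes x: "x \<in> sep_l2 J" and zero: "sep_norm_sq J x = 0"
  shows "x = (\<lambda>_. 0)"
proof
  fix i
  show "x i = 0"
  proof (cases "i \<in> J")
    case True
    then have "(cmod (x i))^2 = 0"
      using nonneg_infsum_le_0D[of "\<lambda>i. (cmod (x i))^2" J i] zero sep_l2_summable[OF x]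
      by (simp add: sep_norm_sq_def)
    thus ?thesis by simp
  qed (rule sep_l2_outside[OF x])
qed

lemma sep_norm_zeroD: "x \<in> sep_l2 J \<Longrightarrow> sep_norm J x = 0 \<Longrightarrow> x = (\<lambda>_. 0)"
  using sep_norm_sq_zeroD[of x J] sep_norm_sq_eq[of J x] by simp

lemma sep_norm_zero [simp]: "sep_norm J (\<lambda>_. 0) = 0"
  by (simp add: sep_norm_def)

lemma sep_inner_lincomb_right:
  assumes "x \<in> sep_l2 J" "y \<in> sep_l2 J" "z \<in> sep_l2 J"
  shows "sep_inner J x (\<lambda>i. a * y i + b * z i) = a * sep_inner J x y + b * sep_inner J x z"
proof -
  have "sep_inner J x (\<lambda>i. a * y i + b * z i) =
      (\<Sum>\<^sub>\<infinity>i\<in>J. a * (cnj (x i) * y i) + b * (cnj (x i) * z i))"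
    unfolding sep_inner_def by (intro infsum_cong) (simp add: algebra_simps)
  also have "\<dots> = (\<Sum>\<^sub>\<infinity>i\<in>J. a * (cnj (x i) * y i)) + (\<Sum>\<^sub>\<infinity>i\<in>J. b * (cnj (x i) * z i))"
    using assms by (intro infsum_add summable_on_cmult_right sep_inner_summable)
  also have "\<dots> = a * sep_inner J x y + b * sep_inner J x z"
    unfolding sep_inner_def using assms by (simp add: infsum_cmult_right sep_inner_summable)
  finally show ?thesis .
qed

lemma sep_inner_commute: "sep_inner J y x = cnj (sep_inner J x y)"
  unfolding sep_inner_def infsum_cnj[symmetric] by (simp add: mult.commute)

lemma sep_inner_lincomb_left:
  assumes "x \<in> sep_l2 J" "y \<in> sep_l2 J" "z \<in> sep_l2 J"
  shows "sep_inner J (\<lambda>i. a * x i + b * y i) z = cnj a * sep_inner J x z + cnj b * sep_inner J y z"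
  using sep_inner_lincomb_right[OF assms(3,1,2), of a b] sep_inner_commute
  by (metis complex_cnj_add complex_cnj_mult)

lemma sep_inner_diff_right:
  "x \<in> sep_l2 J \<Longrightarrow> y \<in> sep_l2 J \<Longrightarrow> z \<in> sep_l2 J \<Longrightarrow>
   sep_inner J x (\<lambda>i. y i - z i) = sep_inner J x y - sep_inner J x z"
  using sep_inner_lincomb_right[of x J y z 1 "-1"] by simp

lemma sep_inner_diff_left:
  "x \<in> sep_l2 J \<Longrightarrow> y \<in> sep_l2 J \<Longrightarrow> z \<in> sep_l2 J \<Longrightarrow>
   sep_inner J (\<lambda>i. x i - y i) z = sep_inner J x z - sep_inner J y z"
  using sep_inner_lincomb_left[of x J y z 1 "-1"] by simp

lemma sep_inner_add_right:
  "x \<in> sep_l2 J \<Longrightarrow> y \<in> sep_l2 J \<Longrightarrow> z \<in> sep_l2 J \<Longrightarrow>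
   sep_inner J x (\<lambda>i. y i + z i) = sep_inner J x y + sep_inner J x z"
  using sep_inner_lincomb_right[of x J y z 1 1] by simp

lemma sep_inner_add_left:
  "x \<in> sep_l2 J \<Longrightarrow> y \<in> sep_l2 J \<Longrightarrow> z \<in> sep_l2 J \<Longrightarrow>
   sep_inner J (\<lambda>i. x i + y i) z = sep_inner J x z + sep_inner J y z"
  using sep_inner_lincomb_left[of x J y z 1 1] by simp

lemma sep_inner_scale_right:
  "x \<in> sep_l2 J \<Longrightarrow> y \<in> sep_l2 J \<Longrightarrow> sep_inner J x (\<lambda>i. a * y i) = a * sep_inner J x y"
  using sep_inner_lincomb_right[of x J y y a 0] by simp

lemma sep_inner_scale_left:
  "x \<in> sep_l2 J \<Longrightarrow> y \<in> sep_l2 J \<Longrightarrow> sep_inner J (\<lambda>i. a * x i) y = cnj a * sep_inner J x y"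
  using sep_inner_lincomb_left[of x J x y a 0] by simp

lemma sep_inner_sum_right:
  "finite S \<Longrightarrow> x \<in> sep_l2 J \<Longrightarrow> (\<And>s. s \<in> S \<Longrightarrow> f s \<in> sep_l2 J) \<Longrightarrow>
   sep_inner J x (\<lambda>i. \<Sum>s\<in>S. f s i) = (\<Sum>s\<in>S. sep_inner J x (f s))"
proof (induction S rule: finite_induct)
  case (insert s S)
  have "sep_inner J x (\<lambda>i. \<Sum>s\<in>insert s S. f s i) = sep_inner J x (\<lambda>i. f s i + (\<Sum>s\<in>S. f s i))"
    using insert by simp
  also have "\<dots> = sep_inner J x (f s) + sep_inner J x (\<lambda>i. (\<Sum>s\<in>S. f s i))"
    using insert by (intro sep_inner_add_right) auto
  finally show ?case using insert by simp
qed (simp add: sep_inner_def)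

lemma sep_inner_sum_left:
  "finite S \<Longrightarrow> x \<in> sep_l2 J \<Longrightarrow> (\<And>s. s \<in> S \<Longrightarrow> f s \<in> sep_l2 J) \<Longrightarrow>
   sep_inner J (\<lambda>i. \<Sum>s\<in>S. f s i) x = (\<Sum>s\<in>S. sep_inner J (f s) x)"
  using sep_inner_sum_right[of S x J f] sep_inner_commute
  by (metis (no_types, lifting) cnj_sum sum.cong)

lemma sep_inner_Cauchy_Schwarz:
  assumes x: "x \<in> sep_l2 J" and y: "y \<in> sep_l2 J"
  shows "cmod (sep_inner J x y) \<le> sep_norm J x * sep_norm J y"
proof (cases "sep_norm_sq J y = 0")
  case True
  then have "y = (\<lambda>_. 0)" using sep_norm_sq_zeroD y by blast
  thus ?thesis by (simp add: sep_inner_def)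
next
  case False
  define a where "a = sep_norm_sq J y"
  have a: "a > 0" using False sep_norm_sq_nonneg a_def by (metis order_le_less)
  define c where "c = sep_inner J y x"
  define z where "z = (\<lambda>i. 1 * x i + (- (c / a)) * y i)"
  have z: "z \<in> sep_l2 J" unfolding z_def using x y by blast
  have "sep_inner J z z = sep_inner J x z - (cnj (c/a)) * sep_inner J y z"
    unfolding z_def using x y z[unfolded z_def] by (subst sep_inner_lincomb_left) auto
  also have "sep_inner J x z = sep_inner J x x - (c/a) * sep_inner J x y"
    unfolding z_def using x y by (subst sep_inner_lincomb_right) auto
  also have "sep_inner J y z = sep_inner J y x - (c/a) * sep_inner J y y"
    unfolding z_def using x y by (subst sep_inner_lincomb_right) auto
  finally have "sep_inner J z z
      = sep_norm_sq J x - (c/a) * cnj c - cnj (c/a) * c + cnj (c/a) * (c/a) * a"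
    using x y by (simp add: sep_inner_self c_def sep_inner_commute[of J x y] a_def algebra_simps)
  also have "cnj (c/a) * (c/a) * a = c * cnj c / a" using a by (simp add: field_simps)
  finally have "sep_inner J z z = sep_norm_sq J x - c * cnj c / a" by (simp add: field_simps)
  moreover have "c * cnj c = complex_of_real ((cmod c)^2)" by (simp only: complex_norm_square)
  ultimately have "complex_of_real (sep_norm_sq J z)
      = complex_of_real (sep_norm_sq J x - (cmod c)^2 / a)"
    using sep_inner_self[OF z] by simp
  hence "sep_norm_sq J z = sep_norm_sq J x - (cmod c)^2 / a"
    using of_real_eq_iff by blast
  hence "(cmod c)^2 / a \<le> sep_norm_sq J x" using sep_norm_sq_nonneg[of J z] by linarith
  hence "(cmod c)^2 \<le> sep_norm_sq J x * sep_norm_sq J y" using a a_def by (simp add: field_simps)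
  hence "(cmod c)^2 \<le> (sep_norm J x * sep_norm J y)^2"
    by (simp add: sep_norm_sq_eq power_mult_distrib)
  hence "cmod c \<le> sep_norm J x * sep_norm J y"
    using sep_norm_nonneg by (meson mult_nonneg_nonneg power2_le_imp_le)
  thus ?thesis unfolding c_def using sep_inner_commute[of J x y] by simp
qed

lemma sep_norm_sq_add:
  assumes "x \<in> sep_l2 J" "y \<in> sep_l2 J"
  shows "sep_norm_sq J (\<lambda>i. x i + y i)
      = sep_norm_sq J x + sep_norm_sq J y + 2 * Re (sep_inner J x y)"
proof -
  have "complex_of_real (sep_norm_sq J (\<lambda>i. x i + y i))
      = sep_inner J (\<lambda>i. x i + y i) (\<lambda>i. x i + y i)"
    using assms by (simp add: sep_inner_self sep_l2_add)
  also have "\<dots> = sep_inner J x x + sep_inner J x y + (sep_inner J y x + sep_inner J y y)"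
    using assms by (simp add: sep_inner_add_left sep_inner_add_right sep_l2_add)
  also have "\<dots> = complex_of_real (sep_norm_sq J x + sep_norm_sq J y + 2 * Re (sep_inner J x y))"
    using assms by (simp add: sep_inner_self sep_inner_commute[of J y x] complex_eq_iff)
  finally show ?thesis using of_real_eq_iff by blast
qed

lemma sep_norm_triangle:
  assumes "x \<in> sep_l2 J" "y \<in> sep_l2 J"
  shows "sep_norm J (\<lambda>i. x i + y i) \<le> sep_norm J x + sep_norm J y"
proof -
  have "Re (sep_inner J x y) \<le> sep_norm J x * sep_norm J y"
    using sep_inner_Cauchy_Schwarz[OF assms] complex_Re_le_cmod order_trans by blast
  hence "(sep_norm J (\<lambda>i. x i + y i))^2 \<le> (sep_norm J x + sep_norm J y)^2"
    using sep_norm_sq_add[OF assms] by (simp add: sep_norm_sq_eq power2_sum)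
  thus ?thesis using sep_norm_nonneg by (meson add_nonneg_nonneg power2_le_imp_le)
qed

lemma sep_norm_sq_scale: "sep_norm_sq J (\<lambda>i. a * x i) = (cmod a)^2 * sep_norm_sq J x"
  unfolding sep_norm_sq_def by (simp add: norm_mult power_mult_distrib infsum_cmult_right')

lemma sep_norm_scale: "sep_norm J (\<lambda>i. a * x i) = cmod a * sep_norm J x"
  by (simp add: sep_norm_sqrt sep_norm_sq_scale real_sqrt_mult)

lemma sep_norm_minus_commute: "sep_norm J (\<lambda>i. x i - y i) = sep_norm J (\<lambda>i. y i - x i)"
  unfolding sep_norm_def by (simp add: norm_minus_commute)

lemma sep_norm_triangle_diff:
  assumes "x \<in> sep_l2 J" "y \<in> sep_l2 J" "z \<in> sep_l2 J"
  shows "sep_norm J (\<lambda>i. x i - z i) \<le> sep_norm J (\<lambda>i. x i - y i) + sep_norm J (\<lambda>i. y i - z i)"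
  using sep_norm_triangle[of "\<lambda>i. x i - y i" J "\<lambda>i. y i - z i"] assms by auto

lemma sep_l2_zero_if_norm_le:
  assumes "x \<in> sep_l2 J" "\<And>e. e > 0 \<Longrightarrow> sep_norm J x \<le> e"
  shows "x = (\<lambda>_. 0)"
proof -
  have "sep_norm J x = 0"
  proof (rule ccontr)
    assume "sep_norm J x \<noteq> 0"
    then have "sep_norm J x > 0" using sep_norm_nonneg[of J x] by linarith
    then show False using assms(2)[of "sep_norm J x / 2"] by simp
  qed
  thus ?thesis using sep_norm_zeroD assms(1) by blast
qed

definition unit_vec :: "'j \<Rightarrow> ('j \<Rightarrow> complex)" where
  "unit_vec j = (\<lambda>i. if i = j then 1 else 0)"

definition restrict_vec :: "'j set \<Rightarrow> ('j \<Rightarrow> complex) \<Rightarrow> ('j \<Rightarrow> complex)" where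
  "restrict_vec F z = (\<lambda>i. if i \<in> F then z i else 0)"

lemma unit_vec_l2: "j \<in> J \<Longrightarrow> unit_vec j \<in> sep_l2 J"
proof -
  assume j: "j \<in> J"
  have "(\<lambda>i. (cmod (unit_vec j i))^2) summable_on J"
    by (rule finite_nonzero_values_imp_summable_on) (auto simp: unit_vec_def)
  thus ?thesis using j by (auto simp: sep_l2_def unit_vec_def)
qed

lemma restrict_vec_sum: "finite F \<Longrightarrow> restrict_vec F z = (\<lambda>i. \<Sum>j\<in>F. z j * unit_vec j i)"
  by (auto simp: restrict_vec_def unit_vec_def if_distrib cong: if_cong)

lemma sep_l2_tail_small:
  assumes z: "z \<in> sep_l2 J" and e: "e > 0"
  obtains F where "finite F" "F \<subseteq> J" "sep_norm_sq J (\<lambda>i. z i - restrict_vec F z i) \<le> e"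
proof -
  let ?f = "\<lambda>i. (cmod (z i))^2"
  obtain F where F: "finite F" "F \<subseteq> J" "dist (sum ?f F) (infsum ?f J) \<le> e"
    using infsum_finite_approximation[OF sep_l2_summable[OF z] e] by blast
  let ?head = "\<lambda>i. if i \<in> F then ?f i else 0"
  have head: "?head summable_on J"
    by (rule finite_nonzero_values_imp_summable_on) (use F in auto)
  have tail: "(\<lambda>i. (cmod (z i - restrict_vec F z i))^2) summable_on J"
    by (rule summable_on_comparison_test[OF sep_l2_summable[OF z]]) (auto simp: restrict_vec_def)
  have split: "?f = (\<lambda>i. ?head i + (cmod (z i - restrict_vec F z i))^2)"
    by (auto simp: restrict_vec_def)
  have "infsum ?f J = infsum ?head J + sep_norm_sq J (\<lambda>i. z i - restrict_vec F z i)"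
    unfolding sep_norm_sq_def by (subst split) (intro infsum_add head tail)
  also have "infsum ?head J = sum ?f F"
  proof -
    have "infsum ?head J = infsum ?head F" by (rule infsum_cong_neutral) (use F in auto)
    thus ?thesis using F by simp
  qed
  finally show ?thesis using F that by (auto simp: dist_real_def)
qed

section \<open>Bounded and symmetric operators\<close>

lemma bounded_op_l2: "sep_bounded_op J T \<Longrightarrow> x \<in> sep_l2 J \<Longrightarrow> T x \<in> sep_l2 J"
  by (simp add: sep_bounded_op_def)

lemma bounded_op_linear: "sep_bounded_op J T \<Longrightarrow> x \<in> sep_l2 J \<Longrightarrow> y \<in> sep_l2 J \<Longrightarrow>
   T (\<lambda>i. a * x i + b * y i) = (\<lambda>i. a * T x i + b * T y i)"
  by (simp add: sep_bounded_op_def)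

lemma bounded_op_outside: "sep_bounded_op J T \<Longrightarrow> x \<notin> sep_l2 J \<Longrightarrow> T x = (\<lambda>_. 0)"
  by (simp add: sep_bounded_op_def)

lemma bounded_op_bound:
  assumes "sep_bounded_op J T"
  obtains c where "c \<ge> 0" "\<And>x. x \<in> sep_l2 J \<Longrightarrow> sep_norm J (T x) \<le> c * sep_norm J x"
proof -
  from assms obtain c where c: "\<And>x. x \<in> sep_l2 J \<Longrightarrow> sep_norm J (T x) \<le> c * sep_norm J x"
    unfolding sep_bounded_op_def by blast
  have "sep_norm J (T x) \<le> max c 0 * sep_norm J x" if "x \<in> sep_l2 J" for x
    using c[OF that] mult_right_mono[OF max.cobounded1[of c 0] sep_norm_nonneg[of J x]] by linarith
  thus ?thesis using that[of "max c 0"] by auto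
qed

lemma bounded_op_scale:
  "sep_bounded_op J T \<Longrightarrow> x \<in> sep_l2 J \<Longrightarrow> T (\<lambda>i. a * x i) = (\<lambda>i. a * T x i)"
  using bounded_op_linear[of J T x x a 0] by simp

lemma bounded_op_zero: "sep_bounded_op J T \<Longrightarrow> T (\<lambda>_. 0) = (\<lambda>_. 0)"
  using bounded_op_scale[of J T "\<lambda>_. 0" 0] by simp

lemma bounded_op_add: "sep_bounded_op J T \<Longrightarrow> x \<in> sep_l2 J \<Longrightarrow> y \<in> sep_l2 J \<Longrightarrow>
   T (\<lambda>i. x i + y i) = (\<lambda>i. T x i + T y i)"
  using bounded_op_linear[of J T x y 1 1] by simp

lemma bounded_op_diff: "sep_bounded_op J T \<Longrightarrow> x \<in> sep_l2 J \<Longrightarrow> y \<in> sep_l2 J \<Longrightarrow>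
   T (\<lambda>i. x i - y i) = (\<lambda>i. T x i - T y i)"
  using bounded_op_linear[of J T x y 1 "-1"] by simp

lemma bounded_op_sum:
  assumes T: "sep_bounded_op J T" and "finite S" "\<And>s. s \<in> S \<Longrightarrow> f s \<in> sep_l2 J"
  shows "T (\<lambda>i. \<Sum>s\<in>S. f s i) = (\<lambda>i. \<Sum>s\<in>S. T (f s) i)"
  using assms(2,3)
proof (induction S rule: finite_induct)
  case empty thus ?case by (simp add: bounded_op_zero[OF T])
next
  case (insert s S)
  have "T (\<lambda>i. \<Sum>s\<in>insert s S. f s i) = T (\<lambda>i. f s i + (\<Sum>s\<in>S. f s i))"
    using insert by simp
  also have "\<dots> = (\<lambda>i. T (f s) i + T (\<lambda>i. \<Sum>s\<in>S. f s i) i)"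
    using insert by (intro bounded_op_add[OF T]) auto
  finally show ?case using insert by simp
qed

lemma bounded_opI:
  assumes "\<And>x. x \<in> sep_l2 J \<Longrightarrow> T x \<in> sep_l2 J"
    and "\<And>x y a b. x \<in> sep_l2 J \<Longrightarrow> y \<in> sep_l2 J \<Longrightarrow>
           T (\<lambda>i. a * x i + b * y i) = (\<lambda>i. a * T x i + b * T y i)"
    and "\<And>x. x \<in> sep_l2 J \<Longrightarrow> sep_norm J (T x) \<le> c * sep_norm J x"
    and "\<And>x. x \<notin> sep_l2 J \<Longrightarrow> T x = (\<lambda>_. 0)"
  shows "sep_bounded_op J T"
  using assms unfolding sep_bounded_op_def by blast

lemma bounded_op_comp:
  assumes T: "sep_bounded_op J T" and S: "sep_bounded_op J S"
  shows "sep_bounded_op J (\<lambda>x. T (S x))"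
proof -
  obtain c where c: "c \<ge> 0" "\<And>x. x \<in> sep_l2 J \<Longrightarrow> sep_norm J (T x) \<le> c * sep_norm J x"
    using bounded_op_bound[OF T] by blast
  obtain d where d: "\<And>x. x \<in> sep_l2 J \<Longrightarrow> sep_norm J (S x) \<le> d * sep_norm J x"
    using bounded_op_bound[OF S] by blast
  show ?thesis
  proof (rule bounded_opI[where c="c*d"])
    fix x assume x: "x \<in> sep_l2 J"
    have "sep_norm J (T (S x)) \<le> c * sep_norm J (S x)" using c bounded_op_l2[OF S x] by blast
    also have "\<dots> \<le> c * (d * sep_norm J x)" using d x c(1) by (simp add: mult_left_mono)
    finally show "sep_norm J (T (S x)) \<le> c * d * sep_norm J x" by simp
  qed (use T S in \<open>auto simp: bounded_op_l2 bounded_op_linear bounded_op_outside bounded_op_zero\<close>)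
qed

lemma bounded_op_lincomb:
  assumes T: "sep_bounded_op J T" and S: "sep_bounded_op J S"
  shows "sep_bounded_op J (\<lambda>x i. a * T x i + b * S x i)"
proof -
  obtain c where c: "\<And>x. x \<in> sep_l2 J \<Longrightarrow> sep_norm J (T x) \<le> c * sep_norm J x"
    using bounded_op_bound[OF T] by blast
  obtain d where d: "\<And>x. x \<in> sep_l2 J \<Longrightarrow> sep_norm J (S x) \<le> d * sep_norm J x"
    using bounded_op_bound[OF S] by blast
  show ?thesis
  proof (rule bounded_opI[where c="cmod a * c + cmod b * d"])
    fix x assume x: "x \<in> sep_l2 J"
    have "sep_norm J (\<lambda>i. a * T x i + b * S x i)
        \<le> sep_norm J (\<lambda>i. a * T x i) + sep_norm J (\<lambda>i. b * S x i)"
      using x T S by (intro sep_norm_triangle) (auto simp: bounded_op_l2)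
    also have "\<dots> = cmod a * sep_norm J (T x) + cmod b * sep_norm J (S x)"
      by (simp add: sep_norm_scale)
    also have "\<dots> \<le> cmod a * (c * sep_norm J x) + cmod b * (d * sep_norm J x)"
      using c[OF x] d[OF x] by (intro add_mono mult_left_mono) auto
    finally show "sep_norm J (\<lambda>i. a * T x i + b * S x i) \<le> (cmod a * c + cmod b * d) * sep_norm J x"
      by (simp add: algebra_simps)
  next
    fix x y :: "'a \<Rightarrow> complex" and a' b' assume x: "x \<in> sep_l2 J" and y: "y \<in> sep_l2 J"
    show "(\<lambda>i. a * T (\<lambda>i. a' * x i + b' * y i) i + b * S (\<lambda>i. a' * x i + b' * y i) i) =
          (\<lambda>i. a' * (a * T x i + b * S x i) + b' * (a * T y i + b * S y i))"
      using bounded_op_linear[OF T x y] bounded_op_linear[OF S x y] by (simp add: algebra_simps)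
  qed (use T S in \<open>auto simp: bounded_op_l2 bounded_op_outside intro!: sep_l2_lincomb\<close>)
qed

lemma bounded_op_sum_ops:
  assumes "finite S" "\<And>s. s \<in> S \<Longrightarrow> sep_bounded_op J (T s)"
  shows "sep_bounded_op J (\<lambda>x i. \<Sum>s\<in>S. c s * T s x i)"
  using assms
proof (induction S rule: finite_induct)
  case empty
  show ?case by (rule bounded_opI[where c=0]) (auto simp: sep_norm_nonneg)
next
  case (insert s S)
  have "sep_bounded_op J (\<lambda>x i. c s * T s x i + 1 * (\<Sum>s\<in>S. c s * T s x i))"
    using insert by (intro bounded_op_lincomb) auto
  thus ?case using insert by simp
qed

lemma bounded_op_restrict_vec:
  assumes U: "sep_bounded_op J U" and F: "finite F" "F \<subseteq> J"
  shows "U (restrict_vec F z) = (\<lambda>i. \<Sum>j\<in>F. z j * U (unit_vec j) i)"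
proof -
  have "U (restrict_vec F z) = (\<lambda>i. \<Sum>j\<in>F. U (\<lambda>i. z j * unit_vec j i) i)"
    unfolding restrict_vec_sum[OF F(1)]
    by (rule bounded_op_sum[OF U F(1)]) (use F in \<open>auto intro!: sep_l2_scale unit_vec_l2\<close>)
  also have "\<dots> = (\<lambda>i. \<Sum>j\<in>F. z j * U (unit_vec j) i)"
    using F by (intro ext sum.cong refl) (auto simp: bounded_op_scale[OF U] unit_vec_l2)
  finally show ?thesis .
qed

text \<open>The two operators agree on finitely supported vectors, and every vector has small tails.\<close>

lemma bounded_op_eqI:
  assumes T: "sep_bounded_op J T" and S: "sep_bounded_op J S"
    and eq: "\<And>j. j \<in> J \<Longrightarrow> T (unit_vec j) = S (unit_vec j)"
  shows "T = S"
proof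
  fix z
  show "T z = S z"
  proof (cases "z \<in> sep_l2 J")
    case False thus ?thesis using T S by (simp add: bounded_op_outside)
  next
    case z: True
    obtain c where c: "c \<ge> 0" "\<And>x. x \<in> sep_l2 J \<Longrightarrow> sep_norm J (T x) \<le> c * sep_norm J x"
      using bounded_op_bound[OF T] by blast
    obtain d where d: "d \<ge> 0" "\<And>x. x \<in> sep_l2 J \<Longrightarrow> sep_norm J (S x) \<le> d * sep_norm J x"
      using bounded_op_bound[OF S] by blast
    have "(\<lambda>i. T z i - S z i) = (\<lambda>_. 0)"
    proof (rule sep_l2_zero_if_norm_le)
      show "(\<lambda>i. T z i - S z i) \<in> sep_l2 J" using T S z by (auto simp: bounded_op_l2)
      fix e :: real assume e: "e > 0"
      obtain F where F: "finite F" "F \<subseteq> J"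
        and tail: "sep_norm_sq J (\<lambda>i. z i - restrict_vec F z i) \<le> (e / (c + d + 1))^2"
        using sep_l2_tail_small[OF z, of "(e / (c + d + 1))^2"] e c d by auto
      define w where "w = (\<lambda>i. z i - restrict_vec F z i)"
      have head: "restrict_vec F z \<in> sep_l2 J"
        unfolding restrict_vec_sum[OF F(1)] using F
        by (intro sep_l2_sum sep_l2_scale unit_vec_l2) auto
      have w: "w \<in> sep_l2 J" unfolding w_def using z head by auto
      have "sep_norm J w \<le> e / (c + d + 1)"
        using tail e c d power2_le_imp_le[of "sep_norm J w" "e / (c + d + 1)"]
        by (simp add: sep_norm_sq_eq w_def)
      have "T (restrict_vec F z) = S (restrict_vec F z)"
        unfolding bounded_op_restrict_vec[OF T F] bounded_op_restrict_vec[OF S F]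
        using F eq by (intro ext sum.cong refl) auto
      then have "(\<lambda>i. T z i - S z i) = (\<lambda>i. T w i + (-1) * S w i)"
        unfolding w_def using z head by (simp add: bounded_op_diff[OF T] bounded_op_diff[OF S])
      then have "sep_norm J (\<lambda>i. T z i - S z i) \<le> sep_norm J (T w) + sep_norm J (\<lambda>i. (-1) * S w i)"
        using sep_norm_triangle[OF bounded_op_l2[OF T w] sep_l2_scale[OF bounded_op_l2[OF S w]]]
        by presburger
      also have "\<dots> \<le> (c + d + 1) * sep_norm J w"
        using c(2)[OF w] d(2)[OF w] sep_norm_nonneg[of J w] sep_norm_scale[of J "-1" "S w"]
        by (simp add: algebra_simps)
      also have "\<dots> \<le> (c + d + 1) * (e / (c + d + 1))"
        using \<open>sep_norm J w \<le> e / (c + d + 1)\<close> c d by (intro mult_left_mono) auto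
      also have "\<dots> = e" using c d by simp
      finally show "sep_norm J (\<lambda>i. T z i - S z i) \<le> e" .
    qed
    thus ?thesis by (auto simp: fun_eq_iff)
  qed
qed

definition sep_symmetric :: "'j set \<Rightarrow> (('j \<Rightarrow> complex) \<Rightarrow> ('j \<Rightarrow> complex)) \<Rightarrow> bool" where
  "sep_symmetric J T \<longleftrightarrow> (\<forall>x\<in>sep_l2 J. \<forall>y\<in>sep_l2 J. sep_inner J (T x) y = sep_inner J x (T y))"

lemma sep_observable_iff: "sep_observable J T \<longleftrightarrow> sep_bounded_op J T \<and> sep_symmetric J T"
  by (simp add: sep_observable_def sep_symmetric_def)

lemma sep_symmetricD:
  "sep_symmetric J T \<Longrightarrow> x \<in> sep_l2 J \<Longrightarrow> y \<in> sep_l2 J \<Longrightarrow> sep_inner J (T x) y = sep_inner J x (T y)"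
  by (simp add: sep_symmetric_def)

section \<open>Completeness and the bounded inverse of symmetric bijections\<close>

definition sep_dist :: "'j set \<Rightarrow> ('j \<Rightarrow> complex) \<Rightarrow> ('j \<Rightarrow> complex) \<Rightarrow> real" where
  "sep_dist J x y = sep_norm J (\<lambda>i. x i - y i)"

lemma Metric_space_sep_l2: "Metric_space (sep_l2 J) (sep_dist J)"
proof
  fix x y z :: "'a \<Rightarrow> complex"
  show "0 \<le> sep_dist J x y" by (simp add: sep_dist_def sep_norm_nonneg)
  show "sep_dist J x y = sep_dist J y x"
    using sep_norm_minus_commute[of J x y] by (simp add: sep_dist_def)
  assume x: "x \<in> sep_l2 J" and y: "y \<in> sep_l2 J"
  show "(sep_dist J x y = 0) = (x = y)"
  proof
    assume "sep_dist J x y = 0"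
    hence "(\<lambda>i. x i - y i) = (\<lambda>_. 0)" using sep_norm_zeroD x y by (auto simp: sep_dist_def)
    thus "x = y" by (auto simp: fun_eq_iff)
  qed (simp add: sep_dist_def)
  assume z: "z \<in> sep_l2 J"
  show "sep_dist J x z \<le> sep_dist J x y + sep_dist J y z"
    unfolding sep_dist_def using sep_norm_triangle_diff[OF x y z] .
qed

lemma norm_coord_le_sep_norm:
  assumes x: "x \<in> sep_l2 J"
  shows "cmod (x i) \<le> sep_norm J x"
proof (cases "i \<in> J")
  case True
  have "sum (\<lambda>i. (cmod (x i))^2) {i} \<le> sep_norm_sq J x"
    unfolding sep_norm_sq_def using True by (intro finite_sum_le_infsum sep_l2_summable[OF x]) auto
  hence "(cmod (x i))^2 \<le> (sep_norm J x)^2" by (simp add: sep_norm_sq_eq)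
  thus ?thesis using sep_norm_nonneg by (meson power2_le_imp_le)
qed (simp add: sep_l2_outside[OF x] sep_norm_nonneg)

text \<open>Fatou's lemma for the \<open>\<ell>\<^sup>2\<close> norm: a bound on the distances within the tail of a sequence
  survives the coordinatewise limit, because it holds for every finite partial sum.\<close>

lemma sep_dist_coordinatewise_limit:
  assumes l2: "\<And>n. \<sigma> n \<in> sep_l2 J"
    and close: "\<And>n m. N \<le> n \<Longrightarrow> N \<le> m \<Longrightarrow> sep_dist J (\<sigma> n) (\<sigma> m) < e"
    and lim: "\<And>i. (\<lambda>n. \<sigma> n i) \<longlonglongrightarrow> f i"
    and n: "N \<le> n"
  shows "(\<lambda>i. \<sigma> n i - f i) \<in> sep_l2 J" and "sep_norm J (\<lambda>i. \<sigma> n i - f i) \<le> e"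
proof -
  have e: "e > 0"
    using close[of N N] sep_norm_nonneg[of J "\<lambda>i. \<sigma> N i - \<sigma> N i"] unfolding sep_dist_def by linarith
  let ?g = "\<lambda>i. (cmod (\<sigma> n i - f i))^2"
  have partial: "sum ?g F \<le> e^2" if F: "finite F" "F \<subseteq> J" for F
  proof -
    have "(\<lambda>m. \<Sum>i\<in>F. (cmod (\<sigma> n i - \<sigma> m i))^2) \<longlonglongrightarrow> sum ?g F"
      by (intro tendsto_intros lim)
    moreover have "(\<Sum>i\<in>F. (cmod (\<sigma> n i - \<sigma> m i))^2) \<le> e^2" if m: "m \<ge> N" for m
    proof -
      have "(\<Sum>i\<in>F. (cmod (\<sigma> n i - \<sigma> m i))^2) \<le> sep_norm_sq J (\<lambda>i. \<sigma> n i - \<sigma> m i)"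
        unfolding sep_norm_sq_def using F l2 by (intro finite_sum_le_infsum sep_l2_summable) auto
      also have "\<dots> = (sep_dist J (\<sigma> n) (\<sigma> m))^2" by (simp add: sep_dist_def sep_norm_sq_eq)
      also have "\<dots> \<le> e^2"
        using close[OF n m] by (simp add: sep_dist_def power_mono sep_norm_nonneg)
      finally show ?thesis .
    qed
    ultimately show ?thesis using LIMSEQ_le_const2 by blast
  qed
  have summable: "?g summable_on J"
    by (rule nonneg_bdd_above_summable_on) (use partial in \<open>auto intro!: bdd_aboveI\<close>)
  have "\<sigma> n i - f i = 0" if "i \<notin> J" for i
  proof -
    have "(\<lambda>_. 0::complex) \<longlonglongrightarrow> f i" using lim[of i] sep_l2_outside[OF l2 that] by simp
    hence "f i = 0" using LIMSEQ_unique[OF tendsto_const] by metis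
    thus ?thesis using sep_l2_outside[OF l2 that] by simp
  qed
  with summable show "(\<lambda>i. \<sigma> n i - f i) \<in> sep_l2 J" by (simp add: sep_l2_def)
  have "(sep_norm J (\<lambda>i. \<sigma> n i - f i))^2 \<le> e^2"
    unfolding sep_norm_sq_eq[symmetric] sep_norm_sq_def
    by (rule infsum_le_finite_sums[OF summable partial])
  thus "sep_norm J (\<lambda>i. \<sigma> n i - f i) \<le> e" using e by (meson less_imp_le power2_le_imp_le)
qed

lemma mcomplete_sep_l2: "Metric_space.mcomplete (sep_l2 J) (sep_dist J)"
proof -
  interpret M: Metric_space "sep_l2 J" "sep_dist J" by (rule Metric_space_sep_l2)
  show ?thesis unfolding M.mcomplete_def
  proof (intro allI impI)
    fix \<sigma> :: "nat \<Rightarrow> 'a \<Rightarrow> complex"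
    assume C: "M.MCauchy \<sigma>"
    have l2: "\<sigma> n \<in> sep_l2 J" for n using C by (auto simp: M.MCauchy_def)
    have Cauchy: "\<exists>N. \<forall>n m. N \<le> n \<longrightarrow> N \<le> m \<longrightarrow> sep_dist J (\<sigma> n) (\<sigma> m) < e" if "e > 0" for e
      using C that by (auto simp: M.MCauchy_def)
    have "Cauchy (\<lambda>n. \<sigma> n i)" for i
    proof (rule metric_CauchyI)
      fix e :: real assume "e > 0"
      then obtain N where N: "\<And>n m. N \<le> n \<Longrightarrow> N \<le> m \<Longrightarrow> sep_dist J (\<sigma> n) (\<sigma> m) < e"
        using Cauchy by blast
      have "dist (\<sigma> n i) (\<sigma> m i) < e" if "N \<le> n" "N \<le> m" for n m
      proof -
        have "dist (\<sigma> n i) (\<sigma> m i) \<le> sep_dist J (\<sigma> n) (\<sigma> m)"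
          unfolding sep_dist_def dist_norm
          using norm_coord_le_sep_norm[OF sep_l2_diff[OF l2[of n] l2[of m]], of i] by simp
        with N[OF that] show ?thesis by linarith
      qed
      then show "\<exists>M. \<forall>n\<ge>M. \<forall>m\<ge>M. dist (\<sigma> n i) (\<sigma> m i) < e" by blast
    qed
    then have "\<forall>i. \<exists>l. (\<lambda>n. \<sigma> n i) \<longlonglongrightarrow> l"
      by (simp add: Cauchy_convergent_iff convergent_def)
    then obtain f where lim: "\<And>i. (\<lambda>n. \<sigma> n i) \<longlonglongrightarrow> f i" by metis
    have tail: "\<exists>N. \<forall>n\<ge>N. (\<lambda>i. \<sigma> n i - f i) \<in> sep_l2 J \<and> sep_norm J (\<lambda>i. \<sigma> n i - f i) \<le> e"
      if e: "e > 0" for e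
    proof -
      obtain N where "\<forall>n m. N \<le> n \<longrightarrow> N \<le> m \<longrightarrow> sep_dist J (\<sigma> n) (\<sigma> m) < e"
        using Cauchy[OF e] by blast
      then show ?thesis using sep_dist_coordinatewise_limit[OF l2 _ lim] by blast
    qed
    obtain N where "(\<lambda>i. \<sigma> N i - f i) \<in> sep_l2 J" using tail[of 1] by auto
    from sep_l2_diff[OF l2[of N] this] have f: "f \<in> sep_l2 J" by simp
    have "limitin M.mtopology \<sigma> f sequentially"
      unfolding M.limit_metric_sequentially
    proof (intro conjI f allI impI)
      fix e :: real assume e: "e > 0"
      then obtain N where "\<forall>n\<ge>N. sep_norm J (\<lambda>i. \<sigma> n i - f i) \<le> e / 2"
        using tail[of "e / 2"] by auto
      then have "\<forall>n\<ge>N. \<sigma> n \<in> sep_l2 J \<and> sep_dist J (\<sigma> n) f < e"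
        using l2 e unfolding sep_dist_def by force
      thus "\<exists>N. \<forall>n\<ge>N. \<sigma> n \<in> sep_l2 J \<and> sep_dist J (\<sigma> n) f < e" by blast
    qed
    thus "\<exists>x. limitin M.mtopology \<sigma> x sequentially" by blast
  qed
qed

lemma closedin_sep_inner_bounded:
  assumes U: "U \<subseteq> sep_l2 J"
  shows "closedin (Metric_space.mtopology (sep_l2 J) (sep_dist J))
           {y \<in> sep_l2 J. \<forall>x\<in>U. cmod (sep_inner J y x) \<le> k}" (is "closedin _ ?F")
proof -
  interpret M: Metric_space "sep_l2 J" "sep_dist J" by (rule Metric_space_sep_l2)
  show ?thesis unfolding M.closedin_metric
  proof (intro conjI allI impI)
    fix y assume y: "y \<in> sep_l2 J - ?F"
    then obtain x where x: "x \<in> U" and big: "cmod (sep_inner J y x) > k"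
      by (auto simp: not_le)
    have xl: "x \<in> sep_l2 J" using x U by auto
    define r where "r = (cmod (sep_inner J y x) - k) / (sep_norm J x + 1)"
    have r: "r > 0" unfolding r_def using big sep_norm_nonneg[of J x] by (intro divide_pos_pos) auto
    have far: "w \<notin> ?F" if w: "w \<in> M.mball y r" for w
    proof
      assume wF: "w \<in> ?F"
      have wl: "w \<in> sep_l2 J" and d: "sep_dist J y w < r" using w by auto
      have "sep_inner J y x - sep_inner J w x = sep_inner J (\<lambda>i. y i - w i) x"
        using y wl xl by (simp add: sep_inner_diff_left)
      hence "cmod (sep_inner J y x - sep_inner J w x) \<le> sep_dist J y w * sep_norm J x"
        using sep_inner_Cauchy_Schwarz[of "\<lambda>i. y i - w i" J x] y wl xl by (auto simp: sep_dist_def)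
      also have "\<dots> \<le> r * sep_norm J x"
        using d by (intro mult_right_mono) (auto simp: sep_norm_nonneg)
      also have "\<dots> < r * (sep_norm J x + 1)" using r by simp
      also have "\<dots> = cmod (sep_inner J y x) - k"
        unfolding r_def using sep_norm_nonneg[of J x] by (simp add: field_simps add_nonneg_pos)
      finally have "cmod (sep_inner J w x) > k"
        using norm_triangle_ineq2[of "sep_inner J y x" "sep_inner J w x"] by linarith
      with wF x show False by auto
    qed
    thus "\<exists>r>0. disjnt ?F (M.mball y r)" using r by (meson disjnt_iff)
  qed auto
qed

lemma sep_l2_closed_cover_ball:
  assumes closed: "\<And>k::nat. closedin (Metric_space.mtopology (sep_l2 J) (sep_dist J)) (F k)"
    and cover: "\<Union>(range F) = sep_l2 J"
  obtains k y0 r where "r > 0" "y0 \<in> F k" "Metric_space.mball (sep_l2 J) (sep_dist J) y0 r \<subseteq> F k"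
proof -
  interpret M: Metric_space "sep_l2 J" "sep_dist J" by (rule Metric_space_sep_l2)
  have "\<exists>k. M.mtopology interior_of (F k) \<noteq> {}"
  proof (rule ccontr)
    assume "\<not> ?thesis"
    then have "M.mtopology interior_of \<Union>(range F) = {}"
      using M.metric_Baire_category_alt[OF mcomplete_sep_l2, of "range F"] closed by auto
    moreover have "M.mtopology interior_of (sep_l2 J) = sep_l2 J"
      using interior_of_topspace[of M.mtopology] by simp
    ultimately have "sep_l2 J = {}" using cover by simp
    moreover have "(\<lambda>_. 0) \<in> sep_l2 J" by simp
    ultimately show False by simp
  qed
  then obtain k y0 where y0_int: "y0 \<in> M.mtopology interior_of (F k)" by blast
  have "openin M.mtopology (M.mtopology interior_of (F k))" by (rule openin_interior_of)
  then obtain r where r: "r > 0" and "M.mball y0 r \<subseteq> M.mtopology interior_of (F k)"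
    using y0_int unfolding M.openin_mtopology by blast
  moreover have interior: "M.mtopology interior_of (F k) \<subseteq> F k" by (rule interior_of_subset)
  ultimately have "M.mball y0 r \<subseteq> F k" by (meson order_trans)
  moreover have "y0 \<in> F k" using y0_int interior by blast
  ultimately show ?thesis using that r by blast
qed

text \<open>The points \<open>y0\<close> and \<open>y0 + (r / (2 \<parallel>x\<parallel>)) x\<close> both lie in the ball, and their inner
  products with \<open>x\<close> differ by \<open>r \<parallel>x\<parallel> / 2\<close>.\<close>

lemma sep_norm_le_if_inner_bounded_on_ball:
  assumes xl: "x \<in> sep_l2 J" and y0l: "y0 \<in> sep_l2 J" and r: "r > 0"
    and bound: "\<And>y. y \<in> Metric_space.mball (sep_l2 J) (sep_dist J) y0 r \<Longrightarrow> cmod (sep_inner J y x) \<le> k"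
  shows "r * sep_norm J x \<le> 4 * k"
proof -
  interpret M: Metric_space "sep_l2 J" "sep_dist J" by (rule Metric_space_sep_l2)
  have c2: "cmod (sep_inner J y0 x) \<le> k" using bound y0l r by simp
  show ?thesis
  proof (cases "sep_norm J x = 0")
    case True
    have "0 \<le> k" using c2 norm_ge_zero[of "sep_inner J y0 x"] by linarith
    thus ?thesis using True by simp
  next
    case False
    define n where "n = sep_norm J x"
    have n: "n > 0" using False sep_norm_nonneg[of J x] by (simp add: n_def)
    define z where "z = (\<lambda>i. 1 * y0 i + complex_of_real (r / (2 * n)) * x i)"
    have "sep_dist J y0 z = sep_norm J (\<lambda>i. complex_of_real (- (r / (2 * n))) * x i)"
      unfolding sep_dist_def z_def by simp
    also have "\<dots> = cmod (complex_of_real (- (r / (2 * n)))) * n"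
      unfolding n_def by (rule sep_norm_scale)
    also have "\<dots> = r / 2" using n r by (subst norm_of_real) (simp add: field_simps)
    finally have "sep_dist J y0 z < r" using r by simp
    moreover have "z \<in> sep_l2 J" unfolding z_def using y0l xl by blast
    ultimately have c1: "cmod (sep_inner J z x) \<le> k" using y0l bound by simp
    have "sep_inner J z x = sep_inner J y0 x + complex_of_real (r / (2 * n)) * sep_inner J x x"
      unfolding z_def
      using sep_inner_lincomb_left[OF y0l xl xl, of 1 "complex_of_real (r / (2 * n))"] by simp
    also have "sep_inner J x x = complex_of_real (n^2)"
      using xl by (simp add: sep_inner_self sep_norm_sq_eq n_def)
    finally have "sep_inner J z x - sep_inner J y0 x = complex_of_real (r / 2 * n)"
      using n by (simp add: power2_eq_square)
    hence "cmod (sep_inner J z x - sep_inner J y0 x) = cmod (complex_of_real (r / 2 * n))"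
      by (rule arg_cong)
    also have "\<dots> = r / 2 * n" using n r by (subst norm_of_real) simp
    finally have "r / 2 * n \<le> 2 * k"
      using c1 c2 norm_triangle_ineq4[of "sep_inner J z x" "sep_inner J y0 x"] by linarith
    thus ?thesis by (simp add: n_def)
  qed
qed

lemma sep_l2_weakly_bounded_imp_bounded:
  assumes U: "U \<subseteq> sep_l2 J"
    and weak: "\<And>y. y \<in> sep_l2 J \<Longrightarrow> \<exists>k. \<forall>x\<in>U. cmod (sep_inner J y x) \<le> k"
  obtains K where "K \<ge> 0" "\<And>x. x \<in> U \<Longrightarrow> sep_norm J x \<le> K"
proof -
  interpret M: Metric_space "sep_l2 J" "sep_dist J" by (rule Metric_space_sep_l2)
  define F where "F k = {y \<in> sep_l2 J. \<forall>x\<in>U. cmod (sep_inner J y x) \<le> real k}" for k :: nat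
  have "\<Union>(range F) = sep_l2 J"
  proof (intro equalityI subsetI)
    fix y assume y: "y \<in> sep_l2 J"
    obtain k where "\<forall>x\<in>U. cmod (sep_inner J y x) \<le> k" using weak[OF y] by blast
    moreover obtain n :: nat where "k \<le> real n" using real_arch_simple by blast
    ultimately have "y \<in> F n" using y unfolding F_def by (auto intro: order_trans)
    thus "y \<in> \<Union>(range F)" by blast
  qed (auto simp: F_def)
  moreover have "closedin M.mtopology (F k)" for k
    unfolding F_def by (rule closedin_sep_inner_bounded[OF U])
  ultimately obtain k y0 r where r: "r > 0" and y0: "y0 \<in> F k" and ball: "M.mball y0 r \<subseteq> F k"
    using sep_l2_closed_cover_ball by blast
  have "r * sep_norm J x \<le> 4 * real k" if x: "x \<in> U" for x
    using ball y0 x U unfolding F_def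
    by (intro sep_norm_le_if_inner_bounded_on_ball[OF _ _ r]) auto
  then have "sep_norm J x \<le> 4 * real k / r" if "x \<in> U" for x
    using r that by (simp add: field_simps mult.commute)
  moreover have "4 * real k / r \<ge> 0" using r by simp
  ultimately show ?thesis using that by blast
qed

text \<open>The inverse makes \<open>{x. \<parallel>S x\<parallel> \<le> 1}\<close> weakly bounded, since
  \<open>\<langle>y, x\<rangle> = \<langle>S\<^sup>-\<^sup>1 y, S x\<rangle>\<close>.\<close>

lemma symmetric_bij_bounded_below:
  assumes S: "sep_bounded_op J S" "sep_symmetric J S"
    and bij: "bij_betw S (sep_l2 J) (sep_l2 J)"
  obtains \<delta> where "\<delta> > 0" "\<And>x. x \<in> sep_l2 J \<Longrightarrow> \<delta> * sep_norm J x \<le> sep_norm J (S x)"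
proof -
  define R where "R = inv_into (sep_l2 J) S"
  have R: "R y \<in> sep_l2 J" "S (R y) = y" if "y \<in> sep_l2 J" for y
    using bij that unfolding R_def by (auto simp: bij_betw_def inv_into_into f_inv_into_f)
  define U where "U = {x \<in> sep_l2 J. sep_norm J (S x) \<le> 1}"
  have "\<exists>k. \<forall>x\<in>U. cmod (sep_inner J y x) \<le> k" if y: "y \<in> sep_l2 J" for y
  proof (intro exI ballI)
    fix x assume "x \<in> U"
    then have x: "x \<in> sep_l2 J" "sep_norm J (S x) \<le> 1" by (auto simp: U_def)
    have "sep_inner J y x = sep_inner J (R y) (S x)"
      using sep_symmetricD[OF S(2) R(1)[OF y] x(1)] R(2)[OF y] by simp
    also have "cmod \<dots> \<le> sep_norm J (R y) * sep_norm J (S x)"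
      using sep_inner_Cauchy_Schwarz[OF R(1)[OF y] bounded_op_l2[OF S(1) x(1)]] .
    also have "\<dots> \<le> sep_norm J (R y)"
      using x(2) sep_norm_nonneg[of J "R y"] by (simp add: mult_left_le)
    finally show "cmod (sep_inner J y x) \<le> sep_norm J (R y)" .
  qed
  then obtain K where K: "K \<ge> 0" "\<And>x. x \<in> U \<Longrightarrow> sep_norm J x \<le> K"
    using sep_l2_weakly_bounded_imp_bounded[of U J] by (auto simp: U_def)
  have "sep_norm J x \<le> (K + 1) * sep_norm J (S x)" if x: "x \<in> sep_l2 J" for x
  proof (cases "S x = (\<lambda>_. 0)")
    case True
    then have "S x = S (\<lambda>_. 0)" using bounded_op_zero[OF S(1)] by simp
    hence "x = (\<lambda>_. 0)" using bij x by (auto simp: bij_betw_def dest: inj_onD)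
    thus ?thesis using bounded_op_zero[OF S(1)] by simp
  next
    case False
    define m where "m = sep_norm J (S x)"
    have m: "m > 0" using False sep_norm_zeroD[OF bounded_op_l2[OF S(1) x]]
      sep_norm_nonneg[of J "S x"]
      by (auto simp: m_def order_le_less)
    define x' where "x' = (\<lambda>i. complex_of_real (1 / m) * x i)"
    have "S x' = (\<lambda>i. complex_of_real (1 / m) * S x i)"
      unfolding x'_def by (rule bounded_op_scale[OF S(1) x])
    then have "sep_norm J (S x') = 1" using m
      by (simp only: sep_norm_scale) (simp add: m_def norm_divide)
    moreover have "x' \<in> sep_l2 J" unfolding x'_def using x by blast
    ultimately have "sep_norm J x' \<le> K" using K(2) by (simp add: U_def)
    moreover have "sep_norm J x' = sep_norm J x / m"
      unfolding x'_def sep_norm_scale using m by (simp add: norm_divide)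
    ultimately have "sep_norm J x \<le> K * m" using m by (simp add: field_simps)
    also have "\<dots> \<le> (K + 1) * m" using m by simp
    finally show ?thesis by (simp add: m_def)
  qed
  hence "\<And>x. x \<in> sep_l2 J \<Longrightarrow> 1 / (K + 1) * sep_norm J x \<le> sep_norm J (S x)"
    using K(1) by (simp add: field_simps)
  with K(1) show ?thesis using that[of "1 / (K + 1)"] by simp
qed

section \<open>Finite resolutions of the identity\<close>

lemma sep_proj_eqI:
  assumes x: "x \<in> sep_l2 J" and M: "M \<subseteq> sep_l2 J"
    and diff: "\<And>u v. u \<in> M \<Longrightarrow> v \<in> M \<Longrightarrow> (\<lambda>i. u i - v i) \<in> M"
    and m: "m \<in> M" and orth: "\<And>y. y \<in> M \<Longrightarrow> sep_inner J y (\<lambda>i. x i - m i) = 0"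
  shows "sep_proj J M x = m"
proof -
  have "(THE m. m \<in> M \<and> (\<forall>y\<in>M. sep_inner J y (\<lambda>i. x i - m i) = 0)) = m"
  proof (rule the_equality)
    fix m' assume m': "m' \<in> M \<and> (\<forall>y\<in>M. sep_inner J y (\<lambda>i. x i - m' i) = 0)"
    define d where "d = (\<lambda>i. m' i - m i)"
    have dM: "d \<in> M" unfolding d_def using diff m m' by blast
    have l2: "d \<in> sep_l2 J" "m \<in> sep_l2 J" "m' \<in> sep_l2 J" using dM m m' M by auto
    have "sep_inner J d d = sep_inner J d (\<lambda>i. (x i - m i) - (x i - m' i))"
      by (simp add: d_def)
    also have "\<dots> = 0"
      using orth[OF dM] m' dM l2 x by (auto simp: sep_inner_diff_right sep_l2_diff)
    finally have "sep_norm_sq J d = 0" using sep_inner_self[OF l2(1)] by simp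
    hence "d = (\<lambda>_. 0)" using sep_norm_sq_zeroD l2(1) by blast
    thus "m' = m" by (simp add: d_def fun_eq_iff)
  qed (use m orth in blast)
  thus ?thesis using x by (simp add: sep_proj_def)
qed

locale resolution_of_identity =
  fixes J :: "'j set" and S :: "'s set" and E :: "'s \<Rightarrow> ('j \<Rightarrow> complex) \<Rightarrow> ('j \<Rightarrow> complex)"
  assumes finite_index: "finite S"
    and bounded_proj: "\<And>s. s \<in> S \<Longrightarrow> sep_bounded_op J (E s)"
    and symmetric_proj: "\<And>s. s \<in> S \<Longrightarrow> sep_symmetric J (E s)"
    and proj_orth: "\<And>s t x. s \<in> S \<Longrightarrow> t \<in> S \<Longrightarrow> x \<in> sep_l2 J \<Longrightarrow>
                      E s (E t x) = (if s = t then E t x else (\<lambda>_. 0))"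
    and sum_proj: "\<And>x. x \<in> sep_l2 J \<Longrightarrow> (\<lambda>i. \<Sum>s\<in>S. E s x i) = x"
begin

lemma proj_l2: "s \<in> S \<Longrightarrow> x \<in> sep_l2 J \<Longrightarrow> E s x \<in> sep_l2 J"
  using bounded_proj bounded_op_l2 by blast

lemma proj_outside: "s \<in> S \<Longrightarrow> x \<notin> sep_l2 J \<Longrightarrow> E s x = (\<lambda>_. 0)"
  using bounded_proj bounded_op_outside by blast

lemma proj_lincomb_l2:
  assumes "S' \<subseteq> S" "x \<in> sep_l2 J"
  shows "(\<lambda>i. \<Sum>s\<in>S'. a s * E s x i) \<in> sep_l2 J"
  using assms finite_subset[OF assms(1) finite_index]
  by (intro sep_l2_sum sep_l2_scale) (auto intro: proj_l2)

lemma proj_lincomb: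
  assumes t: "t \<in> S" and x: "x \<in> sep_l2 J" and S': "S' \<subseteq> S"
  shows "E t (\<lambda>i. \<Sum>s\<in>S'. a s * E s x i) = (\<lambda>i. if t \<in> S' then a t * E t x i else 0)"
proof -
  have fin: "finite S'" using finite_index S' finite_subset by blast
  have "E t (\<lambda>i. \<Sum>s\<in>S'. a s * E s x i) = (\<lambda>i. \<Sum>s\<in>S'. E t (\<lambda>i. a s * E s x i) i)"
    by (rule bounded_op_sum[OF bounded_proj[OF t] fin])
      (use S' x in \<open>auto intro!: sep_l2_scale proj_l2\<close>)
  also have "\<dots> = (\<lambda>i. \<Sum>s\<in>S'. a s * (if t = s then E s x i else 0))"
    using S' x
    by (intro ext sum.cong refl)
      (auto simp: bounded_op_scale[OF bounded_proj[OF t]] proj_l2 proj_orth[OF t])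
  also have "\<dots> = (\<lambda>i. if t \<in> S' then a t * E t x i else 0)"
    using fin by (auto simp: if_distrib cong: if_cong)
  finally show ?thesis .
qed

definition proj_support :: "'s set" where
  "proj_support = {s \<in> S. \<exists>x\<in>sep_l2 J. E s x \<noteq> (\<lambda>_. 0)}"

lemma proj_support_subset: "proj_support \<subseteq> S"
  by (auto simp: proj_support_def)

lemma proj_outside_support: "s \<in> S \<Longrightarrow> s \<notin> proj_support \<Longrightarrow> x \<in> sep_l2 J \<Longrightarrow> E s x = (\<lambda>_. 0)"
  by (auto simp: proj_support_def)

lemma sum_proj_support:
  assumes "S' \<subseteq> S" "x \<in> sep_l2 J"
  shows "(\<lambda>i. \<Sum>s\<in>S'. f s * E s x i) = (\<lambda>i. \<Sum>s\<in>S' \<inter> proj_support. f s * E s x i)"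
proof (rule ext, rule sum.mono_neutral_right)
  fix i
  show "\<forall>s\<in>S' - S' \<inter> proj_support. f s * E s x i = 0"
  proof
    fix s assume "s \<in> S' - S' \<inter> proj_support"
    hence "E s x = (\<lambda>_. 0)" using assms by (intro proj_outside_support) auto
    thus "f s * E s x i = 0" by simp
  qed
qed (use assms finite_subset[OF assms(1) finite_index] in auto)

lemma sum_proj_support_eq: "x \<in> sep_l2 J \<Longrightarrow> (\<lambda>i. \<Sum>s\<in>proj_support. E s x i) = x"
  using sum_proj_support[OF subset_refl, of x "\<lambda>_. 1"] sum_proj proj_support_subset
  by (simp add: Int_absorb1)

text \<open>Here \<open>T = \<Sum>\<^sub>s c s E s\<close> is pinned down only on \<open>\<ell>\<^sup>2\<close>, which is all that the spectrum and
  \<^const>\<open>sep_abs_powr\<close> depend on.\<close>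

context
  fixes T :: "('j \<Rightarrow> complex) \<Rightarrow> ('j \<Rightarrow> complex)" and c :: "'s \<Rightarrow> complex"
  assumes T_eq: "\<And>x. x \<in> sep_l2 J \<Longrightarrow> T x = (\<lambda>i. \<Sum>s\<in>S. c s * E s x i)"
begin

lemma op_diff:
  assumes x: "x \<in> sep_l2 J" and y: "y \<in> sep_l2 J"
  shows "T (\<lambda>i. x i - y i) = (\<lambda>i. T x i - T y i)"
proof -
  have "T (\<lambda>i. x i - y i) = (\<lambda>i. \<Sum>s\<in>S. c s * E s x i - c s * E s y i)"
    using T_eq[OF sep_l2_diff[OF x y]] bounded_op_diff[OF bounded_proj x y]
    by (simp add: algebra_simps)
  also have "\<dots> = (\<lambda>i. T x i - T y i)" using T_eq[OF x] T_eq[OF y] by (simp add: sum_subtractf)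
  finally show ?thesis .
qed

lemma op_shift: "x \<in> sep_l2 J \<Longrightarrow> (\<lambda>i. T x i - a * x i) = (\<lambda>i. \<Sum>s\<in>S. (c s - a) * E s x i)"
proof -
  assume x: "x \<in> sep_l2 J"
  have "(\<lambda>i. T x i - a * x i) = (\<lambda>i. (\<Sum>s\<in>S. c s * E s x i) - a * (\<Sum>s\<in>S. E s x i))"
    using sum_proj[OF x] T_eq[OF x] by (simp add: fun_eq_iff)
  thus ?thesis by (simp add: sum_distrib_left left_diff_distrib sum_subtractf)
qed

lemma op_shift_bij:
  assumes a: "a \<notin> c ` proj_support"
  shows "bij_betw (\<lambda>x i. T x i - a * x i) (sep_l2 J) (sep_l2 J)"
proof -
  have nz: "c s - a \<noteq> 0" if "s \<in> proj_support" for s using a that by auto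
  show ?thesis
  proof (rule bij_betwI[where g = "\<lambda>y i. \<Sum>s\<in>proj_support. (1 / (c s - a)) * E s y i"])
  show "(\<lambda>x i. T x i - a * x i) \<in> sep_l2 J \<rightarrow> sep_l2 J"
    using op_shift proj_lincomb_l2[OF subset_refl] by auto
  show "(\<lambda>y i. \<Sum>s\<in>proj_support. 1 / (c s - a) * E s y i) \<in> sep_l2 J \<rightarrow> sep_l2 J"
    by (intro Pi_I proj_lincomb_l2[OF proj_support_subset])
  fix x assume x: "x \<in> sep_l2 J"
  have "E s (\<lambda>i. T x i - a * x i) = (\<lambda>i. (c s - a) * E s x i)" if "s \<in> S" for s
    unfolding op_shift[OF x] using proj_lincomb[OF that x subset_refl] that by simp
  then have "(\<lambda>i. \<Sum>s\<in>proj_support. 1 / (c s - a) * E s (\<lambda>i. T x i - a * x i) i) =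
      (\<lambda>i. \<Sum>s\<in>proj_support. E s x i)"
    using nz proj_support_subset by (intro ext sum.cong) auto
  then show "(\<lambda>i. \<Sum>s\<in>proj_support. 1 / (c s - a) * E s (\<lambda>i. T x i - a * x i) i) = x"
    using sum_proj_support_eq[OF x] by simp
next
  fix y assume y: "y \<in> sep_l2 J"
  define x where "x = (\<lambda>i. \<Sum>s\<in>proj_support. 1 / (c s - a) * E s y i)"
  have x_l2: "x \<in> sep_l2 J" unfolding x_def using proj_lincomb_l2[OF proj_support_subset y] .
  have "E s x = (\<lambda>i. if s \<in> proj_support then 1 / (c s - a) * E s y i else 0)" if "s \<in> S" for s
    unfolding x_def by (rule proj_lincomb[OF that y proj_support_subset])
  then have "(\<lambda>i. \<Sum>s\<in>S. (c s - a) * E s x i) = (\<lambda>i. \<Sum>s\<in>S \<inter> proj_support. E s y i)"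
    using nz finite_index by (simp add: if_distrib sum.inter_restrict cong: sum.cong if_cong)
  also have "\<dots> = y" using sum_proj_support_eq[OF y] proj_support_subset by (simp add: Int_absorb1)
  finally show "(\<lambda>i. T x i - a * x i) = y" using op_shift[OF x_l2] by simp
  qed
qed

lemma eigenvalue_in_spectrum:
  assumes s: "s \<in> proj_support"
  shows "c s \<in> sep_spectrum J T"
proof (rule ccontr)
  assume "c s \<notin> sep_spectrum J T"
  hence inj: "inj_on (\<lambda>x i. T x i - c s * x i) (sep_l2 J)"
    by (simp add: sep_spectrum_def bij_betw_def)
  obtain x where x: "x \<in> sep_l2 J" and nonzero: "E s x \<noteq> (\<lambda>_. 0)"
    using s by (auto simp: proj_support_def)
  have s': "s \<in> S" using s proj_support_subset by blast
  have u: "E s x \<in> sep_l2 J" using proj_l2[OF s' x] .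
  have "(\<lambda>i. T (E s x) i - c s * E s x i)
      = (\<lambda>i. \<Sum>t\<in>S. (c t - c s) * (if t = s then E s x i else 0))"
    unfolding op_shift[OF u] using s' x by (intro ext sum.cong refl) (auto simp: proj_orth)
  also have "\<dots> = (\<lambda>_. 0)" using s' finite_index by (simp add: if_distrib cong: if_cong)
  also have "\<dots> = (\<lambda>i. T (\<lambda>_. 0) i - c s * 0)"
    using T_eq[OF sep_l2_zero] bounded_op_zero[OF bounded_proj] by simp
  finally have "E s x = (\<lambda>_. 0)" using inj_onD[OF inj _ u sep_l2_zero] by simp
  with nonzero show False by contradiction
qed

lemma sep_spectrum_lincomb: "sep_spectrum J T = c ` proj_support"
  using op_shift_bij eigenvalue_in_spectrum by (auto simp: sep_spectrum_def)

definition eigenproj :: "complex \<Rightarrow> ('j \<Rightarrow> complex) \<Rightarrow> ('j \<Rightarrow> complex)" where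
  "eigenproj a x = (\<lambda>i. \<Sum>s\<in>{s\<in>S. c s = a}. E s x i)"

lemma eigenproj_alt: "eigenproj a x = (\<lambda>i. \<Sum>s\<in>{s\<in>S. c s = a}. 1 * E s x i)"
  by (simp add: eigenproj_def)

lemma eigenproj_l2: "x \<in> sep_l2 J \<Longrightarrow> eigenproj a x \<in> sep_l2 J"
  unfolding eigenproj_alt by (rule proj_lincomb_l2) auto

lemma proj_eigenproj:
  "t \<in> S \<Longrightarrow> x \<in> sep_l2 J \<Longrightarrow> E t (eigenproj a x) = (if c t = a then E t x else (\<lambda>_. 0))"
  unfolding eigenproj_alt by (subst proj_lincomb) auto

lemma eigenproj_diff:
  assumes x: "x \<in> sep_l2 J" and y: "y \<in> sep_l2 J"
  shows "eigenproj a (\<lambda>i. x i - y i) = (\<lambda>i. eigenproj a x i - eigenproj a y i)"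
  using bounded_op_diff[OF bounded_proj x y] by (simp add: eigenproj_def sum_subtractf)

lemma op_eigenproj: "x \<in> sep_l2 J \<Longrightarrow> T (eigenproj a x) = (\<lambda>i. a * eigenproj a x i)"
proof -
  assume x: "x \<in> sep_l2 J"
  have "T (eigenproj a x) = (\<lambda>i. \<Sum>s\<in>S. c s * E s (eigenproj a x) i)"
    by (rule T_eq[OF eigenproj_l2[OF x]])
  also have "\<dots> = (\<lambda>i. \<Sum>s\<in>S. if c s = a then a * E s x i else 0)"
    using x by (intro ext sum.cong refl) (auto simp: proj_eigenproj)
  also have "\<dots> = (\<lambda>i. \<Sum>s\<in>{s\<in>S. c s = a}. a * E s x i)"
    using finite_index by (intro ext) (rule sum.inter_filter[symmetric])
  also have "\<dots> = (\<lambda>i. a * eigenproj a x i)"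
    unfolding eigenproj_def by (simp add: sum_distrib_left)
  finally show ?thesis .
qed

lemma eigenproj_eigenvec: "y \<in> sep_eigenspace J T a \<Longrightarrow> eigenproj a y = y"
proof -
  assume "y \<in> sep_eigenspace J T a"
  hence y: "y \<in> sep_l2 J" and Ty: "T y = (\<lambda>i. a * y i)" by (auto simp: sep_eigenspace_def)
  have "E t y = (\<lambda>_. 0)" if t: "t \<in> S" "c t \<noteq> a" for t
  proof -
    have "E t (T y) = (\<lambda>i. c t * E t y i)"
      unfolding T_eq[OF y] by (subst proj_lincomb[OF t(1) y subset_refl]) (use t in simp)
    moreover have "E t (T y) = (\<lambda>i. a * E t y i)"
      unfolding Ty by (rule bounded_op_scale[OF bounded_proj[OF t(1)] y])
    ultimately have "(c t - a) * E t y i = 0" for i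
      by (metis left_diff_distrib right_minus_eq)
    thus ?thesis using t(2) by (simp add: fun_eq_iff)
  qed
  hence "(\<lambda>i. \<Sum>s\<in>S. E s y i) = (\<lambda>i. \<Sum>s\<in>{s\<in>S. c s = a}. E s y i)"
    by (intro ext sum.mono_neutral_right finite_index) auto
  thus ?thesis using sum_proj[OF y] by (simp add: eigenproj_def)
qed

lemma eigenproj_symmetric:
  assumes x: "x \<in> sep_l2 J" and y: "y \<in> sep_l2 J"
  shows "sep_inner J (eigenproj a x) y = sep_inner J x (eigenproj a y)"
proof -
  have fin: "finite {s\<in>S. c s = a}" using finite_index by simp
  have "sep_inner J (eigenproj a x) y = (\<Sum>s\<in>{s\<in>S. c s = a}. sep_inner J (E s x) y)"
    unfolding eigenproj_def using x y fin by (subst sep_inner_sum_left) (auto simp: proj_l2)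
  also have "\<dots> = (\<Sum>s\<in>{s\<in>S. c s = a}. sep_inner J x (E s y))"
    using x y symmetric_proj by (intro sum.cong refl) (auto simp: sep_symmetric_def)
  also have "\<dots> = sep_inner J x (eigenproj a y)"
    unfolding eigenproj_def using x y fin by (subst sep_inner_sum_right) (auto simp: proj_l2)
  finally show ?thesis .
qed

lemma sep_proj_eigenspace:
  assumes x: "x \<in> sep_l2 J"
  shows "sep_proj J (sep_eigenspace J T a) x = eigenproj a x"
proof (rule sep_proj_eqI[OF x])
  show "sep_eigenspace J T a \<subseteq> sep_l2 J" by (auto simp: sep_eigenspace_def)
  show "(\<lambda>i. u i - v i) \<in> sep_eigenspace J T a"
    if "u \<in> sep_eigenspace J T a" "v \<in> sep_eigenspace J T a" for u v
    using that op_diff by (auto simp: sep_eigenspace_def algebra_simps)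
  show eigen: "eigenproj a x \<in> sep_eigenspace J T a"
    using eigenproj_l2[OF x] op_eigenproj[OF x] by (simp add: sep_eigenspace_def)
  fix y assume y: "y \<in> sep_eigenspace J T a"
  then have y_l2: "y \<in> sep_l2 J" by (simp add: sep_eigenspace_def)
  have "sep_inner J y (\<lambda>i. x i - eigenproj a x i)
      = sep_inner J (eigenproj a y) (\<lambda>i. x i - eigenproj a x i)"
    using eigenproj_eigenvec[OF y] by simp
  also have "\<dots> = sep_inner J y (eigenproj a (\<lambda>i. x i - eigenproj a x i))"
    using y_l2 x eigenproj_l2 by (intro eigenproj_symmetric) auto
  also have "eigenproj a (\<lambda>i. x i - eigenproj a x i) = (\<lambda>_. 0)"
    using eigenproj_diff[OF x eigenproj_l2[OF x]] eigenproj_eigenvec[OF eigen] by simp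
  finally show "sep_inner J y (\<lambda>i. x i - eigenproj a x i) = 0" by (simp add: sep_inner_def)
qed

lemma sep_abs_powr_lincomb:
  "sep_abs_powr J p T x = (\<lambda>i. \<Sum>s\<in>S. complex_of_real (cmod (c s) powr p) * E s x i)"
proof (cases "x \<in> sep_l2 J")
  case False
  thus ?thesis by (simp add: sep_abs_powr_def sep_proj_def proj_outside)
next
  case x: True
  have "sep_abs_powr J p T x =
      (\<lambda>i. \<Sum>a\<in>c ` proj_support. complex_of_real (cmod a powr p) * eigenproj a x i)"
    unfolding sep_abs_powr_def sep_spectrum_lincomb using x by (simp add: sep_proj_eigenspace)
  also have "\<dots> = (\<lambda>i. \<Sum>a\<in>c ` proj_support. \<Sum>s\<in>{s\<in>proj_support. c s = a}.
                        complex_of_real (cmod (c s) powr p) * E s x i)"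
  proof (intro ext sum.cong refl)
    fix i a
    have "eigenproj a x i = (\<Sum>s\<in>{s\<in>proj_support. c s = a}. E s x i)"
      unfolding eigenproj_def
    proof (rule sum.mono_neutral_right)
      show "\<forall>s\<in>{s\<in>S. c s = a} - {s\<in>proj_support. c s = a}. E s x i = 0"
      proof
        fix s assume "s \<in> {s\<in>S. c s = a} - {s\<in>proj_support. c s = a}"
        hence "E s x = (\<lambda>_. 0)" using x by (intro proj_outside_support) auto
        thus "E s x i = 0" by simp
      qed
    qed (use finite_index proj_support_subset in auto)
    then show "complex_of_real (cmod a powr p) * eigenproj a x i =
      (\<Sum>s\<in>{s\<in>proj_support. c s = a}. complex_of_real (cmod (c s) powr p) * E s x i)"
      by (simp add: sum_distrib_left)
  qed
  also have "\<dots> = (\<lambda>i. \<Sum>s\<in>proj_support. complex_of_real (cmod (c s) powr p) * E s x i)"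
    using finite_subset[OF proj_support_subset finite_index] by (intro ext sum.image_gen[symmetric])
  also have "\<dots> = (\<lambda>i. \<Sum>s\<in>S. complex_of_real (cmod (c s) powr p) * E s x i)"
    using sum_proj_support[OF subset_refl x, of "\<lambda>s. complex_of_real (cmod (c s) powr p)"]
      proj_support_subset
    by (simp add: Int_absorb1)
  finally show ?thesis .
qed

end

definition spectral_op :: "('s \<Rightarrow> complex) \<Rightarrow> ('j \<Rightarrow> complex) \<Rightarrow> ('j \<Rightarrow> complex)" where
  "spectral_op d = (\<lambda>x i. \<Sum>l\<in>S. d l * E l x i)"

lemma spectral_op_bounded: "sep_bounded_op J (spectral_op d)"
  unfolding spectral_op_def by (rule bounded_op_sum_ops[OF finite_index bounded_proj])

lemma spectral_op_symmetric:
  assumes real: "\<And>l. l \<in> S \<Longrightarrow> cnj (d l) = d l"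
  shows "sep_symmetric J (spectral_op d)"
  unfolding sep_symmetric_def
proof (intro ballI)
  fix x y assume x: "x \<in> sep_l2 J" and y: "y \<in> sep_l2 J"
  have "sep_inner J (spectral_op d x) y = (\<Sum>l\<in>S. sep_inner J (\<lambda>i. d l * E l x i) y)"
    unfolding spectral_op_def
    by (rule sep_inner_sum_left[OF finite_index y]) (auto intro: sep_l2_scale proj_l2 x)
  also have "\<dots> = (\<Sum>l\<in>S. sep_inner J x (\<lambda>i. d l * E l y i))"
  proof (rule sum.cong[OF refl])
    fix l assume l: "l \<in> S"
    have "sep_inner J (\<lambda>i. d l * E l x i) y = cnj (d l) * sep_inner J (E l x) y"
      by (rule sep_inner_scale_left[OF proj_l2[OF l x] y])
    also have "\<dots> = d l * sep_inner J x (E l y)"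
      using real[OF l] sep_symmetricD[OF symmetric_proj[OF l] x y] by simp
    also have "\<dots> = sep_inner J x (\<lambda>i. d l * E l y i)"
      by (rule sep_inner_scale_right[OF x proj_l2[OF l y], symmetric])
    finally show "sep_inner J (\<lambda>i. d l * E l x i) y = sep_inner J x (\<lambda>i. d l * E l y i)" .
  qed
  also have "\<dots> = sep_inner J x (spectral_op d y)"
    unfolding spectral_op_def
    by (rule sep_inner_sum_right[OF finite_index x, symmetric]) (auto intro: sep_l2_scale proj_l2 y)
  finally show "sep_inner J (spectral_op d x) y = sep_inner J x (spectral_op d y)" .
qed

lemma spectral_op_observable:
  "(\<And>l. l \<in> S \<Longrightarrow> cnj (d l) = d l) \<Longrightarrow> sep_observable J (spectral_op d)"
  by (simp add: sep_observable_iff spectral_op_bounded spectral_op_symmetric)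

lemma finite_spectrum_spectral_op: "finite (sep_spectrum J (spectral_op d))"
proof -
  have "sep_spectrum J (spectral_op d) = d ` proj_support"
    by (rule sep_spectrum_lincomb) (simp add: spectral_op_def)
  thus ?thesis using finite_subset[OF proj_support_subset finite_index] by simp
qed

end

section \<open>Polynomials in an operator\<close>

lemma eigenvalue_real:
  assumes A: "sep_symmetric J A" and v: "v \<in> sep_l2 J" "v \<noteq> (\<lambda>_. 0)"
    and Av: "A v = (\<lambda>i. l * v i)"
  shows "cnj l = l"
proof -
  have "sep_inner J (A v) v = sep_inner J v (A v)" by (rule sep_symmetricD[OF A v(1) v(1)])
  hence "cnj l * sep_inner J v v = l * sep_inner J v v"
    unfolding Av using v by (simp add: sep_inner_scale_left sep_inner_scale_right)
  moreover have "sep_inner J v v \<noteq> 0"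
    using sep_inner_self[OF v(1)] sep_norm_sq_zeroD[OF v(1)] v(2) by auto
  ultimately show ?thesis by simp
qed

lemma eigenvecs_orthogonal:
  assumes A: "sep_symmetric J A" and u: "u \<in> sep_l2 J" "A u = (\<lambda>i. l * u i)" "cnj l = l"
    and v: "v \<in> sep_l2 J" "A v = (\<lambda>i. m * v i)" and lm: "l \<noteq> m"
  shows "sep_inner J u v = 0"
proof -
  have "sep_inner J (A u) v = sep_inner J u (A v)" by (rule sep_symmetricD[OF A u(1) v(1)])
  hence "cnj l * sep_inner J u v = m * sep_inner J u v"
    using u v by (simp add: sep_inner_scale_left sep_inner_scale_right)
  thus ?thesis using u(3) lm by simp
qed

lemma funpow_l2: "sep_bounded_op J A \<Longrightarrow> x \<in> sep_l2 J \<Longrightarrow> (A ^^ k) x \<in> sep_l2 J"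
  by (induction k) (auto simp: bounded_op_l2)

definition poly_op :: "'j set \<Rightarrow> complex poly \<Rightarrow> (('j \<Rightarrow> complex) \<Rightarrow> ('j \<Rightarrow> complex)) \<Rightarrow>
    ('j \<Rightarrow> complex) \<Rightarrow> ('j \<Rightarrow> complex)" where
  "poly_op J p A x =
     (if x \<in> sep_l2 J then (\<lambda>i. \<Sum>k\<le>degree p. coeff p k * (A ^^ k) x i) else (\<lambda>_. 0))"

context
  fixes J :: "'j set" and A :: "('j \<Rightarrow> complex) \<Rightarrow> ('j \<Rightarrow> complex)"
  assumes A: "sep_bounded_op J A"
begin

lemma poly_op_upto:
  assumes x: "x \<in> sep_l2 J" and n: "degree p \<le> n"
  shows "poly_op J p A x = (\<lambda>i. \<Sum>k\<le>n. coeff p k * (A ^^ k) x i)"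
proof -
  have "(\<Sum>k\<le>degree p. coeff p k * (A ^^ k) x i) = (\<Sum>k\<le>n. coeff p k * (A ^^ k) x i)" for i
    by (rule sum.mono_neutral_left) (use n in \<open>auto simp: coeff_eq_0\<close>)
  thus ?thesis using x by (simp add: poly_op_def)
qed

lemma poly_op_l2: "x \<in> sep_l2 J \<Longrightarrow> poly_op J p A x \<in> sep_l2 J"
  unfolding poly_op_def by (auto intro!: sep_l2_sum sep_l2_scale funpow_l2[OF A])

lemma poly_op_outside: "x \<notin> sep_l2 J \<Longrightarrow> poly_op J p A x = (\<lambda>_. 0)"
  by (simp add: poly_op_def)

lemma poly_op_pCons:
  assumes x: "x \<in> sep_l2 J"
  shows "poly_op J (pCons a p) A x = (\<lambda>i. a * x i + A (poly_op J p A x) i)"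
proof -
  have "poly_op J (pCons a p) A x = (\<lambda>i. \<Sum>k\<le>Suc (degree p). coeff (pCons a p) k * (A ^^ k) x i)"
    by (rule poly_op_upto[OF x degree_pCons_le])
  also have "\<dots> = (\<lambda>i. a * x i + (\<Sum>k\<le>degree p. coeff p k * (A ((A ^^ k) x)) i))"
    by (subst sum.atMost_Suc_shift) simp
  also have "(\<lambda>i. \<Sum>k\<le>degree p. coeff p k * (A ((A ^^ k) x)) i) = A (poly_op J p A x)"
  proof -
    have "A (poly_op J p A x) = (\<lambda>i. \<Sum>k\<le>degree p. A (\<lambda>i. coeff p k * (A ^^ k) x i) i)"
      unfolding poly_op_def using x by (simp add: bounded_op_sum[OF A] sep_l2_scale funpow_l2[OF A])
    also have "\<dots> = (\<lambda>i. \<Sum>k\<le>degree p. coeff p k * (A ((A ^^ k) x)) i)"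
      using x by (simp add: bounded_op_scale[OF A] funpow_l2[OF A])
    finally show ?thesis by simp
  qed
  finally show ?thesis .
qed

lemma poly_op_zero [simp]: "poly_op J 0 A x = (\<lambda>_. 0)"
  by (simp add: poly_op_def)

lemma poly_op_const: "x \<in> sep_l2 J \<Longrightarrow> poly_op J [:c:] A x = (\<lambda>i. c * x i)"
  using poly_op_pCons[of x c 0] by (simp add: bounded_op_zero[OF A])

lemma poly_op_one: "x \<in> sep_l2 J \<Longrightarrow> poly_op J 1 A x = x"
  using poly_op_const[of x 1] by (simp add: one_pCons)

lemma poly_op_X: "x \<in> sep_l2 J \<Longrightarrow> poly_op J [:0, 1:] A x = A x"
  using poly_op_pCons[of x 0 "[:1:]"] poly_op_const[of x 1] by simp

lemma poly_op_linear: "x \<in> sep_l2 J \<Longrightarrow> y \<in> sep_l2 J \<Longrightarrow>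
  poly_op J p A (\<lambda>i. a * x i + b * y i) = (\<lambda>i. a * poly_op J p A x i + b * poly_op J p A y i)"
proof (induction p)
  case 0 thus ?case by simp
next
  case (pCons c p)
  have xy: "(\<lambda>i. a * x i + b * y i) \<in> sep_l2 J" using pCons by blast
  show ?case using pCons
    by (simp add: poly_op_pCons xy bounded_op_linear[OF A] poly_op_l2 algebra_simps)
qed

lemma poly_op_add: "x \<in> sep_l2 J \<Longrightarrow>
    poly_op J (p + q) A x = (\<lambda>i. poly_op J p A x i + poly_op J q A x i)"
proof -
  assume x: "x \<in> sep_l2 J"
  let ?n = "max (degree p) (degree q)"
  have "poly_op J (p + q) A x = (\<lambda>i. \<Sum>k\<le>?n. coeff (p + q) k * (A ^^ k) x i)"
    by (rule poly_op_upto[OF x]) (simp add: degree_add_le)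
  also have "\<dots> = (\<lambda>i. (\<Sum>k\<le>?n. coeff p k * (A ^^ k) x i) + (\<Sum>k\<le>?n. coeff q k * (A ^^ k) x i))"
    by (simp add: distrib_right sum.distrib)
  also have "\<dots> = (\<lambda>i. poly_op J p A x i + poly_op J q A x i)"
    using poly_op_upto[OF x, of p ?n] poly_op_upto[OF x, of q ?n] by simp
  finally show ?thesis .
qed

lemma poly_op_smult: "x \<in> sep_l2 J \<Longrightarrow> poly_op J (smult c p) A x = (\<lambda>i. c * poly_op J p A x i)"
proof -
  assume x: "x \<in> sep_l2 J"
  have "poly_op J (smult c p) A x = (\<lambda>i. \<Sum>k\<le>degree p. coeff (smult c p) k * (A ^^ k) x i)"
    by (rule poly_op_upto[OF x]) (simp add: degree_smult_le)
  thus ?thesis using x by (simp add: poly_op_def sum_distrib_left mult.assoc)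
qed

lemma poly_op_mult: "x \<in> sep_l2 J \<Longrightarrow> poly_op J (p * q) A x = poly_op J p A (poly_op J q A x)"
proof (induction p)
  case 0 thus ?case by simp
next
  case (pCons a p)
  have ql: "poly_op J q A x \<in> sep_l2 J" using poly_op_l2 pCons by blast
  have "poly_op J (pCons a p * q) A x = poly_op J (smult a q + pCons 0 (p * q)) A x" by simp
  also have "\<dots> = (\<lambda>i. a * poly_op J q A x i + A (poly_op J (p * q) A x) i)"
    using pCons by (simp add: poly_op_add poly_op_smult poly_op_pCons)
  also have "\<dots> = poly_op J (pCons a p) A (poly_op J q A x)"
    using pCons ql by (simp add: poly_op_pCons)
  finally show ?case .
qed

lemma poly_op_comm: "x \<in> sep_l2 J \<Longrightarrow>
    poly_op J p A (poly_op J q A x) = poly_op J q A (poly_op J p A x)"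
  using poly_op_mult[of x p q] poly_op_mult[of x q p] by (simp add: mult.commute)

lemma poly_op_commute_op: "x \<in> sep_l2 J \<Longrightarrow> A (poly_op J p A x) = poly_op J p A (A x)"
  using poly_op_comm[of x "[:0,1:]" p] poly_op_X poly_op_l2 bounded_op_l2[OF A] by simp

lemma poly_op_bound: "\<exists>C. \<forall>x\<in>sep_l2 J. sep_norm J (poly_op J p A x) \<le> C * sep_norm J x"
proof (induction p)
  case 0 thus ?case by (auto intro!: exI[of _ 0])
next
  case (pCons a p)
  then obtain C where C: "\<And>x. x \<in> sep_l2 J \<Longrightarrow>
      sep_norm J (poly_op J p A x) \<le> C * sep_norm J x" by blast
  obtain c where c: "c \<ge> 0" "\<And>x. x \<in> sep_l2 J \<Longrightarrow> sep_norm J (A x) \<le> c * sep_norm J x"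
    using bounded_op_bound[OF A] by blast
  have "sep_norm J (poly_op J (pCons a p) A x)
      \<le> (cmod a + c * C) * sep_norm J x" if x: "x \<in> sep_l2 J" for x
  proof -
    have pl: "poly_op J p A x \<in> sep_l2 J" using poly_op_l2 x by blast
    have "sep_norm J (poly_op J (pCons a p) A x) = sep_norm J (\<lambda>i. a * x i + A (poly_op J p A x) i)"
      using poly_op_pCons[OF x] by simp
    also have "\<dots> \<le> sep_norm J (\<lambda>i. a * x i) + sep_norm J (A (poly_op J p A x))"
      using x pl by (intro sep_norm_triangle) (auto intro: bounded_op_l2[OF A])
    also have "\<dots> \<le> cmod a * sep_norm J x + c * (C * sep_norm J x)"
      using c(2)[OF pl] C[OF x] c(1)
      by (simp add: sep_norm_scale) (meson mult_left_mono order_trans)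
    finally show ?thesis by (simp add: algebra_simps)
  qed
  thus ?case by blast
qed

lemma poly_op_bounded: "sep_bounded_op J (poly_op J p A)"
proof -
  obtain C where C: "\<And>x. x \<in> sep_l2 J \<Longrightarrow> sep_norm J (poly_op J p A x) \<le> C * sep_norm J x"
    using poly_op_bound by blast
  show ?thesis
    by (rule bounded_opI[where c=C]) (auto simp: poly_op_l2 poly_op_linear poly_op_outside C)
qed

lemma poly_op_adjoint:
  assumes sa: "sep_symmetric J A"
  shows "x \<in> sep_l2 J \<Longrightarrow> y \<in> sep_l2 J \<Longrightarrow>
      sep_inner J (poly_op J p A x) y = sep_inner J x (poly_op J (map_poly cnj p) A y)"
proof (induction p arbitrary: x y)
  case 0 thus ?case by (simp add: sep_inner_def)
next
  case (pCons a p)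
  have pl: "poly_op J p A x \<in> sep_l2 J" using poly_op_l2 pCons by blast
  have ptl: "poly_op J (map_poly cnj p) A y \<in> sep_l2 J" using poly_op_l2 pCons by blast
  have Ay: "A y \<in> sep_l2 J" using bounded_op_l2[OF A] pCons by blast
  have "sep_inner J (poly_op J (pCons a p) A x) y
      = sep_inner J (\<lambda>i. a * x i + 1 * A (poly_op J p A x) i) y"
    using pCons by (simp add: poly_op_pCons)
  also have "\<dots> = cnj a * sep_inner J x y + sep_inner J (A (poly_op J p A x)) y"
    using pCons pl by (subst sep_inner_lincomb_left) (auto intro: bounded_op_l2[OF A])
  also have "sep_inner J (A (poly_op J p A x)) y = sep_inner J (poly_op J p A x) (A y)"
    using sep_symmetricD[OF sa pl] pCons by simp
  also have "\<dots> = sep_inner J x (poly_op J (map_poly cnj p) A (A y))"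
    using pCons.IH[OF pCons.prems(1) Ay] .
  also have "poly_op J (map_poly cnj p) A (A y) = A (poly_op J (map_poly cnj p) A y)"
    using poly_op_commute_op pCons by simp
  also have "cnj a * sep_inner J x y + sep_inner J x (A (poly_op J (map_poly cnj p) A y)) =
      sep_inner J x (\<lambda>i. cnj a * y i + 1 * A (poly_op J (map_poly cnj p) A y) i)"
    using pCons ptl by (subst sep_inner_lincomb_right) (auto intro: bounded_op_l2[OF A])
  also have "\<dots> = sep_inner J x (poly_op J (map_poly cnj (pCons a p)) A y)"
    using pCons by (simp add: map_poly_pCons poly_op_pCons)
  finally show ?case .
qed

lemma poly_op_sum:
  "finite S \<Longrightarrow> x \<in> sep_l2 J \<Longrightarrow> poly_op J (\<Sum>s\<in>S. g s) A x = (\<lambda>i. \<Sum>s\<in>S. poly_op J (g s) A x i)"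
  by (induction S rule: finite_induct) (auto simp: poly_op_add)

lemma poly_op_eigenvec:
  assumes v: "v \<in> sep_l2 J" and Av: "A v = (\<lambda>i. \<nu> * v i)"
  shows "poly_op J p A v = (\<lambda>i. poly p \<nu> * v i)"
proof (induction p)
  case (pCons a p)
  have "poly_op J (pCons a p) A v = (\<lambda>i. a * v i + A (\<lambda>i. poly p \<nu> * v i) i)"
    using poly_op_pCons[OF v] pCons by simp
  also have "A (\<lambda>i. poly p \<nu> * v i) = (\<lambda>i. poly p \<nu> * (\<nu> * v i))"
    using bounded_op_scale[OF A v, of "poly p \<nu>"] Av by simp
  finally show ?case by (simp add: algebra_simps)
qed simp

lemma poly_op_linear_factor: "x \<in> sep_l2 J \<Longrightarrow> poly_op J [:-z, 1:] A x = (\<lambda>i. A x i - z * x i)"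
  using poly_op_pCons[of x "-z" "[:1:]"] poly_op_const[of x 1] by simp

lemma poly_op_bij_mult:
  assumes "bij_betw (poly_op J p A) (sep_l2 J) (sep_l2 J)"
    "bij_betw (poly_op J q A) (sep_l2 J) (sep_l2 J)"
  shows "bij_betw (poly_op J (p * q) A) (sep_l2 J) (sep_l2 J)"
proof -
  have "bij_betw (poly_op J p A \<circ> poly_op J q A) (sep_l2 J) (sep_l2 J)"
    using assms by (rule bij_betw_trans[rotated])
  moreover have "bij_betw (poly_op J p A \<circ> poly_op J q A) (sep_l2 J) (sep_l2 J) =
      bij_betw (poly_op J (p * q) A) (sep_l2 J) (sep_l2 J)"
    by (rule bij_betw_cong) (simp add: poly_op_mult)
  ultimately show ?thesis by simp
qed

lemma poly_op_bij_one: "bij_betw (poly_op J 1 A) (sep_l2 J) (sep_l2 J)"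
proof -
  have "bij_betw id (sep_l2 J) (sep_l2 J) = bij_betw (poly_op J 1 A) (sep_l2 J) (sep_l2 J)"
    by (rule bij_betw_cong) (simp add: poly_op_one)
  thus ?thesis by simp
qed

lemma poly_op_bij_prod:
  "finite Z \<Longrightarrow> (\<And>z. z \<in> Z \<Longrightarrow> bij_betw (poly_op J (g z) A) (sep_l2 J) (sep_l2 J)) \<Longrightarrow>
   bij_betw (poly_op J (\<Prod>z\<in>Z. g z) A) (sep_l2 J) (sep_l2 J)"
  by (induction Z rule: finite_induct) (auto simp: poly_op_bij_one poly_op_bij_mult)

lemma poly_op_bij_power:
  "bij_betw (poly_op J p A) (sep_l2 J) (sep_l2 J) \<Longrightarrow>
      bij_betw (poly_op J (p ^ n) A) (sep_l2 J) (sep_l2 J)"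
  by (induction n) (auto simp: poly_op_bij_one poly_op_bij_mult)

lemma poly_op_bij_const:
  assumes c: "c \<noteq> 0"
  shows "bij_betw (poly_op J [:c:] A) (sep_l2 J) (sep_l2 J)"
proof -
  have "bij_betw (\<lambda>x i. c * x i) (sep_l2 J) (sep_l2 J)"
  proof (rule bij_betwI[where g="\<lambda>x i. (1/c) * x i"])
    show "(\<lambda>x i. 1 / c * x i) \<in> sep_l2 J \<rightarrow> sep_l2 J" by (intro Pi_I sep_l2_scale)
  qed (use c in auto)
  moreover have "bij_betw (\<lambda>x i. c * x i) (sep_l2 J) (sep_l2 J)
      = bij_betw (poly_op J [:c:] A) (sep_l2 J) (sep_l2 J)"
    by (rule bij_betw_cong) (simp add: poly_op_const)
  ultimately show ?thesis by simp
qed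

lemma poly_op_bij_linear_factor:
  assumes "z \<notin> sep_spectrum J A"
  shows "bij_betw (poly_op J [:-z, 1:] A) (sep_l2 J) (sep_l2 J)"
proof -
  have "bij_betw (\<lambda>x i. A x i - z * x i) (sep_l2 J) (sep_l2 J)"
    using assms by (simp add: sep_spectrum_def)
  moreover have "bij_betw (\<lambda>x i. A x i - z * x i) (sep_l2 J) (sep_l2 J) =
      bij_betw (poly_op J [:-z, 1:] A) (sep_l2 J) (sep_l2 J)"
    by (rule bij_betw_cong) (simp add: poly_op_linear_factor)
  ultimately show ?thesis by simp
qed

text \<open>Factor \<open>f\<close> over \<open>\<complex>\<close>: every linear factor \<open>X - z\<close> with \<open>z\<close> outside the spectrum is
  invertible at \<open>A\<close>.\<close>

lemma poly_op_bij:
  assumes f: "f \<noteq> 0" and roots: "\<And>z. poly f z = 0 \<Longrightarrow> z \<notin> sep_spectrum J A"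
  shows "bij_betw (poly_op J f A) (sep_l2 J) (sep_l2 J)"
proof -
  have "bij_betw (poly_op J ([:lead_coeff f:] * (\<Prod>z|poly f z = 0. [:-z, 1:] ^ order z f)) A)
          (sep_l2 J) (sep_l2 J)"
    using f poly_roots_finite[OF f]
    by (intro poly_op_bij_mult poly_op_bij_const poly_op_bij_prod poly_op_bij_power
          poly_op_bij_linear_factor roots) auto
  moreover have "[:lead_coeff f:] * (\<Prod>z|poly f z = 0. [:-z, 1:] ^ order z f) = f"
    using complex_poly_decompose[of f] by simp
  ultimately show ?thesis by simp
qed

text \<open>For symmetric \<open>A\<close> the operator \<open>q(A)\<close> is normal, its adjoint being \<open>q\<^sup>*(A)\<close> with
  conjugated coefficients.\<close>

lemma poly_op_cnj_norm_sq:
  assumes sym: "sep_symmetric J A" and w: "w \<in> sep_l2 J"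
  shows "sep_norm_sq J (poly_op J (map_poly cnj q) A w) = sep_norm_sq J (poly_op J q A w)"
proof -
  let ?D = "poly_op J q A" and ?Dt = "poly_op J (map_poly cnj q) A"
  have adj: "sep_inner J (?Dt u) v = sep_inner J u (?D v)" if "u \<in> sep_l2 J" "v \<in> sep_l2 J" for u v
    using poly_op_adjoint[OF sym that, of "map_poly cnj q"] by (simp add: map_poly_map_poly o_def)
  have "complex_of_real (sep_norm_sq J (?Dt w)) = sep_inner J (?Dt w) (?Dt w)"
    using sep_inner_self[OF poly_op_l2[OF w]] by simp
  also have "\<dots> = sep_inner J w (?D (?Dt w))" using adj[OF w poly_op_l2[OF w]] .
  also have "?D (?Dt w) = ?Dt (?D w)" by (rule poly_op_comm[OF w])
  also have "sep_inner J w (?Dt (?D w)) = cnj (sep_inner J (?D w) (?D w))"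
    using sep_inner_commute adj[OF poly_op_l2[OF w] w] by metis
  also have "\<dots> = complex_of_real (sep_norm_sq J (?D w))"
    using sep_inner_self[OF poly_op_l2[OF w]] by simp
  finally show ?thesis by simp
qed

end

lemma bounded_op_normalize:
  assumes D: "sep_bounded_op J D" and w: "w \<in> sep_l2 J" "w \<noteq> (\<lambda>_. 0)"
    and u: "u = (\<lambda>i. complex_of_real (1 / sep_norm J w) * w i)"
  shows "u \<in> sep_l2 J \<and> sep_norm J u = 1 \<and> sep_norm J (D w) = sep_norm J w * sep_norm J (D u)"
proof -
  have n: "sep_norm J w > 0" using w sep_norm_zeroD sep_norm_nonneg[of J w] by fastforce
  have Du: "D u = (\<lambda>i. complex_of_real (1 / sep_norm J w) * D w i)"
    unfolding u by (rule bounded_op_scale[OF D w(1)])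
  have "u \<in> sep_l2 J" unfolding u using w(1) by (rule sep_l2_scale)
  moreover have "sep_norm J u = 1"
    unfolding u using n by (simp only: sep_norm_scale) (simp add: norm_divide)
  moreover have "sep_norm J (D u) = sep_norm J (D w) / sep_norm J w"
    unfolding Du using n by (simp only: sep_norm_scale) (simp add: norm_divide)
  ultimately show ?thesis using n by simp
qed

lemma bounded_op_norm_sq_sup:
  assumes D: "sep_bounded_op J D" and x0: "x0 \<in> sep_l2 J" "D x0 \<noteq> (\<lambda>_. 0)"
  obtains M where "M > 0" "\<And>w. w \<in> sep_l2 J \<Longrightarrow> sep_norm_sq J (D w) \<le> M * sep_norm_sq J w"
    "\<And>e. e > 0 \<Longrightarrow> \<exists>x\<in>sep_l2 J. sep_norm_sq J x = 1 \<and> M - e < sep_norm_sq J (D x)"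
proof -
  define N where "N = {(sep_norm J (D x))^2 | x. x \<in> sep_l2 J \<and> sep_norm J x = 1}"
  define M where "M = Sup N"
  obtain cD where cD: "\<And>x. x \<in> sep_l2 J \<Longrightarrow> sep_norm J (D x) \<le> cD * sep_norm J x"
    using bounded_op_bound[OF D] by blast
  have bdd: "bdd_above N"
  proof (rule bdd_aboveI[of _ "cD^2"])
    fix y assume "y \<in> N"
    then obtain x where x: "x \<in> sep_l2 J" "sep_norm J x = 1" "y = (sep_norm J (D x))^2"
      by (auto simp: N_def)
    have "sep_norm J (D x) \<le> cD" using cD[OF x(1)] x(2) by simp
    thus "y \<le> cD^2" using x(3) by (simp add: power_mono sep_norm_nonneg)
  qed
  have upper: "sep_norm_sq J (D w) \<le> M * sep_norm_sq J w" if w: "w \<in> sep_l2 J" for w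
  proof (cases "w = (\<lambda>_. 0)")
    case True thus ?thesis using bounded_op_zero[OF D] by (simp add: sep_norm_sq_def)
  next
    case False
    define u where "u = (\<lambda>i. complex_of_real (1 / sep_norm J w) * w i)"
    have u: "u \<in> sep_l2 J" "sep_norm J u = 1"
      and Dw: "sep_norm J (D w) = sep_norm J w * sep_norm J (D u)"
      using bounded_op_normalize[OF D w False u_def] by auto
    have "(sep_norm J (D u))^2 \<le> M" unfolding M_def using u
      by (intro cSup_upper bdd) (auto simp: N_def)
    then have "(sep_norm J w)^2 * (sep_norm J (D u))^2 \<le> (sep_norm J w)^2 * M"
      by (intro mult_left_mono) auto
    thus ?thesis by (simp add: sep_norm_sq_eq Dw power_mult_distrib mult.commute)
  qed
  define u0 where "u0 = (\<lambda>i. complex_of_real (1 / sep_norm J x0) * x0 i)"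
  have x0_nz: "x0 \<noteq> (\<lambda>_. 0)" using x0 bounded_op_zero[OF D] by auto
  have u0: "u0 \<in> sep_l2 J" "sep_norm J u0 = 1"
    "sep_norm J (D x0) = sep_norm J x0 * sep_norm J (D u0)"
    using bounded_op_normalize[OF D x0(1) x0_nz u0_def] by auto
  have "sep_norm J (D x0) \<noteq> 0" using x0 sep_norm_zeroD[OF bounded_op_l2[OF D x0(1)]] by blast
  then have "(sep_norm J (D u0))^2 > 0" using u0(3) by simp
  moreover have "(sep_norm J (D u0))^2 \<in> N" using u0 by (auto simp: N_def)
  ultimately have "M > 0" unfolding M_def using bdd cSup_upper less_le_trans by blast
  moreover have "\<exists>x\<in>sep_l2 J. sep_norm_sq J x = 1 \<and> M - e < sep_norm_sq J (D x)" if "e > 0" for e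
  proof -
    have "N \<noteq> {}" using u0 by (auto simp: N_def)
    then obtain y where "y \<in> N" "M - e < y" using less_cSupD[of N "M - e"] \<open>e > 0\<close>
      by (auto simp: M_def)
    then obtain x where "x \<in> sep_l2 J" "sep_norm J x = 1" "M - e < (sep_norm J (D x))^2"
      by (auto simp: N_def)
    thus ?thesis by (intro bexI[of _ x]) (auto simp: sep_norm_sq_eq)
  qed
  ultimately show ?thesis using that upper by blast
qed

lemma poly_op_shifted_norm_sq:
  assumes A: "sep_bounded_op J A" and sym: "sep_symmetric J A"
    and upper: "\<And>w. w \<in> sep_l2 J \<Longrightarrow> sep_norm_sq J (poly_op J q A w) \<le> M * sep_norm_sq J w"
    and x: "x \<in> sep_l2 J" "sep_norm_sq J x = 1"
  shows "sep_norm_sq J (poly_op J (map_poly cnj q * q + [:- complex_of_real M:]) A x)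
           \<le> M * (M - sep_norm_sq J (poly_op J q A x))"
proof -
  define D where "D = poly_op J q A"
  define Dt where "Dt = poly_op J (map_poly cnj q) A"
  define f where "f = map_poly cnj q * q + [:- complex_of_real M:]"
  have D_l2: "w \<in> sep_l2 J \<Longrightarrow> D w \<in> sep_l2 J" for w unfolding D_def by (rule poly_op_l2[OF A])
  have f_x: "poly_op J f A x = (\<lambda>i. Dt (D x) i + (- complex_of_real M) * x i)"
    unfolding f_def D_def Dt_def
    using poly_op_add[OF A x(1)] poly_op_const[OF A x(1)] poly_op_mult[OF A x(1)] by simp
  have DtD: "Dt (D x) \<in> sep_l2 J" unfolding Dt_def by (rule poly_op_l2[OF A D_l2[OF x(1)]])
  have "sep_inner J (Dt (D x)) x = complex_of_real (sep_norm_sq J (D x))"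
    using poly_op_adjoint[OF A sym D_l2[OF x(1)] x(1), of "map_poly cnj q"]
      sep_inner_self[OF D_l2[OF x(1)]]
    by (simp add: Dt_def D_def map_poly_map_poly o_def)
  then have inner: "sep_inner J (Dt (D x)) (\<lambda>i. (- complex_of_real M) * x i) =
      - complex_of_real M * complex_of_real (sep_norm_sq J (D x))"
    using sep_inner_scale_right[OF DtD x(1), of "- complex_of_real M"] by simp
  have "sep_norm_sq J (\<lambda>i. (- complex_of_real M) * x i) = M^2"
    by (simp only: sep_norm_sq_scale) (simp add: x(2))
  then have "sep_norm_sq J (poly_op J f A x) =
      sep_norm_sq J (Dt (D x)) + M^2 - 2 * M * sep_norm_sq J (D x)"
    unfolding f_x sep_norm_sq_add[OF DtD sep_l2_scale[OF x(1)]] using inner by simp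
  also have "sep_norm_sq J (Dt (D x)) = sep_norm_sq J (D (D x))"
    unfolding D_def Dt_def by (rule poly_op_cnj_norm_sq[OF A sym D_l2[OF x(1), unfolded D_def]])
  also have "\<dots> \<le> M * sep_norm_sq J (D x)" unfolding D_def by (rule upper[OF D_l2[OF x(1)], unfolded D_def])
  finally show ?thesis unfolding f_def D_def
    by (simp add: algebra_simps power2_eq_square)
qed

text \<open>If \<open>q(A) \<noteq> 0\<close>, let \<open>M = \<parallel>q(A)\<parallel>\<^sup>2 > 0\<close>: the polynomial \<open>f = q\<^sup>* q - M\<close> equals \<open>-M\<close> on \<open>S\<close>,
  so \<open>f(A)\<close> is a symmetric bijection and hence bounded below, whereas
  \<open>\<parallel>f(A) x\<parallel>\<^sup>2 \<le> M (M - \<parallel>q(A) x\<parallel>\<^sup>2)\<close> is arbitrarily small on unit vectors \<open>x\<close>.\<close>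

lemma poly_op_annihilates:
  assumes A: "sep_bounded_op J A" and sym: "sep_symmetric J A" and S: "finite S" "S \<noteq> {}"
    and spectrum: "sep_spectrum J A \<subseteq> S" and x0: "x0 \<in> sep_l2 J"
  shows "poly_op J (\<Prod>l\<in>S. [:-l, 1:]) A x0 = (\<lambda>_. 0)"
proof (rule ccontr)
  define q where "q = (\<Prod>l\<in>S. [:-l, 1:])"
  define D where "D = poly_op J q A"
  define Dt where "Dt = poly_op J (map_poly cnj q) A"
  have D: "sep_bounded_op J D" unfolding D_def by (rule poly_op_bounded[OF A])
  have D_l2: "w \<in> sep_l2 J \<Longrightarrow> D w \<in> sep_l2 J" for w unfolding D_def by (rule poly_op_l2[OF A])
  assume "poly_op J (\<Prod>l\<in>S. [:-l, 1:]) A x0 \<noteq> (\<lambda>_. 0)"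
  then obtain M where M: "M > 0" and upper: "\<And>w. w \<in> sep_l2 J \<Longrightarrow>
      sep_norm_sq J (D w) \<le> M * sep_norm_sq J w"
    and approx: "\<And>e. e > 0 \<Longrightarrow> \<exists>x\<in>sep_l2 J. sep_norm_sq J x = 1 \<and> M - e < sep_norm_sq J (D x)"
    using bounded_op_norm_sq_sup[OF D x0] by (auto simp: D_def q_def)
  define f where "f = map_poly cnj q * q + [:- complex_of_real M:]"
  have q_S: "poly q l = 0" if "l \<in> S" for l
    unfolding q_def poly_prod using S that by (auto intro!: prod_zero)
  have f_S: "poly f l = - complex_of_real M" if "l \<in> S" for l
    using q_S[OF that] by (simp add: f_def)
  have "f \<noteq> 0" using f_S[of "SOME l. l \<in> S"] M S(2) some_in_eq by fastforce
  moreover have "z \<notin> sep_spectrum J A" if "poly f z = 0" for z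
    using that f_S spectrum M by fastforce
  ultimately have f_bij: "bij_betw (poly_op J f A) (sep_l2 J) (sep_l2 J)"
    by (rule poly_op_bij[OF A])
  have "poly (map_poly cnj f) = poly f" by (rule ext) (simp add: f_def mult.commute)
  then have "map_poly cnj f = f" using poly_eq_poly_eq_iff by blast
  then have "sep_symmetric J (poly_op J f A)"
    using poly_op_adjoint[OF A sym] by (simp add: sep_symmetric_def)
  then obtain \<delta> where \<delta>: "\<delta> > 0" "\<And>x. x \<in> sep_l2 J \<Longrightarrow>
      \<delta> * sep_norm J x \<le> sep_norm J (poly_op J f A x)"
    using symmetric_bij_bounded_below[OF poly_op_bounded[OF A] _ f_bij] by blast
  obtain x where x: "x \<in> sep_l2 J" "sep_norm_sq J x = 1"
    and big: "M - \<delta>^2 / M < sep_norm_sq J (D x)"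
    using approx[of "\<delta>^2 / M"] \<delta>(1) M by auto
  have "sep_norm_sq J (poly_op J f A x) \<le> M * (M - sep_norm_sq J (D x))"
    unfolding f_def D_def by (rule poly_op_shifted_norm_sq[OF A sym upper[unfolded D_def] x])
  also have "\<dots> < \<delta>^2" using big M by (simp add: field_simps)
  also have "\<delta>^2 \<le> sep_norm_sq J (poly_op J f A x)"
  proof -
    have "sep_norm J x = 1"
      using x(2) sep_norm_nonneg[of J x] by (auto simp: sep_norm_sq_eq power2_eq_1_iff)
    then have "\<delta> \<le> sep_norm J (poly_op J f A x)" using \<delta>(2)[OF x(1)] by simp
    then show ?thesis using \<delta>(1) by (simp add: sep_norm_sq_eq power_mono)
  qed
  finally show False by simp
qed

section \<open>Spectral decomposition for finite spectrum\<close>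

text \<open>With \<open>q(A) = 0\<close> for \<open>q = \<Prod>\<^sub>l\<^sub>\<in>\<^sub>S (X - l)\<close>, the Lagrange interpolation polynomials of
  \<open>S\<close> evaluated at \<open>A\<close> form a resolution of the identity into eigenspaces of \<open>A\<close>.\<close>

locale annihilated_op =
  fixes J :: "'j set" and A :: "('j \<Rightarrow> complex) \<Rightarrow> ('j \<Rightarrow> complex)" and S :: "complex set"
  assumes bounded: "sep_bounded_op J A" and symmetric: "sep_symmetric J A"
    and finite_index: "finite S" and nonempty: "S \<noteq> {}"
    and annihilates: "\<And>x. x \<in> sep_l2 J \<Longrightarrow> poly_op J (\<Prod>l\<in>S. [:-l, 1:]) A x = (\<lambda>_. 0)"
begin

definition lagrange :: "complex \<Rightarrow> complex poly" where
  "lagrange l = smult (1 / (\<Prod>m\<in>S - {l}. (l - m))) (\<Prod>m\<in>S - {l}. [:-m, 1:])"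

definition spectral_proj :: "complex \<Rightarrow> ('j \<Rightarrow> complex) \<Rightarrow> ('j \<Rightarrow> complex)" where
  "spectral_proj l = poly_op J (lagrange l) A"

lemma poly_lagrange: "l \<in> S \<Longrightarrow> n \<in> S \<Longrightarrow> poly (lagrange l) n = (if n = l then 1 else 0)"
proof -
  assume l: "l \<in> S" and n: "n \<in> S"
  have nonzero: "(\<Prod>m\<in>S - {l}. (l - m)) \<noteq> 0" using finite_index by (simp add: prod_zero_iff)
  show ?thesis
  proof (cases "n = l")
    case True thus ?thesis using nonzero by (simp add: lagrange_def poly_prod)
  next
    case False
    hence "(\<Prod>m\<in>S - {l}. (n - m)) = 0" using n finite_index by (simp add: prod_zero_iff)
    thus ?thesis using False by (simp add: lagrange_def poly_prod)
  qed
qed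

lemma sum_lagrange: "(\<Sum>l\<in>S. lagrange l) = 1"
proof -
  have dL: "degree (lagrange l) < card S" if lS: "l \<in> S" for l
  proof -
    have "degree (lagrange l) \<le> degree (\<Prod>m\<in>S - {l}. [:-m, 1:])"
      by (simp add: lagrange_def degree_smult_le)
    also have "\<dots> \<le> (\<Sum>m\<in>S - {l}. degree [:-m, 1:])"
      using degree_prod_sum_le[of "S - {l}" "\<lambda>m. [:-m, 1:]"] finite_index by (simp add: o_def)
    also have "\<dots> = card (S - {l})" by simp
    also have "\<dots> < card S" by (rule card_Diff1_less[OF finite_index lS])
    finally show ?thesis .
  qed
  have "degree (\<Sum>l\<in>S. lagrange l) < card S"
    using nonempty finite_index dL by (intro degree_sum_less) (auto simp: card_gt_0_iff)
  moreover have "poly (\<Sum>l\<in>S. lagrange l) n = poly 1 n" if n: "n \<in> S" for n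
  proof -
    have "poly (\<Sum>l\<in>S. lagrange l) n = (\<Sum>l\<in>S. if n = l then 1 else 0)"
      by (simp add: poly_sum poly_lagrange n)
    also have "\<dots> = 1" using n finite_index by simp
    finally show ?thesis by simp
  qed
  moreover have "card S > degree (1 :: complex poly)" using nonempty finite_index
    by (simp add: card_gt_0_iff)
  ultimately show ?thesis by (intro poly_eqI_degree[of S]) auto
qed

lemma spectral_proj_bounded: "sep_bounded_op J (spectral_proj l)"
  unfolding spectral_proj_def by (rule poly_op_bounded[OF bounded])

lemma spectral_proj_l2: "x \<in> sep_l2 J \<Longrightarrow> spectral_proj l x \<in> sep_l2 J"
  unfolding spectral_proj_def by (rule poly_op_l2[OF bounded])

lemma sum_spectral_proj: "x \<in> sep_l2 J \<Longrightarrow> (\<lambda>i. \<Sum>l\<in>S. spectral_proj l x i) = x"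
proof -
  assume x: "x \<in> sep_l2 J"
  have "(\<lambda>i. \<Sum>l\<in>S. spectral_proj l x i) = poly_op J (\<Sum>l\<in>S. lagrange l) A x"
    unfolding spectral_proj_def by (rule poly_op_sum[OF bounded finite_index x, symmetric])
  also have "\<dots> = x" by (simp add: sum_lagrange poly_op_one[OF bounded x])
  finally show ?thesis .
qed

lemma op_spectral_proj:
  assumes l: "l \<in> S" and x: "x \<in> sep_l2 J"
  shows "A (spectral_proj l x) = (\<lambda>i. l * spectral_proj l x i)"
proof -
  define c where "c = 1 / (\<Prod>m\<in>S - {l}. (l - m))"
  have q: "(\<Prod>m\<in>S. [:-m, 1:]) = [:-l, 1:] * (\<Prod>m\<in>S - {l}. [:-m, 1:])"
    using finite_index l by (rule prod.remove)
  have "[:-l, 1:] * lagrange l = smult c (\<Prod>m\<in>S. [:-m, 1:])"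
    unfolding q lagrange_def c_def by (simp add: mult_smult_right)
  hence "poly_op J [:-l, 1:] A (spectral_proj l x) = poly_op J (smult c (\<Prod>m\<in>S. [:-m, 1:])) A x"
    unfolding spectral_proj_def
    using poly_op_mult[OF bounded x, of "[:-l, 1:]" "lagrange l"] by simp
  also have "\<dots> = (\<lambda>_. 0)" using poly_op_smult[OF bounded x] annihilates[OF x] by simp
  finally have "(\<lambda>i. A (spectral_proj l x) i - l * spectral_proj l x i) = (\<lambda>_. 0)"
    using poly_op_linear_factor[OF bounded spectral_proj_l2[OF x]] by simp
  thus ?thesis by (simp add: fun_eq_iff)
qed

lemma spectral_proj_orth:
  assumes l: "l \<in> S" and n: "n \<in> S" and x: "x \<in> sep_l2 J"
  shows "spectral_proj l (spectral_proj n x) = (if l = n then spectral_proj n x else (\<lambda>_. 0))"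
proof -
  have "spectral_proj l (spectral_proj n x) = (\<lambda>i. poly (lagrange l) n * spectral_proj n x i)"
    unfolding spectral_proj_def[of l]
    by (rule poly_op_eigenvec[OF bounded spectral_proj_l2[OF x] op_spectral_proj[OF n x]])
  thus ?thesis using poly_lagrange[OF l n] by (auto simp: fun_eq_iff)
qed

lemma op_eq_sum_spectral_proj: "x \<in> sep_l2 J \<Longrightarrow> A x = (\<lambda>i. \<Sum>l\<in>S. l * spectral_proj l x i)"
proof -
  assume x: "x \<in> sep_l2 J"
  have "A x = A (\<lambda>i. \<Sum>l\<in>S. spectral_proj l x i)" using sum_spectral_proj[OF x] by simp
  also have "\<dots> = (\<lambda>i. \<Sum>l\<in>S. A (spectral_proj l x) i)"
    by (rule bounded_op_sum[OF bounded finite_index]) (rule spectral_proj_l2[OF x])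
  also have "\<dots> = (\<lambda>i. \<Sum>l\<in>S. l * spectral_proj l x i)"
    using x by (intro ext sum.cong refl) (simp add: op_spectral_proj)
  finally show ?thesis .
qed

definition eigenvalues :: "complex set" where
  "eigenvalues = {l \<in> S. \<exists>x\<in>sep_l2 J. spectral_proj l x \<noteq> (\<lambda>_. 0)}"

lemma eigenvalues_subset: "eigenvalues \<subseteq> S" by (auto simp: eigenvalues_def)

lemma eigenvalues_real: "l \<in> eigenvalues \<Longrightarrow> cnj l = l"
proof -
  assume "l \<in> eigenvalues"
  then obtain x where l: "l \<in> S" and x: "x \<in> sep_l2 J" "spectral_proj l x \<noteq> (\<lambda>_. 0)"
    by (auto simp: eigenvalues_def)
  show ?thesis
    by (rule eigenvalue_real[OF symmetric spectral_proj_l2[OF x(1)] x(2)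
      op_spectral_proj[OF l x(1)]])
qed

lemma spectral_proj_zero:
  "l \<in> S \<Longrightarrow> l \<notin> eigenvalues \<Longrightarrow> x \<in> sep_l2 J \<Longrightarrow> spectral_proj l x = (\<lambda>_. 0)"
  by (auto simp: eigenvalues_def)

lemma spectral_proj_inner_orth:
  assumes l: "l \<in> eigenvalues" and m: "m \<in> S" "m \<noteq> l" and x: "x \<in> sep_l2 J" and y: "y \<in> sep_l2 J"
  shows "sep_inner J (spectral_proj l x) (spectral_proj m y) = 0"
  using l m eigenvalues_subset
  by (intro eigenvecs_orthogonal[OF symmetric spectral_proj_l2[OF x] op_spectral_proj[OF _ x]
        eigenvalues_real[OF l] spectral_proj_l2[OF y] op_spectral_proj[OF m(1) y]]) auto

lemma spectral_proj_symmetric: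
  assumes l: "l \<in> eigenvalues"
  shows "sep_symmetric J (spectral_proj l)"
  unfolding sep_symmetric_def
proof (intro ballI)
  fix x y assume x: "x \<in> sep_l2 J" and y: "y \<in> sep_l2 J"
  have lS: "l \<in> S" using l eigenvalues_subset by blast
  let ?P = spectral_proj
  have "sep_inner J (?P l x) y = (\<Sum>m\<in>S. sep_inner J (?P l x) (?P m y))"
    using sep_inner_sum_right[of S "?P l x" J "\<lambda>m. ?P m y"] finite_index spectral_proj_l2 x y
      sum_spectral_proj[OF y] by simp
  also have "\<dots> = (\<Sum>m\<in>{l}. sep_inner J (?P l x) (?P m y))"
    by (rule sum.mono_neutral_right)
      (use finite_index lS spectral_proj_inner_orth[OF l _ _ x y] in auto)
  also have "\<dots> = (\<Sum>m\<in>{l}. sep_inner J (?P m x) (?P l y))" by simp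
  also have "\<dots> = (\<Sum>m\<in>S. sep_inner J (?P m x) (?P l y))"
  proof (rule sum.mono_neutral_left)
    show "\<forall>m\<in>S - {l}. sep_inner J (?P m x) (?P l y) = 0"
      using spectral_proj_inner_orth[OF l _ _ y x] sep_inner_commute
      by (metis DiffE complex_cnj_zero singletonI)
  qed (use finite_index lS in auto)
  also have "\<dots> = sep_inner J x (?P l y)"
    using sep_inner_sum_left[of S "?P l y" J "\<lambda>m. ?P m x"] finite_index spectral_proj_l2 x y
      sum_spectral_proj[OF x] by simp
  finally show "sep_inner J (?P l x) y = sep_inner J x (?P l y)" .
qed

lemma sum_eigenvalues:
  "x \<in> sep_l2 J \<Longrightarrow>
   (\<lambda>i. \<Sum>l\<in>S. f l * spectral_proj l x i) = (\<lambda>i. \<Sum>l\<in>eigenvalues. f l * spectral_proj l x i)"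
  by (intro ext sum.mono_neutral_right finite_index eigenvalues_subset)
    (auto simp: spectral_proj_zero)

lemma resolution_eigenvalues: "resolution_of_identity J eigenvalues spectral_proj"
proof
  show "finite eigenvalues" using finite_subset[OF eigenvalues_subset finite_index] .
  show "\<And>s. s \<in> eigenvalues \<Longrightarrow> sep_bounded_op J (spectral_proj s)" by (rule spectral_proj_bounded)
  show "\<And>s. s \<in> eigenvalues \<Longrightarrow> sep_symmetric J (spectral_proj s)" by (rule spectral_proj_symmetric)
  show "\<And>s t x. s \<in> eigenvalues \<Longrightarrow> t \<in> eigenvalues \<Longrightarrow> x \<in> sep_l2 J \<Longrightarrow>
      spectral_proj s (spectral_proj t x) = (if s = t then spectral_proj t x else (\<lambda>_. 0))"
    using spectral_proj_orth eigenvalues_subset by blast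
  show "\<And>x. x \<in> sep_l2 J \<Longrightarrow> (\<lambda>i. \<Sum>s\<in>eigenvalues. spectral_proj s x i) = x"
    using sum_eigenvalues[of _ "\<lambda>_. 1"] sum_spectral_proj by simp
qed

lemma op_eq_sum_eigenvalues: "x \<in> sep_l2 J \<Longrightarrow> A x = (\<lambda>i. \<Sum>l\<in>eigenvalues. l * spectral_proj l x i)"
  using op_eq_sum_spectral_proj sum_eigenvalues[of _ "\<lambda>l. l"] by simp

end

lemma finite_spectrum_resolution:
  assumes obs: "sep_observable J A" and fin: "finite (sep_spectrum J A)"
  obtains P where "resolution_of_identity J (sep_spectrum J A) P"
    "A = resolution_of_identity.spectral_op (sep_spectrum J A) P (\<lambda>l. l)"
    "\<And>l. l \<in> sep_spectrum J A \<Longrightarrow> cnj l = l"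
proof -
  have A: "sep_bounded_op J A" and sym: "sep_symmetric J A"
    using obs by (auto simp: sep_observable_iff)
  define S where "S = insert 0 (sep_spectrum J A)"
  have S: "finite S" "S \<noteq> {}" "sep_spectrum J A \<subseteq> S" using fin by (auto simp: S_def)
  interpret C: annihilated_op J A S
    using A sym S poly_op_annihilates[OF A sym S] by unfold_locales auto
  interpret R: resolution_of_identity J C.eigenvalues C.spectral_proj
    by (rule C.resolution_eigenvalues)
  have "sep_spectrum J A = (\<lambda>s. s) ` R.proj_support"
    by (rule R.sep_spectrum_lincomb[of A "\<lambda>s. s", OF C.op_eq_sum_eigenvalues])
  also have "R.proj_support = C.eigenvalues"
    unfolding R.proj_support_def by (auto simp: C.eigenvalues_def)
  finally have spectrum: "sep_spectrum J A = C.eigenvalues" by simp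
  have "A = R.spectral_op (\<lambda>l. l)"
  proof
    fix x show "A x = R.spectral_op (\<lambda>l. l) x"
      using C.op_eq_sum_eigenvalues bounded_op_outside[OF A] R.proj_outside
      by (cases "x \<in> sep_l2 J") (auto simp: R.spectral_op_def)
  qed
  then show ?thesis
    using that R.resolution_of_identity_axioms C.eigenvalues_real unfolding spectrum by auto
qed

section \<open>Tensor products and transposes\<close>

definition id_tensor ::
  "'i set \<Rightarrow> (('i \<Rightarrow> complex) \<Rightarrow> ('i \<Rightarrow> complex)) \<Rightarrow> ('i \<times> 'i \<Rightarrow> complex) \<Rightarrow> ('i \<times> 'i \<Rightarrow> complex)" where
  "id_tensor I B z = (if z \<in> sep_l2 (I \<times> I) then (\<lambda>(i, j). B (\<lambda>k. z (i, k)) j) else (\<lambda>_. 0))"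

definition swap_vec :: "('i \<times> 'i \<Rightarrow> complex) \<Rightarrow> ('i \<times> 'i \<Rightarrow> complex)" where
  "swap_vec z = (\<lambda>(i, j). z (j, i))"

definition tensor_id ::
  "'i set \<Rightarrow> (('i \<Rightarrow> complex) \<Rightarrow> ('i \<Rightarrow> complex)) \<Rightarrow> ('i \<times> 'i \<Rightarrow> complex) \<Rightarrow> ('i \<times> 'i \<Rightarrow> complex)" where
  "tensor_id I B z = swap_vec (id_tensor I B (swap_vec z))"

definition tensor_vec :: "('i \<Rightarrow> complex) \<Rightarrow> ('i \<Rightarrow> complex) \<Rightarrow> ('i \<times> 'i \<Rightarrow> complex)" where
  "tensor_vec x y = (\<lambda>(i, j). x i * y j)"

lemma swap_vec_swap_vec [simp]: "swap_vec (swap_vec z) = z"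
  by (simp add: swap_vec_def fun_eq_iff)

lemma swap_vec_apply [simp]: "swap_vec z (i, j) = z (j, i)"
  by (simp add: swap_vec_def)

lemma bij_betw_swap_square: "bij_betw prod.swap (I \<times> I) (I \<times> I)"
  by (auto simp: bij_betw_def inj_on_def image_def)

lemma swap_vec_l2: "z \<in> sep_l2 (I \<times> I) \<Longrightarrow> swap_vec z \<in> sep_l2 (I \<times> I)"
proof -
  assume z: "z \<in> sep_l2 (I \<times> I)"
  have "(\<lambda>ij. (cmod (z (prod.swap ij)))^2) summable_on (I \<times> I)"
    using summable_on_reindex_bij_betw[OF bij_betw_swap_square, of "\<lambda>ij. (cmod (z ij))^2"]
      sep_l2_summable[OF z] by simp
  moreover have "(\<lambda>ij. (cmod (z (prod.swap ij)))^2) = (\<lambda>ij. (cmod (swap_vec z ij))^2)"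
    by (auto simp: swap_vec_def)
  ultimately show ?thesis using z by (auto simp: sep_l2_def swap_vec_def)
qed

lemma swap_vec_l2_iff: "swap_vec z \<in> sep_l2 (I \<times> I) \<longleftrightarrow> z \<in> sep_l2 (I \<times> I)"
  using swap_vec_l2[of z I] swap_vec_l2[of "swap_vec z" I] by auto

lemma swap_vec_inner: "sep_inner (I \<times> I) (swap_vec z) (swap_vec w) = sep_inner (I \<times> I) z w"
proof -
  have "sep_inner (I \<times> I) (swap_vec z) (swap_vec w)
      = (\<Sum>\<^sub>\<infinity>ij\<in>I \<times> I. cnj (z (prod.swap ij)) * w (prod.swap ij))"
    unfolding sep_inner_def by (intro infsum_cong) (auto simp: swap_vec_def)
  also have "\<dots> = sep_inner (I \<times> I) z w"
    unfolding sep_inner_def by (rule infsum_reindex_bij_betw[OF bij_betw_swap_square])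
  finally show ?thesis .
qed

lemma swap_vec_norm_sq: "sep_norm_sq (I \<times> I) (swap_vec z) = sep_norm_sq (I \<times> I) z"
proof -
  have "sep_norm_sq (I \<times> I) (swap_vec z) = (\<Sum>\<^sub>\<infinity>ij\<in>I \<times> I. (cmod (z (prod.swap ij)))^2)"
    unfolding sep_norm_sq_def by (intro infsum_cong) (auto simp: swap_vec_def)
  also have "\<dots> = sep_norm_sq (I \<times> I) z"
    unfolding sep_norm_sq_def by (rule infsum_reindex_bij_betw[OF bij_betw_swap_square])
  finally show ?thesis .
qed

lemma swap_vec_norm: "sep_norm (I \<times> I) (swap_vec z) = sep_norm (I \<times> I) z"
  by (simp add: sep_norm_sqrt swap_vec_norm_sq)

lemma sep_l2_row:
  assumes z: "z \<in> sep_l2 (I \<times> I)"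
  shows "(\<lambda>k. z (i, k)) \<in> sep_l2 I"
proof (cases "i \<in> I")
  case True
  have "(\<lambda>(x, y). (\<lambda>x y. (cmod (z (x, y)))^2) x y) summable_on Sigma I (\<lambda>_. I)"
    using sep_l2_summable[OF z] by (simp add: case_prod_eta[of "\<lambda>p. (cmod (z p))^2"])
  hence "(\<lambda>y. (cmod (z (i, y)))^2) summable_on I"
    using summable_on_SigmaD1[of "\<lambda>x y. (cmod (z (x, y)))^2" I "\<lambda>_. I" i] True by simp
  thus ?thesis using z by (auto simp: sep_l2_def)
next
  case False
  hence "(\<lambda>k. z (i, k)) = (\<lambda>_. 0)" using z by (auto simp: sep_l2_def)
  thus ?thesis by simp
qed

lemma sep_norm_sq_rows:
  assumes z: "z \<in> sep_l2 (I \<times> I)"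
  shows "(\<lambda>i. sep_norm_sq I (\<lambda>k. z (i, k))) summable_on I"
    and "sep_norm_sq (I \<times> I) z = (\<Sum>\<^sub>\<infinity>i\<in>I. sep_norm_sq I (\<lambda>k. z (i, k)))"
proof -
  have s: "(\<lambda>(x, y). (\<lambda>x y. (cmod (z (x, y)))^2) x y) summable_on Sigma I (\<lambda>_. I)"
    using sep_l2_summable[OF z] by (simp add: case_prod_eta[of "\<lambda>p. (cmod (z p))^2"])
  show "(\<lambda>i. sep_norm_sq I (\<lambda>k. z (i, k))) summable_on I"
    using summable_on_Sigma_banach[OF s] by (simp add: sep_norm_sq_def)
  show "sep_norm_sq (I \<times> I) z = (\<Sum>\<^sub>\<infinity>i\<in>I. sep_norm_sq I (\<lambda>k. z (i, k)))"
    using infsum_Sigma'_banach[OF s]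
    by (simp add: sep_norm_sq_def case_prod_eta[of "\<lambda>p. (cmod (z p))^2"])
qed

lemma sep_inner_rows:
  assumes z: "z \<in> sep_l2 (I \<times> I)" and w: "w \<in> sep_l2 (I \<times> I)"
  shows "sep_inner (I \<times> I) z w = (\<Sum>\<^sub>\<infinity>i\<in>I. sep_inner I (\<lambda>k. z (i, k)) (\<lambda>k. w (i, k)))"
proof -
  have s: "(\<lambda>(x, y). (\<lambda>x y. cnj (z (x, y)) * w (x, y)) x y) summable_on Sigma I (\<lambda>_. I)"
    using sep_inner_summable[OF z w] by (simp add: case_prod_eta[of "\<lambda>p. cnj (z p) * w p"])
  show ?thesis using infsum_Sigma'_banach[OF s]
    by (simp add: sep_inner_def case_prod_eta[of "\<lambda>p. cnj (z p) * w p"])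
qed

lemma sep_l2_of_rows:
  assumes rows: "\<And>i. i \<in> I \<Longrightarrow> (\<lambda>k. z (i, k)) \<in> sep_l2 I"
    and out: "\<And>i j. i \<notin> I \<Longrightarrow> z (i, j) = 0"
    and summ: "(\<lambda>i. sep_norm_sq I (\<lambda>k. z (i, k))) summable_on I"
  shows "z \<in> sep_l2 (I \<times> I)"
proof -
  have "(\<lambda>ij. (cmod (z ij))^2) summable_on Sigma I (\<lambda>_. I)"
  proof (rule summable_on_SigmaI[where g="\<lambda>i. sep_norm_sq I (\<lambda>k. z (i, k))"])
    fix i assume i: "i \<in> I"
    show "((\<lambda>y. (cmod (z (i, y)))^2) has_sum sep_norm_sq I (\<lambda>k. z (i, k))) I"
      unfolding sep_norm_sq_def using sep_l2_summable[OF rows[OF i]] by (simp add: has_sum_infsum)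
  qed (use summ in auto)
  moreover have "z ij = 0" if "ij \<notin> I \<times> I" for ij
  proof -
    obtain i j where ij: "ij = (i, j)" by (cases ij)
    show ?thesis
    proof (cases "i \<in> I")
      case True
      hence "j \<notin> I" using that ij by auto
      thus ?thesis using sep_l2_outside[OF rows[OF True]] ij by simp
    qed (use out ij in auto)
  qed
  ultimately show ?thesis by (simp add: sep_l2_def)
qed

lemma tensor_vec_l2: "x \<in> sep_l2 I \<Longrightarrow> y \<in> sep_l2 I \<Longrightarrow> tensor_vec x y \<in> sep_l2 (I \<times> I)"
proof (rule sep_l2_of_rows)
  assume x: "x \<in> sep_l2 I" and y: "y \<in> sep_l2 I"
  show "(\<lambda>k. tensor_vec x y (i, k)) \<in> sep_l2 I" for i using y by (auto simp: tensor_vec_def)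
  show "tensor_vec x y (i, j) = 0" if "i \<notin> I" for i j using sep_l2_outside[OF x that]
    by (simp add: tensor_vec_def)
  have "(\<lambda>i. (cmod (x i))^2 * sep_norm_sq I y) summable_on I"
    using sep_l2_summable[OF x] by (rule summable_on_cmult_left)
  thus "(\<lambda>i. sep_norm_sq I (\<lambda>k. tensor_vec x y (i, k))) summable_on I"
    by (simp add: tensor_vec_def sep_norm_sq_scale)
qed

context
  fixes I :: "'i set" and B :: "('i \<Rightarrow> complex) \<Rightarrow> ('i \<Rightarrow> complex)"
  assumes B: "sep_bounded_op I B"
begin

lemma id_tensor_row: "z \<in> sep_l2 (I \<times> I) \<Longrightarrow> (\<lambda>k. id_tensor I B z (i, k)) = B (\<lambda>k. z (i, k))"
  by (simp add: id_tensor_def)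

lemma id_tensor_row_norm_sq_le:
  assumes c: "c \<ge> 0" "\<And>x. x \<in> sep_l2 I \<Longrightarrow> sep_norm I (B x) \<le> c * sep_norm I x"
    and z: "z \<in> sep_l2 (I \<times> I)"
  shows "sep_norm_sq I (\<lambda>k. id_tensor I B z (i, k)) \<le> c^2 * sep_norm_sq I (\<lambda>k. z (i, k))"
proof -
  have "sep_norm I (B (\<lambda>k. z (i, k))) \<le> c * sep_norm I (\<lambda>k. z (i, k))"
    using c(2)[OF sep_l2_row[OF z]] .
  hence "(sep_norm I (B (\<lambda>k. z (i, k))))^2 \<le> (c * sep_norm I (\<lambda>k. z (i, k)))^2"
    by (simp add: power_mono sep_norm_nonneg)
  thus ?thesis by (simp add: id_tensor_row[OF z] sep_norm_sq_eq power_mult_distrib)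
qed

lemma id_tensor_l2: "z \<in> sep_l2 (I \<times> I) \<Longrightarrow> id_tensor I B z \<in> sep_l2 (I \<times> I)"
proof -
  assume z: "z \<in> sep_l2 (I \<times> I)"
  obtain c where c: "c \<ge> 0" "\<And>x. x \<in> sep_l2 I \<Longrightarrow> sep_norm I (B x) \<le> c * sep_norm I x"
    using bounded_op_bound[OF B] by blast
  show ?thesis
  proof (rule sep_l2_of_rows)
    show "(\<lambda>k. id_tensor I B z (i, k)) \<in> sep_l2 I" for i
      using id_tensor_row[OF z] bounded_op_l2[OF B sep_l2_row[OF z]] by simp
    show "id_tensor I B z (i, j) = 0" if "i \<notin> I" for i j
    proof -
      have "(\<lambda>k. z (i, k)) = (\<lambda>_. 0)" using z that by (auto simp: sep_l2_def)
      thus ?thesis using z bounded_op_zero[OF B] by (simp add: id_tensor_def)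
    qed
    have "(\<lambda>i. c^2 * sep_norm_sq I (\<lambda>k. z (i, k))) summable_on I"
      using sep_norm_sq_rows(1)[OF z] by (rule summable_on_cmult_right)
    thus "(\<lambda>i. sep_norm_sq I (\<lambda>k. id_tensor I B z (i, k))) summable_on I"
      by (rule summable_on_comparison_test)
        (simp_all add: sep_norm_sq_nonneg id_tensor_row_norm_sq_le[OF c z])
  qed
qed

lemma id_tensor_bounded: "sep_bounded_op (I \<times> I) (id_tensor I B)"
proof -
  obtain c where c: "c \<ge> 0" "\<And>x. x \<in> sep_l2 I \<Longrightarrow> sep_norm I (B x) \<le> c * sep_norm I x"
    using bounded_op_bound[OF B] by blast
  show ?thesis
  proof (rule bounded_opI[where c=c])
    fix z assume z: "z \<in> sep_l2 (I \<times> I)"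
    have rl: "id_tensor I B z \<in> sep_l2 (I \<times> I)" by (rule id_tensor_l2[OF z])
    have "sep_norm_sq (I \<times> I) (id_tensor I B z)
        = (\<Sum>\<^sub>\<infinity>i\<in>I. sep_norm_sq I (\<lambda>k. id_tensor I B z (i, k)))" by (rule sep_norm_sq_rows(2)[OF rl])
    also have "\<dots> \<le> (\<Sum>\<^sub>\<infinity>i\<in>I. c^2 * sep_norm_sq I (\<lambda>k. z (i, k)))"
    proof (rule infsum_mono)
      show "(\<lambda>i. sep_norm_sq I (\<lambda>k. id_tensor I B z (i, k))) summable_on I"
        by (rule sep_norm_sq_rows(1)[OF rl])
      show "(\<lambda>i. c^2 * sep_norm_sq I (\<lambda>k. z (i, k))) summable_on I"
        using sep_norm_sq_rows(1)[OF z] by (rule summable_on_cmult_right)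
    qed (rule id_tensor_row_norm_sq_le[OF c z])
    also have "\<dots> = c^2 * sep_norm_sq (I \<times> I) z"
      by (simp add: infsum_cmult_right' sep_norm_sq_rows(2)[OF z])
    finally have "(sep_norm (I \<times> I) (id_tensor I B z))^2 \<le> (c * sep_norm (I \<times> I) z)^2"
      by (simp add: sep_norm_sq_eq power_mult_distrib)
    thus "sep_norm (I \<times> I) (id_tensor I B z) \<le> c * sep_norm (I \<times> I) z"
      using c(1) by (meson mult_nonneg_nonneg power2_le_imp_le sep_norm_nonneg)
  next
    fix z w :: "'i \<times> 'i \<Rightarrow> complex" and a b
    assume z: "z \<in> sep_l2 (I \<times> I)" and w: "w \<in> sep_l2 (I \<times> I)"
    have zw: "(\<lambda>ij. a * z ij + b * w ij) \<in> sep_l2 (I \<times> I)" using z w by blast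
    show "id_tensor I B (\<lambda>ij. a * z ij + b * w ij)
        = (\<lambda>ij. a * id_tensor I B z ij + b * id_tensor I B w ij)"
    proof (rule ext, clarify)
      fix i j
      have "B (\<lambda>k. a * z (i, k) + b * w (i, k))
          = (\<lambda>k. a * B (\<lambda>k. z (i, k)) k + b * B (\<lambda>k. w (i, k)) k)"
        by (rule bounded_op_linear[OF B sep_l2_row[OF z] sep_l2_row[OF w]])
      thus "id_tensor I B (\<lambda>ij. a * z ij + b * w ij) (i, j)
          = a * id_tensor I B z (i, j) + b * id_tensor I B w (i, j)"
        using z w zw by (simp add: id_tensor_def fun_eq_iff)
    qed
  next
    show "\<And>x. x \<in> sep_l2 (I \<times> I) \<Longrightarrow> id_tensor I B x \<in> sep_l2 (I \<times> I)" by (rule id_tensor_l2)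
    show "\<And>x. x \<notin> sep_l2 (I \<times> I) \<Longrightarrow> id_tensor I B x = (\<lambda>_. 0)" by (simp add: id_tensor_def)
  qed
qed

lemma id_tensor_symmetric: "sep_symmetric I B \<Longrightarrow> sep_symmetric (I \<times> I) (id_tensor I B)"
  unfolding sep_symmetric_def
proof (intro ballI)
  fix z w assume sa: "\<forall>x\<in>sep_l2 I. \<forall>y\<in>sep_l2 I. sep_inner I (B x) y = sep_inner I x (B y)"
    and z: "z \<in> sep_l2 (I \<times> I)" and w: "w \<in> sep_l2 (I \<times> I)"
  have "sep_inner (I \<times> I) (id_tensor I B z) w
      = (\<Sum>\<^sub>\<infinity>i\<in>I. sep_inner I (B (\<lambda>k. z (i, k))) (\<lambda>k. w (i, k)))"
    using sep_inner_rows[OF id_tensor_l2[OF z] w] id_tensor_row[OF z] by simp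
  also have "\<dots> = (\<Sum>\<^sub>\<infinity>i\<in>I. sep_inner I (\<lambda>k. z (i, k)) (B (\<lambda>k. w (i, k))))"
    using sa sep_l2_row[OF z] sep_l2_row[OF w] by simp
  also have "\<dots> = sep_inner (I \<times> I) z (id_tensor I B w)"
    using sep_inner_rows[OF z id_tensor_l2[OF w]] id_tensor_row[OF w] by simp
  finally show "sep_inner (I \<times> I) (id_tensor I B z) w = sep_inner (I \<times> I) z (id_tensor I B w)" .
qed

lemma id_tensor_tensor_vec: "x \<in> sep_l2 I \<Longrightarrow> y \<in> sep_l2 I \<Longrightarrow>
    id_tensor I B (tensor_vec x y) = tensor_vec x (B y)"
proof -
  assume x: "x \<in> sep_l2 I" and y: "y \<in> sep_l2 I"
  have "B (\<lambda>k. x i * y k) = (\<lambda>k. x i * B y k)" for i by (rule bounded_op_scale[OF B y])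
  thus ?thesis using tensor_vec_l2[OF x y] by (simp add: id_tensor_def tensor_vec_def fun_eq_iff)
qed

lemma tensor_id_l2: "z \<in> sep_l2 (I \<times> I) \<Longrightarrow> tensor_id I B z \<in> sep_l2 (I \<times> I)"
  unfolding tensor_id_def by (intro swap_vec_l2 id_tensor_l2)

lemma tensor_id_bounded: "sep_bounded_op (I \<times> I) (tensor_id I B)"
proof -
  obtain c where c: "\<And>z. z \<in> sep_l2 (I \<times> I) \<Longrightarrow>
      sep_norm (I \<times> I) (id_tensor I B z) \<le> c * sep_norm (I \<times> I) z"
    using bounded_op_bound[OF id_tensor_bounded] by blast
  show ?thesis
  proof (rule bounded_opI[where c=c])
    fix z assume z: "z \<in> sep_l2 (I \<times> I)"
    show "sep_norm (I \<times> I) (tensor_id I B z) \<le> c * sep_norm (I \<times> I) z"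
      using c[OF swap_vec_l2[OF z]] by (simp add: tensor_id_def swap_vec_norm)
  next
    fix z w :: "'i \<times> 'i \<Rightarrow> complex" and a b
    assume z: "z \<in> sep_l2 (I \<times> I)" and w: "w \<in> sep_l2 (I \<times> I)"
    have "swap_vec (\<lambda>ij. a * z ij + b * w ij) = (\<lambda>ij. a * swap_vec z ij + b * swap_vec w ij)"
      by (auto simp: swap_vec_def)
    thus "tensor_id I B (\<lambda>ij. a * z ij + b * w ij)
        = (\<lambda>ij. a * tensor_id I B z ij + b * tensor_id I B w ij)"
      unfolding tensor_id_def
      using bounded_op_linear[OF id_tensor_bounded swap_vec_l2[OF z] swap_vec_l2[OF w]]
      by (auto simp: swap_vec_def)
  next
    fix z assume "z \<notin> sep_l2 (I \<times> I)"
    hence "swap_vec z \<notin> sep_l2 (I \<times> I)" using swap_vec_l2_iff by blast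
    hence "id_tensor I B (swap_vec z) = (\<lambda>_. 0)" by (simp add: id_tensor_def)
    thus "tensor_id I B z = (\<lambda>_. 0)" by (auto simp: tensor_id_def swap_vec_def fun_eq_iff)
  qed (simp add: tensor_id_l2)
qed

lemma tensor_id_symmetric: "sep_symmetric I B \<Longrightarrow> sep_symmetric (I \<times> I) (tensor_id I B)"
proof -
  assume sa: "sep_symmetric I B"
  have r: "sep_symmetric (I \<times> I) (id_tensor I B)" by (rule id_tensor_symmetric[OF sa])
  show ?thesis unfolding sep_symmetric_def
  proof (intro ballI)
    fix z w assume z: "z \<in> sep_l2 (I \<times> I)" and w: "w \<in> sep_l2 (I \<times> I)"
    have "sep_inner (I \<times> I) (tensor_id I B z) w
        = sep_inner (I \<times> I) (id_tensor I B (swap_vec z)) (swap_vec w)"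
      unfolding tensor_id_def
      using swap_vec_inner[of I "id_tensor I B (swap_vec z)" "swap_vec w"] by simp
    also have "\<dots> = sep_inner (I \<times> I) (swap_vec z) (id_tensor I B (swap_vec w))"
      by (rule sep_symmetricD[OF r swap_vec_l2[OF z] swap_vec_l2[OF w]])
    also have "\<dots> = sep_inner (I \<times> I) z (tensor_id I B w)"
      unfolding tensor_id_def
      using swap_vec_inner[of I "swap_vec z" "id_tensor I B (swap_vec w)"] by simp
    finally show "sep_inner (I \<times> I) (tensor_id I B z) w = sep_inner (I \<times> I) z (tensor_id I B w)" .
  qed
qed

lemma swap_vec_tensor_vec: "swap_vec (tensor_vec x y) = tensor_vec y x"
  by (auto simp: swap_vec_def tensor_vec_def fun_eq_iff)

lemma tensor_id_tensor_vec: "x \<in> sep_l2 I \<Longrightarrow> y \<in> sep_l2 I \<Longrightarrow>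
    tensor_id I B (tensor_vec x y) = tensor_vec (B x) y"
  by (simp add: tensor_id_def swap_vec_tensor_vec id_tensor_tensor_vec)

end


definition conj_vec :: "('i \<Rightarrow> complex) \<Rightarrow> ('i \<Rightarrow> complex)" where
  "conj_vec x = (\<lambda>i. cnj (x i))"

lemma conj_vec_conj_vec[simp]: "conj_vec (conj_vec x) = x" by (simp add: conj_vec_def)

lemma conj_vec_l2: "x \<in> sep_l2 J \<Longrightarrow> conj_vec x \<in> sep_l2 J"
  by (simp add: sep_l2_def conj_vec_def)

lemma conj_vec_norm: "sep_norm J (conj_vec x) = sep_norm J x"
  by (simp add: sep_norm_def conj_vec_def)

lemma conj_vec_inner: "sep_inner J (conj_vec x) (conj_vec y) = cnj (sep_inner J x y)"
  unfolding sep_inner_def conj_vec_def infsum_cnj[symmetric] by simp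

definition conj_op ::
  "'i set \<Rightarrow> (('i \<Rightarrow> complex) \<Rightarrow> ('i \<Rightarrow> complex)) \<Rightarrow> ('i \<Rightarrow> complex) \<Rightarrow> ('i \<Rightarrow> complex)" where
  "conj_op I B x = (if x \<in> sep_l2 I then conj_vec (B (conj_vec x)) else (\<lambda>_. 0))"

context
  fixes I :: "'i set" and B :: "('i \<Rightarrow> complex) \<Rightarrow> ('i \<Rightarrow> complex)"
  assumes B: "sep_bounded_op I B"
begin

lemma conj_op_l2: "x \<in> sep_l2 I \<Longrightarrow> conj_op I B x \<in> sep_l2 I"
  by (simp add: conj_op_def conj_vec_l2 bounded_op_l2[OF B])

lemma conj_op_bounded: "sep_bounded_op I (conj_op I B)"
proof -
  obtain c where c: "\<And>x. x \<in> sep_l2 I \<Longrightarrow> sep_norm I (B x) \<le> c * sep_norm I x"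
    using bounded_op_bound[OF B] by blast
  show ?thesis
  proof (rule bounded_opI[where c=c])
    fix x assume x: "x \<in> sep_l2 I"
    show "sep_norm I (conj_op I B x) \<le> c * sep_norm I x"
      using c[OF conj_vec_l2[OF x]] x by (simp add: conj_op_def conj_vec_norm)
  next
    fix x y :: "'i \<Rightarrow> complex" and a b
    assume x: "x \<in> sep_l2 I" and y: "y \<in> sep_l2 I"
    have "conj_vec (\<lambda>i. a * x i + b * y i) = (\<lambda>i. cnj a * conj_vec x i + cnj b * conj_vec y i)"
      by (simp add: conj_vec_def)
    thus "conj_op I B (\<lambda>i. a * x i + b * y i) = (\<lambda>i. a * conj_op I B x i + b * conj_op I B y i)"
      using x y bounded_op_linear[OF B conj_vec_l2[OF x] conj_vec_l2[OF y]]
      by (simp add: conj_op_def conj_vec_def sep_l2_lincomb)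
  next
    show "\<And>x. x \<in> sep_l2 I \<Longrightarrow> conj_op I B x \<in> sep_l2 I" by (rule conj_op_l2)
    show "\<And>x. x \<notin> sep_l2 I \<Longrightarrow> conj_op I B x = (\<lambda>_. 0)" by (simp add: conj_op_def)
  qed
qed

lemma conj_op_symmetric: "sep_symmetric I B \<Longrightarrow> sep_symmetric I (conj_op I B)"
  unfolding sep_symmetric_def
proof (intro ballI)
  fix x y assume sa: "\<forall>x\<in>sep_l2 I. \<forall>y\<in>sep_l2 I. sep_inner I (B x) y = sep_inner I x (B y)"
    and x: "x \<in> sep_l2 I" and y: "y \<in> sep_l2 I"
  have "sep_inner I (conj_op I B x) y
      = sep_inner I (conj_vec (B (conj_vec x))) (conj_vec (conj_vec y))"
    using x by (simp add: conj_op_def)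
  also have "\<dots> = cnj (sep_inner I (B (conj_vec x)) (conj_vec y))" by (rule conj_vec_inner)
  also have "\<dots> = cnj (sep_inner I (conj_vec x) (B (conj_vec y)))"
    using sa conj_vec_l2[OF x] conj_vec_l2[OF y] by simp
  also have "\<dots> = sep_inner I (conj_vec (conj_vec x)) (conj_vec (B (conj_vec y)))"
    by (rule conj_vec_inner[symmetric])
  also have "\<dots> = sep_inner I x (conj_op I B y)" using y by (simp add: conj_op_def)
  finally show "sep_inner I (conj_op I B x) y = sep_inner I x (conj_op I B y)" .
qed

end

lemma sep_unit_eq: "sep_unit = unit_vec" by (simp add: fun_eq_iff sep_unit_def unit_vec_def)

lemma sep_tensor_eq: "sep_tensor = tensor_vec"
  by (simp add: fun_eq_iff sep_tensor_def tensor_vec_def)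

lemma sep_inner_unit_vec: "w \<in> sep_l2 J \<Longrightarrow> i \<in> J \<Longrightarrow> sep_inner J (unit_vec i) w = w i"
proof -
  assume w: "w \<in> sep_l2 J" and i: "i \<in> J"
  have "sep_inner J (unit_vec i) w = (\<Sum>\<^sub>\<infinity>k\<in>J. if k = i then w k else 0)"
    unfolding sep_inner_def by (intro infsum_cong) (simp add: unit_vec_def)
  also have "\<dots> = (\<Sum>\<^sub>\<infinity>k\<in>{i}. if k = i then w k else 0)"
    by (rule infsum_cong_neutral) (use i in auto)
  also have "\<dots> = w i" by simp
  finally show ?thesis .
qed

lemma sep_transp_eq:
  assumes obs: "sep_observable I A" and y: "y \<in> sep_l2 I"
  shows "sep_transp I A y = conj_op I A y"
proof (rule ext)
  fix i
  have A: "sep_bounded_op I A" and sa: "sep_symmetric I A" using obs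
    by (auto simp: sep_observable_iff)
  show "sep_transp I A y i = conj_op I A y i"
  proof (cases "i \<in> I")
    case True
    have ui: "unit_vec i \<in> sep_l2 I" using unit_vec_l2[OF True] .
    have "conj_op I A y i = cnj (A (conj_vec y) i)" using y by (simp add: conj_op_def conj_vec_def)
    also have "A (conj_vec y) i = sep_inner I (unit_vec i) (A (conj_vec y))"
      using sep_inner_unit_vec[OF bounded_op_l2[OF A conj_vec_l2[OF y]] True] by simp
    also have "\<dots> = sep_inner I (A (unit_vec i)) (conj_vec y)"
      using sep_symmetricD[OF sa ui conj_vec_l2[OF y]] by simp
    also have "cnj \<dots> = (\<Sum>\<^sub>\<infinity>j\<in>I. y j * A (unit_vec i) j)"
      unfolding sep_inner_def infsum_cnj[symmetric] by (simp add: conj_vec_def mult.commute)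
    finally show ?thesis using True by (simp add: sep_transp_def sep_unit_eq)
  next
    case False
    have "conj_op I A y i = 0"
      using y sep_l2_outside[OF bounded_op_l2[OF A conj_vec_l2[OF y]] False]
      by (simp add: conj_op_def conj_vec_def)
    thus ?thesis using False by (simp add: sep_transp_def)
  qed
qed

lemma unit_vec_pair: "unit_vec (i, j) = tensor_vec (unit_vec i) (unit_vec j)"
  by (auto simp: unit_vec_def tensor_vec_def fun_eq_iff)

lemma sep_comm_op_eq:
  assumes obs: "sep_observable I A"
  shows "sep_comm_op I A = (\<lambda>z ij. tensor_id I A z ij - id_tensor I (conj_op I A) z ij)"
proof -
  have A: "sep_bounded_op I A" using obs by (simp add: sep_observable_iff)
  let ?K = "\<lambda>z ij. tensor_id I A z ij - id_tensor I (conj_op I A) z ij"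
  have Kbop: "sep_bounded_op (I \<times> I) ?K"
    using bounded_op_lincomb[OF tensor_id_bounded[OF A]
      id_tensor_bounded[OF conj_op_bounded[OF A]], of 1 "-1"] by simp
  have Kt: "?K (sep_tensor x y) = (\<lambda>ij. sep_tensor (A x) y ij - sep_tensor x (sep_transp I A y) ij)"
    if "x \<in> sep_l2 I" "y \<in> sep_l2 I" for x y
    using that by (simp add: sep_tensor_eq tensor_id_tensor_vec[OF A]
      id_tensor_tensor_vec[OF conj_op_bounded[OF A]] sep_transp_eq[OF obs])
  show ?thesis unfolding sep_comm_op_def
  proof (rule the_equality)
    show "sep_bounded_op (I \<times> I) ?K \<and> (\<forall>x\<in>sep_l2 I. \<forall>y\<in>sep_l2 I.
      ?K (sep_tensor x y) = (\<lambda>ij. sep_tensor (A x) y ij - sep_tensor x (sep_transp I A y) ij))"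
      using Kbop Kt by blast
  next
    fix T assume T: "sep_bounded_op (I \<times> I) T \<and> (\<forall>x\<in>sep_l2 I. \<forall>y\<in>sep_l2 I.
      T (sep_tensor x y) = (\<lambda>ij. sep_tensor (A x) y ij - sep_tensor x (sep_transp I A y) ij))"
    show "T = ?K"
    proof (rule bounded_op_eqI[of "I \<times> I"])
      show "sep_bounded_op (I \<times> I) T" using T by blast
      show "sep_bounded_op (I \<times> I) ?K" by (rule Kbop)
      fix ij assume ij: "ij \<in> I \<times> I"
      then obtain i j where ij': "ij = (i, j)" "i \<in> I" "j \<in> I" by blast
      have u: "unit_vec i \<in> sep_l2 I" "unit_vec j \<in> sep_l2 I" using ij'(2,3) by (simp_all add: unit_vec_l2)
      have "T (unit_vec ij) = T (sep_tensor (unit_vec i) (unit_vec j))"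
        by (simp add: ij' unit_vec_pair sep_tensor_eq)
      also have "\<dots> = ?K (sep_tensor (unit_vec i) (unit_vec j))"
        using T Kt[OF u] u by simp
      also have "\<dots> = ?K (unit_vec ij)" by (simp add: ij' unit_vec_pair sep_tensor_eq)
      finally show "T (unit_vec ij) = ?K (unit_vec ij)" .
    qed
  qed
qed


context
  fixes I :: "'i set"
begin

lemma id_tensor_cong: "(\<And>x. x \<in> sep_l2 I \<Longrightarrow> B x = B' x) \<Longrightarrow> id_tensor I B z = id_tensor I B' z"
  by (cases "z \<in> sep_l2 (I \<times> I)") (auto simp: id_tensor_def sep_l2_row)

lemma tensor_id_cong: assumes "\<And>x. x \<in> sep_l2 I \<Longrightarrow>
    B x = B' x" shows "tensor_id I B z = tensor_id I B' z"
  unfolding tensor_id_def using id_tensor_cong[OF assms, where z="swap_vec z"] by simp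

lemma id_tensor_comp: assumes C: "sep_bounded_op I C" and z: "z \<in> sep_l2 (I \<times> I)"
  shows "id_tensor I B (id_tensor I C z) = id_tensor I (\<lambda>x. B (C x)) z"
  using id_tensor_l2[OF C z] z by (simp add: id_tensor_def fun_eq_iff)

lemma tensor_id_comp: "sep_bounded_op I C \<Longrightarrow> z \<in> sep_l2 (I \<times> I) \<Longrightarrow>
    tensor_id I B (tensor_id I C z) = tensor_id I (\<lambda>x. B (C x)) z"
  unfolding tensor_id_def by (simp add: id_tensor_comp swap_vec_l2)

lemma id_tensor_sum: "z \<in> sep_l2 (I \<times> I) \<Longrightarrow>
  id_tensor I (\<lambda>x i. \<Sum>s\<in>S. a s * B s x i) z = (\<lambda>ij. \<Sum>s\<in>S. a s * id_tensor I (B s) z ij)"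
  by (simp add: id_tensor_def fun_eq_iff)

lemma tensor_id_sum: assumes z: "z \<in> sep_l2 (I \<times> I)"
  shows "tensor_id I (\<lambda>x i. \<Sum>s\<in>S. a s * B s x i) z = (\<lambda>ij. \<Sum>s\<in>S. a s * tensor_id I (B s) z ij)"
proof -
  have "tensor_id I (\<lambda>x i. \<Sum>s\<in>S. a s * B s x i) z
      = swap_vec (id_tensor I (\<lambda>x i. \<Sum>s\<in>S. a s * B s x i) (swap_vec z))"
    by (simp add: tensor_id_def)
  also have "\<dots> = swap_vec (\<lambda>ij. \<Sum>s\<in>S. a s * id_tensor I (B s) (swap_vec z) ij)"
    by (simp only: id_tensor_sum[OF swap_vec_l2[OF z]])
  also have "\<dots> = (\<lambda>ij. \<Sum>s\<in>S. a s * tensor_id I (B s) z ij)"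
    by (simp add: tensor_id_def swap_vec_def fun_eq_iff)
  finally show ?thesis .
qed

lemma id_tensor_of_id: "(\<And>x. x \<in> sep_l2 I \<Longrightarrow> B x = x) \<Longrightarrow> z \<in> sep_l2 (I \<times> I) \<Longrightarrow> id_tensor I B z = z"
  by (simp add: id_tensor_def sep_l2_row fun_eq_iff)

lemma tensor_id_of_id: "(\<And>x. x \<in> sep_l2 I \<Longrightarrow> B x = x) \<Longrightarrow> z \<in> sep_l2 (I \<times> I) \<Longrightarrow> tensor_id I B z = z"
  unfolding tensor_id_def by (simp add: id_tensor_of_id swap_vec_l2)

lemma id_tensor_zero_op: "(\<And>x. x \<in> sep_l2 I \<Longrightarrow> B x = (\<lambda>_. 0)) \<Longrightarrow> id_tensor I B z = (\<lambda>_. 0)"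
  by (simp add: id_tensor_def sep_l2_row fun_eq_iff)

lemma tensor_id_zero_op: "(\<And>x. x \<in> sep_l2 I \<Longrightarrow> B x = (\<lambda>_. 0)) \<Longrightarrow> tensor_id I B z = (\<lambda>_. 0)"
  unfolding tensor_id_def by (simp add: id_tensor_zero_op fun_eq_iff)

lemma tensor_id_zero: "B (\<lambda>_. 0) = (\<lambda>_. 0) \<Longrightarrow> tensor_id I B (\<lambda>_. 0) = (\<lambda>_. 0)"
  by (simp add: tensor_id_def id_tensor_def swap_vec_def fun_eq_iff)

lemma tensor_id_id_tensor_commute:
  assumes B: "sep_bounded_op I B" and C: "sep_bounded_op I C"
  shows "tensor_id I B (id_tensor I C z) = id_tensor I C (tensor_id I B z)"
proof -
  have "(\<lambda>z. tensor_id I B (id_tensor I C z)) = (\<lambda>z. id_tensor I C (tensor_id I B z))"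
  proof (rule bounded_op_eqI[of "I \<times> I"])
    show "sep_bounded_op (I \<times> I) (\<lambda>z. tensor_id I B (id_tensor I C z))"
      by (rule bounded_op_comp[OF tensor_id_bounded[OF B] id_tensor_bounded[OF C]])
    show "sep_bounded_op (I \<times> I) (\<lambda>z. id_tensor I C (tensor_id I B z))"
      by (rule bounded_op_comp[OF id_tensor_bounded[OF C] tensor_id_bounded[OF B]])
    fix ij assume "ij \<in> I \<times> I"
    then obtain i j where ij: "ij = (i, j)" "i \<in> I" "j \<in> I" by blast
    have ui: "unit_vec i \<in> sep_l2 I" using unit_vec_l2[OF ij(2)] .
    have uj: "unit_vec j \<in> sep_l2 I" using unit_vec_l2[OF ij(3)] .
    show "tensor_id I B (id_tensor I C (unit_vec ij)) = id_tensor I C (tensor_id I B (unit_vec ij))"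
      unfolding ij unit_vec_pair
      by (simp add: id_tensor_tensor_vec[OF C ui uj] tensor_id_tensor_vec[OF B ui uj]
        tensor_id_tensor_vec[OF B ui bounded_op_l2[OF C uj]]
                    id_tensor_tensor_vec[OF C bounded_op_l2[OF B ui] uj])
  qed
  thus ?thesis by (simp add: fun_eq_iff)
qed

end

context resolution_of_identity
begin

definition transp_proj :: "'s \<Rightarrow> ('j \<Rightarrow> complex) \<Rightarrow> ('j \<Rightarrow> complex)" where
  "transp_proj l = conj_op J (E l)"

lemma transp_proj_bounded: "l \<in> S \<Longrightarrow> sep_bounded_op J (transp_proj l)"
  unfolding transp_proj_def by (rule conj_op_bounded[OF bounded_proj])

lemma transp_proj_symmetric: "l \<in> S \<Longrightarrow> sep_symmetric J (transp_proj l)"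
  unfolding transp_proj_def by (rule conj_op_symmetric[OF bounded_proj symmetric_proj])

lemma transp_proj_orth:
  assumes s: "s \<in> S" and t: "t \<in> S" and x: "x \<in> sep_l2 J"
  shows "transp_proj s (transp_proj t x) = (if s = t then transp_proj t x else (\<lambda>_. 0))"
proof -
  have tl: "transp_proj t x \<in> sep_l2 J" unfolding transp_proj_def
    by (rule conj_op_l2[OF bounded_proj[OF t] x])
  have "transp_proj s (transp_proj t x) = conj_vec (E s (E t (conj_vec x)))" using tl x
    by (simp add: transp_proj_def conj_op_def)
  also have "\<dots> = conj_vec (if s = t then E t (conj_vec x) else (\<lambda>_. 0))"
    using proj_orth[OF s t conj_vec_l2[OF x]] by simp
  also have "\<dots> = (if s = t then transp_proj t x else (\<lambda>_. 0))" using x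
    by (auto simp: transp_proj_def conj_op_def conj_vec_def)
  finally show ?thesis .
qed

lemma transp_proj_sum: "x \<in> sep_l2 J \<Longrightarrow> (\<lambda>i. \<Sum>s\<in>S. transp_proj s x i) = x"
proof -
  assume x: "x \<in> sep_l2 J"
  have "(\<lambda>i. \<Sum>s\<in>S. E s (conj_vec x) i) = conj_vec x" using sum_proj[OF conj_vec_l2[OF x]] .
  hence "conj_vec (\<lambda>i. \<Sum>s\<in>S. E s (conj_vec x) i) = conj_vec (conj_vec x)" by simp
  hence "(\<lambda>i. \<Sum>s\<in>S. cnj (E s (conj_vec x) i)) = x"
    by (simp only: conj_vec_conj_vec) (simp add: conj_vec_def cnj_sum)
  thus ?thesis using x by (simp add: transp_proj_def conj_op_def conj_vec_def)
qed

definition tensor_proj :: "'s \<times> 's \<Rightarrow> ('j \<times> 'j \<Rightarrow> complex) \<Rightarrow> ('j \<times> 'j \<Rightarrow> complex)" where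
  "tensor_proj ab z = tensor_id J (E (fst ab)) (id_tensor J (transp_proj (snd ab)) z)"

lemma tensor_proj_bounded: assumes "ab \<in> S \<times> S" shows "sep_bounded_op (J \<times> J) (tensor_proj ab)"
proof -
  have a: "fst ab \<in> S" and b: "snd ab \<in> S" using assms by auto
  show ?thesis unfolding tensor_proj_def[abs_def]
    by (rule bounded_op_comp[OF tensor_id_bounded[OF bounded_proj[OF a]]
      id_tensor_bounded[OF transp_proj_bounded[OF b]]])
qed

lemma tensor_proj_commute: "a \<in> S \<Longrightarrow> b \<in> S \<Longrightarrow>
    tensor_proj (a, b) z = id_tensor J (transp_proj b) (tensor_id J (E a) z)"
  unfolding tensor_proj_def
  by (simp add: tensor_id_id_tensor_commute bounded_proj transp_proj_bounded)

lemma tensor_proj_symmetric: "ab \<in> S \<times> S \<Longrightarrow> sep_symmetric (J \<times> J) (tensor_proj ab)"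
  unfolding sep_symmetric_def
proof (intro ballI)
  fix z w assume ab: "ab \<in> S \<times> S" and z: "z \<in> sep_l2 (J \<times> J)" and w: "w \<in> sep_l2 (J \<times> J)"
  obtain a b where ab': "ab = (a, b)" "a \<in> S" "b \<in> S" using ab by blast
  have cs: "sep_symmetric (J \<times> J) (tensor_id J (E a))"
    by (rule tensor_id_symmetric[OF bounded_proj symmetric_proj]) (use ab' in auto)
  have rs: "sep_symmetric (J \<times> J) (id_tensor J (transp_proj b))"
    by (rule id_tensor_symmetric[OF transp_proj_bounded transp_proj_symmetric]) (use ab' in auto)
  have cb: "sep_bounded_op (J \<times> J) (tensor_id J (E a))"
    by (rule tensor_id_bounded[OF bounded_proj]) (use ab' in auto)
  have rb: "sep_bounded_op (J \<times> J) (id_tensor J (transp_proj b))"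
    by (rule id_tensor_bounded[OF transp_proj_bounded]) (use ab' in auto)
  have "sep_inner (J \<times> J) (tensor_proj ab z) w
      = sep_inner (J \<times> J) (id_tensor J (transp_proj b) z) (tensor_id J (E a) w)"
    unfolding tensor_proj_def ab' using sep_symmetricD[OF cs bounded_op_l2[OF rb z] w] by simp
  also have "\<dots> = sep_inner (J \<times> J) z (id_tensor J (transp_proj b) (tensor_id J (E a) w))"
    using sep_symmetricD[OF rs z bounded_op_l2[OF cb w]] .
  also have "\<dots> = sep_inner (J \<times> J) z (tensor_proj ab w)" using tensor_proj_commute ab' by simp
  finally show "sep_inner (J \<times> J) (tensor_proj ab z) w = sep_inner (J \<times> J) z (tensor_proj ab w)" .
qed

lemma tensor_proj_orth:
  assumes s: "s \<in> S \<times> S" and t: "t \<in> S \<times> S" and z: "z \<in> sep_l2 (J \<times> J)"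
  shows "tensor_proj s (tensor_proj t z) = (if s = t then tensor_proj t z else (\<lambda>_. 0))"
proof -
  obtain a b where ab: "s = (a, b)" "a \<in> S" "b \<in> S" using s by blast
  obtain c d where cd: "t = (c, d)" "c \<in> S" "d \<in> S" using t by blast
  have rdz: "id_tensor J (transp_proj d) z \<in> sep_l2 (J \<times> J)"
    using id_tensor_l2[OF transp_proj_bounded[OF cd(3)] z] .
  have "tensor_proj s (tensor_proj t z)
      = tensor_id J (E a) (id_tensor J (transp_proj b)
        (tensor_id J (E c) (id_tensor J (transp_proj d) z)))"
    by (simp add: tensor_proj_def ab cd)
  also have "\<dots> = tensor_id J (E a)
      (tensor_id J (E c) (id_tensor J (transp_proj b) (id_tensor J (transp_proj d) z)))"
    by (simp add: tensor_id_id_tensor_commute[OF bounded_proj[OF cd(2)]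
      transp_proj_bounded[OF ab(3)]])
  also have "\<dots> = tensor_id J (\<lambda>x. E a (E c x))
      (id_tensor J (\<lambda>x. transp_proj b (transp_proj d x)) z)"
  proof -
    have w: "id_tensor J (transp_proj b) (id_tensor J (transp_proj d) z) \<in> sep_l2 (J \<times> J)"
      by (rule id_tensor_l2[OF transp_proj_bounded[OF ab(3)] rdz])
    have e1: "tensor_id J (E a)
        (tensor_id J (E c) (id_tensor J (transp_proj b) (id_tensor J (transp_proj d) z))) =
        tensor_id J (\<lambda>x. E a (E c x)) (id_tensor J (transp_proj b) (id_tensor J (transp_proj d) z))"
      by (rule tensor_id_comp[OF bounded_proj[OF cd(2)] w])
    have e2: "id_tensor J (transp_proj b) (id_tensor J (transp_proj d) z)
        = id_tensor J (\<lambda>x. transp_proj b (transp_proj d x)) z"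
      by (rule id_tensor_comp[OF transp_proj_bounded[OF cd(3)] z])
    show ?thesis unfolding e2[symmetric] by (rule e1)
  qed
  also have "\<dots> = (if s = t then tensor_proj t z else (\<lambda>_. 0))"
  proof (cases "a = c \<and> b = d")
    case True
    have "tensor_id J (\<lambda>x. E a (E c x)) (id_tensor J (\<lambda>x. transp_proj b (transp_proj d x)) z)
        = tensor_id J (E c) (id_tensor J (transp_proj d) z)"
      using True ab cd
      by (intro trans[OF tensor_id_cong arg_cong[where f="tensor_id J (E c)"]] id_tensor_cong)
        (auto simp: proj_orth transp_proj_orth)
    thus ?thesis using True ab cd by (simp add: tensor_proj_def)
  next
    case False
    show ?thesis
    proof (cases "a = c")
      case True
      hence bd: "b \<noteq> d" using False by blast
      have "id_tensor J (\<lambda>x. transp_proj b (transp_proj d x)) z = (\<lambda>_. 0)"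
        by (rule id_tensor_zero_op) (use bd ab cd in \<open>simp add: transp_proj_orth\<close>)
      moreover have "tensor_id J (\<lambda>x. E a (E c x)) (\<lambda>_. 0) = (\<lambda>_. 0)"
        by (rule tensor_id_zero)
          (simp add: bounded_op_zero[OF bounded_proj[OF cd(2)]]
            bounded_op_zero[OF bounded_proj[OF ab(2)]])
      ultimately show ?thesis using bd ab cd by simp
    next
      case False
      have "tensor_id J (\<lambda>x. E a (E c x)) w = (\<lambda>_. 0)" for w
        by (rule tensor_id_zero_op) (use False ab cd in \<open>simp add: proj_orth\<close>)
      thus ?thesis using False ab cd by auto
    qed
  qed
  finally show ?thesis .
qed

lemma sum_tensor_id_proj: "w \<in> sep_l2 (J \<times> J) \<Longrightarrow> (\<lambda>ij. \<Sum>a\<in>S. tensor_id J (E a) w ij) = w"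
proof -
  assume w: "w \<in> sep_l2 (J \<times> J)"
  have "(\<lambda>ij. \<Sum>a\<in>S. tensor_id J (E a) w ij) = (\<lambda>ij. \<Sum>a\<in>S. 1 * tensor_id J (E a) w ij)" by simp
  also have "\<dots> = tensor_id J (\<lambda>x i. \<Sum>a\<in>S. 1 * E a x i) w" by (rule tensor_id_sum[OF w, symmetric])
  also have "\<dots> = w" by (rule tensor_id_of_id[OF _ w]) (simp add: sum_proj)
  finally show ?thesis .
qed

lemma sum_id_tensor_transp_proj: "w \<in> sep_l2 (J \<times> J) \<Longrightarrow>
    (\<lambda>ij. \<Sum>b\<in>S. id_tensor J (transp_proj b) w ij) = w"
proof -
  assume w: "w \<in> sep_l2 (J \<times> J)"
  have "(\<lambda>ij. \<Sum>b\<in>S. id_tensor J (transp_proj b) w ij)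
      = (\<lambda>ij. \<Sum>b\<in>S. 1 * id_tensor J (transp_proj b) w ij)" by simp
  also have "\<dots> = id_tensor J (\<lambda>x i. \<Sum>b\<in>S. 1 * transp_proj b x i) w"
    by (rule id_tensor_sum[OF w, symmetric])
  also have "\<dots> = w" by (rule id_tensor_of_id[OF _ w]) (simp add: transp_proj_sum)
  finally show ?thesis .
qed

lemma sum_tensor_proj: "z \<in> sep_l2 (J \<times> J) \<Longrightarrow> (\<lambda>ij. \<Sum>s\<in>S \<times> S. tensor_proj s z ij) = z"
proof -
  assume z: "z \<in> sep_l2 (J \<times> J)"
  have "(\<lambda>ij. \<Sum>s\<in>S \<times> S. tensor_proj s z ij) = (\<lambda>ij. \<Sum>a\<in>S. \<Sum>b\<in>S. tensor_proj (a, b) z ij)"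
    by (rule ext) (simp add: sum.cartesian_product case_prod_unfold)
  also have "\<dots> = (\<lambda>ij. \<Sum>b\<in>S. \<Sum>a\<in>S. tensor_proj (a, b) z ij)"
    by (rule ext) (rule sum.swap)
  also have "\<dots> = (\<lambda>ij. \<Sum>b\<in>S. \<Sum>a\<in>S. tensor_id J (E a) (id_tensor J (transp_proj b) z) ij)"
    by (simp add: tensor_proj_def)
  also have "\<dots> = (\<lambda>ij. \<Sum>b\<in>S. id_tensor J (transp_proj b) z ij)"
  proof (rule ext, rule sum.cong[OF refl])
    fix ij b assume b: "b \<in> S"
    show "(\<Sum>a\<in>S. tensor_id J (E a) (id_tensor J (transp_proj b) z) ij)
        = id_tensor J (transp_proj b) z ij"
      using fun_cong[OF sum_tensor_id_proj[OF id_tensor_l2[OF transp_proj_bounded[OF b] z]], of ij]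
      by simp
  qed
  also have "\<dots> = z" by (rule sum_id_tensor_transp_proj[OF z])
  finally show ?thesis .
qed

lemma resolution_tensor_proj: "resolution_of_identity (J \<times> J) (S \<times> S) tensor_proj"
proof
  show "finite (S \<times> S)" using finite_index by simp
  show "\<And>s. s \<in> S \<times> S \<Longrightarrow> sep_bounded_op (J \<times> J) (tensor_proj s)" by (rule tensor_proj_bounded)
  show "\<And>s. s \<in> S \<times> S \<Longrightarrow> sep_symmetric (J \<times> J) (tensor_proj s)" by (rule tensor_proj_symmetric)
  show "\<And>s t x. s \<in> S \<times> S \<Longrightarrow> t \<in> S \<times> S \<Longrightarrow> x \<in> sep_l2 (J \<times> J) \<Longrightarrow>
    tensor_proj s (tensor_proj t x) =
      (if s = t then tensor_proj t x else (\<lambda>_. 0))" by (rule tensor_proj_orth)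
  show "\<And>x. x \<in> sep_l2 (J \<times> J) \<Longrightarrow> (\<lambda>i. \<Sum>s\<in>S \<times> S. tensor_proj s x i) = x" by (rule sum_tensor_proj)
qed

end

section \<open>Metrics on three points\<close>

lemma powr_add_le:
  fixes x y p :: real
  assumes x: "x \<ge> 0" and y: "y \<ge> 0" and p: "0 < p" "p \<le> 1"
  shows "(x + y) powr p \<le> x powr p + y powr p"
proof (cases "x + y = 0")
  case True thus ?thesis using x y by simp
next
  case False
  define s where "s = x + y"
  have s: "s > 0" using False x y by (simp add: s_def)
  have xs: "x / s \<le> (x / s) powr p"
    using powr_mono'[of p 1 "x / s"] x y s p by (simp add: s_def)
  have ys: "y / s \<le> (y / s) powr p"
    using powr_mono'[of p 1 "y / s"] x y s p by (simp add: s_def)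
  have "x / s + y / s = 1" using s by (simp add: add_divide_distrib[symmetric] s_def)
  hence "1 \<le> (x / s) powr p + (y / s) powr p" using xs ys by linarith
  hence "s powr p \<le> s powr p * ((x / s) powr p + (y / s) powr p)" using s by simp
  also have "\<dots> = x powr p + y powr p" using s by (simp add: powr_divide distrib_left)
  finally show ?thesis by (simp add: s_def)
qed

lemma norm_diff_powr_triangle:
  assumes p: "0 < p" "p \<le> 1"
  shows "cmod (a - b) powr p \<le> cmod (a - e) powr p + cmod (e - b) powr p"
proof -
  have "cmod (a - b) \<le> cmod (a - e) + cmod (e - b)"
    using norm_triangle_ineq[of "a - e" "e - b"] by simp
  hence "cmod (a - b) powr p \<le> (cmod (a - e) + cmod (e - b)) powr p"
    using p by (intro powr_mono2) auto
  also have "\<dots> \<le> cmod (a - e) powr p + cmod (e - b) powr p"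
    using p by (intro powr_add_le) auto
  finally show ?thesis .
qed

text \<open>A metric on at most three points is a nonnegative combination of the star metrics
  \<open>\<delta>\<^sub>k(a, b) = [a = k] + [b = k]\<close> (\<open>a \<noteq> b\<close>); the weight of a point is its Gromov product
  with respect to the other two.\<close>

lemma metric_three_distinct_points_star:
  fixes d :: "'a \<Rightarrow> 'a \<Rightarrow> real"
  assumes xyw: "X = {x, y, w}" "x \<noteq> y" "y \<noteq> w" "x \<noteq> w"
    and sym: "\<And>a b. a \<in> X \<Longrightarrow> b \<in> X \<Longrightarrow> d a b = d b a"
    and triangle: "\<And>a b e. a \<in> X \<Longrightarrow> b \<in> X \<Longrightarrow> e \<in> X \<Longrightarrow> d a b \<le> d a e + d e b"
  shows "\<exists>c. (\<forall>k. c k \<ge> 0) \<and> (\<forall>a\<in>X. \<forall>b\<in>X. a \<noteq> b \<longrightarrow> c a + c b = d a b)"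
proof -
  define c where "c k = (if k = x then (d x y + d x w - d y w) / 2
    else if k = y then (d x y + d y w - d x w) / 2
    else if k = w then (d x w + d y w - d x y) / 2 else 0)" for k
  have cx: "c x = (d x y + d x w - d y w) / 2"
    and cy: "c y = (d x y + d y w - d x w) / 2"
    and cw: "c w = (d x w + d y w - d x y) / 2"
    using xyw by (simp_all add: c_def)
  have t: "d y w \<le> d y x + d x w" "d x w \<le> d x y + d y w" "d x y \<le> d x w + d w y"
    using triangle xyw(1) by auto
  have s: "d y x = d x y" "d w x = d x w" "d w y = d y w"
    using sym xyw(1) by auto
  have "c k \<ge> 0" for k
  proof -
    consider "k = x" | "k = y" | "k = w" | "k \<noteq> x" "k \<noteq> y" "k \<noteq> w" by blast
    then show ?thesis
    proof cases
      case 1 thus ?thesis using t(1) s(1) cx by simp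
    next
      case 2 thus ?thesis using t(2) cy by simp
    next
      case 3 thus ?thesis using t(3) s(3) cw by simp
    qed (simp add: c_def)
  qed
  moreover have "c a + c b = d a b" if "a \<in> X" "b \<in> X" "a \<noteq> b" for a b
  proof -
    have "(a = x \<and> b = y) \<or> (a = y \<and> b = x) \<or> (a = x \<and> b = w) \<or> (a = w \<and> b = x) \<or>
          (a = y \<and> b = w) \<or> (a = w \<and> b = y)" using that xyw by auto
    thus ?thesis by (elim disjE conjE) (simp_all add: cx cy cw s field_simps)
  qed
  ultimately show ?thesis by blast
qed

lemma metric_three_points_star:
  fixes d :: "'a \<Rightarrow> 'a \<Rightarrow> real"
  assumes fin: "finite X" and card: "card X \<le> 3"
    and nonneg: "\<And>a b. a \<in> X \<Longrightarrow> b \<in> X \<Longrightarrow> d a b \<ge> 0"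
    and sym: "\<And>a b. a \<in> X \<Longrightarrow> b \<in> X \<Longrightarrow> d a b = d b a"
    and triangle: "\<And>a b e. a \<in> X \<Longrightarrow> b \<in> X \<Longrightarrow> e \<in> X \<Longrightarrow> d a b \<le> d a e + d e b"
  shows "\<exists>c. (\<forall>k. c k \<ge> 0) \<and> (\<forall>a\<in>X. \<forall>b\<in>X. a \<noteq> b \<longrightarrow> c a + c b = d a b)"
proof -
  consider "card X \<le> 1" | "card X = 2" | "card X = 3" using card by linarith
  then show ?thesis
  proof cases
    case 1
    hence "\<forall>a\<in>X. \<forall>b\<in>X. a = b" using fin by (auto simp: card_le_Suc0_iff_eq)
    thus ?thesis by (intro exI[of _ "\<lambda>_. 0"]) auto
  next
    case 2
    then obtain x y where xy: "X = {x, y}" "x \<noteq> y" by (auto simp: card_2_iff)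
    show ?thesis
      using xy(2) xy(2)[symmetric]
      by (intro exI[of _ "\<lambda>k. if k = x then d x y else 0"]) (auto simp: xy(1) nonneg sym)
  next
    case 3
    then obtain x y w where "X = {x, y, w}" "x \<noteq> y" "y \<noteq> w" "x \<noteq> w"
      by (auto simp: card_3_iff)
    then show ?thesis using sym triangle by (rule metric_three_distinct_points_star)
  qed
qed

lemma norm_diff_powr_star:
  assumes fin: "finite X" and card: "card X \<le> 3" and p: "0 < p" "p \<le> 1"
  obtains c where "\<And>k. c k \<ge> 0"
    "\<And>a b. a \<in> X \<Longrightarrow> b \<in> X \<Longrightarrow> a \<noteq> b \<Longrightarrow> c a + c b = cmod (a - b) powr p"
proof -
  have "\<exists>c. (\<forall>k. c k \<ge> 0) \<and> (\<forall>a\<in>X. \<forall>b\<in>X. a \<noteq> b \<longrightarrow> c a + c b = cmod (a - b) powr p)"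
  proof (rule metric_three_points_star[OF fin card])
    show "cmod (a - b) powr p \<le> cmod (a - e) powr p + cmod (e - b) powr p" for a b e
      by (rule norm_diff_powr_triangle[OF p])
  qed (simp_all add: norm_minus_commute)
  with that show ?thesis by blast
qed

lemma sum_star_powr:
  assumes fin: "finite X" and a: "a \<in> X" and b: "b \<in> X" and c: "\<And>k. c k \<ge> 0" and p: "p > 0"
  shows "(\<Sum>k\<in>X. cmod ((if a = k then complex_of_real (c k powr (1 / p)) else 0) -
                       (if b = k then complex_of_real (c k powr (1 / p)) else 0)) powr p) =
         (if a = b then 0 else c a + c b)"
proof (cases "a = b")
  case False
  have root: "cmod (complex_of_real (c k powr (1 / p))) powr p = c k" for k
    using c[of k] p by (simp add: powr_powr)
  have "(\<Sum>k\<in>X. cmod ((if a = k then complex_of_real (c k powr (1 / p)) else 0) -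
                     (if b = k then complex_of_real (c k powr (1 / p)) else 0)) powr p) =
      (\<Sum>k\<in>X. (if k = a then c a else 0) + (if k = b then c b else 0))"
  proof (rule sum.cong[OF refl])
    fix k
    consider "k = a" | "k = b" | "k \<noteq> a" "k \<noteq> b" by blast
    then show "cmod ((if a = k then complex_of_real (c k powr (1 / p)) else 0) -
        (if b = k then complex_of_real (c k powr (1 / p)) else 0)) powr p =
        (if k = a then c a else 0) + (if k = b then c b else 0)"
      by cases (use False root in simp_all)
  qed
  also have "\<dots> = c a + c b" using fin a b by (simp add: sum.distrib)
  finally show ?thesis using False by simp
qed simp

section \<open>Commutators with functions of an observable\<close>

context resolution_of_identity
begin

lemma conj_op_spectral_op:
  assumes real: "\<And>l. l \<in> S \<Longrightarrow> cnj (d l) = d l" and x: "x \<in> sep_l2 J"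
  shows "conj_op J (spectral_op d) x = (\<lambda>i. \<Sum>l\<in>S. d l * transp_proj l x i)"
  using x real by (simp add: conj_op_def spectral_op_def conj_vec_def transp_proj_def
    cong: sum.cong)

lemma tensor_id_proj_split:
  assumes z: "z \<in> sep_l2 (J \<times> J)" and a: "a \<in> S"
  shows "tensor_id J (E a) z = (\<lambda>ij. \<Sum>b\<in>S. tensor_proj (a, b) z ij)"
proof -
  have "tensor_id J (E a) z = tensor_id J (E a) (\<lambda>ij. \<Sum>b\<in>S. id_tensor J (transp_proj b) z ij)"
    using sum_id_tensor_transp_proj[OF z] by simp
  also have "\<dots> = (\<lambda>ij. \<Sum>b\<in>S. tensor_id J (E a) (id_tensor J (transp_proj b) z) ij)"
    by (rule bounded_op_sum[OF tensor_id_bounded[OF bounded_proj[OF a]] finite_index])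
      (rule id_tensor_l2[OF transp_proj_bounded z])
  finally show ?thesis by (simp add: tensor_proj_def)
qed

lemma commutator_spectral_op:
  assumes real: "\<And>l. l \<in> S \<Longrightarrow> cnj (d l) = d l" and z: "z \<in> sep_l2 (J \<times> J)"
  shows "(\<lambda>ij. tensor_id J (spectral_op d) z ij - id_tensor J (conj_op J (spectral_op d)) z ij) =
         (\<lambda>ij. \<Sum>s\<in>S \<times> S. (d (fst s) - d (snd s)) * tensor_proj s z ij)"
proof -
  have left: "tensor_id J (spectral_op d) z = (\<lambda>ij. \<Sum>a\<in>S. d a * (\<Sum>b\<in>S. tensor_proj (a, b) z ij))"
  proof -
    have "tensor_id J (spectral_op d) z = (\<lambda>ij. \<Sum>a\<in>S. d a * tensor_id J (E a) z ij)"
      unfolding spectral_op_def by (rule tensor_id_sum[OF z])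
    also have "\<dots> = (\<lambda>ij. \<Sum>a\<in>S. d a * (\<Sum>b\<in>S. tensor_proj (a, b) z ij))"
      by (intro ext sum.cong refl) (simp add: tensor_id_proj_split[OF z])
    finally show ?thesis .
  qed
  have right: "id_tensor J (conj_op J (spectral_op d)) z =
      (\<lambda>ij. \<Sum>b\<in>S. d b * (\<Sum>a\<in>S. tensor_proj (a, b) z ij))"
  proof -
    have "id_tensor J (conj_op J (spectral_op d)) z
        = id_tensor J (\<lambda>x i. \<Sum>b\<in>S. d b * transp_proj b x i) z"
      by (rule id_tensor_cong) (rule conj_op_spectral_op[OF real])
    also have "\<dots> = (\<lambda>ij. \<Sum>b\<in>S. d b * id_tensor J (transp_proj b) z ij)"
      by (rule id_tensor_sum[OF z])
    also have "\<dots> = (\<lambda>ij. \<Sum>b\<in>S. d b * (\<Sum>a\<in>S. tensor_proj (a, b) z ij))"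
    proof (intro ext sum.cong refl)
      fix ij b assume b: "b \<in> S"
      have "id_tensor J (transp_proj b) z ij
          = (\<Sum>a\<in>S. tensor_id J (E a) (id_tensor J (transp_proj b) z) ij)"
        using fun_cong[OF sum_tensor_id_proj[OF id_tensor_l2[OF transp_proj_bounded[OF b] z]],
          of ij] by simp
      thus "d b * id_tensor J (transp_proj b) z ij = d b * (\<Sum>a\<in>S. tensor_proj (a, b) z ij)"
        by (simp add: tensor_proj_def)
    qed
    finally show ?thesis .
  qed
  show ?thesis
  proof
    fix ij
    have "tensor_id J (spectral_op d) z ij - id_tensor J (conj_op J (spectral_op d)) z ij =
        (\<Sum>a\<in>S. \<Sum>b\<in>S. d a * tensor_proj (a, b) z ij) - (\<Sum>b\<in>S. \<Sum>a\<in>S. d b * tensor_proj (a, b) z ij)"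
      unfolding left right by (simp add: sum_distrib_left)
    also have "(\<Sum>b\<in>S. \<Sum>a\<in>S. d b * tensor_proj (a, b) z ij)
        = (\<Sum>a\<in>S. \<Sum>b\<in>S. d b * tensor_proj (a, b) z ij)"
      by (rule sum.swap)
    also have "(\<Sum>a\<in>S. \<Sum>b\<in>S. d a * tensor_proj (a, b) z ij) -
        (\<Sum>a\<in>S. \<Sum>b\<in>S. d b * tensor_proj (a, b) z ij) =
        (\<Sum>s\<in>S \<times> S. (d (fst s) - d (snd s)) * tensor_proj s z ij)"
      by (simp add: sum_subtractf left_diff_distrib sum.cartesian_product case_prod_unfold)
    finally show "tensor_id J (spectral_op d) z ij - id_tensor J (conj_op J (spectral_op d)) z ij =
        (\<Sum>s\<in>S \<times> S. (d (fst s) - d (snd s)) * tensor_proj s z ij)" .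
  qed
qed

lemma sep_abs_powr_commutator:
  assumes real: "\<And>l. l \<in> S \<Longrightarrow> cnj (d l) = d l"
    and K: "\<And>z. z \<in> sep_l2 (J \<times> J) \<Longrightarrow>
              K z = (\<lambda>ij. tensor_id J (spectral_op d) z ij - id_tensor J
                (conj_op J (spectral_op d)) z ij)"
  shows "sep_abs_powr (J \<times> J) q K z =
         (\<lambda>ij. \<Sum>s\<in>S \<times> S. complex_of_real (cmod (d (fst s) - d (snd s)) powr q) *
           tensor_proj s z ij)"
proof -
  interpret R: resolution_of_identity "J \<times> J" "S \<times> S" tensor_proj by (rule resolution_tensor_proj)
  show ?thesis
    by (rule R.sep_abs_powr_lincomb) (use K commutator_spectral_op[OF real] in simp)
qed

end

lemma sep_abs_powr_comm_spectral_op: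
  fixes J :: "nat set"
  assumes R: "resolution_of_identity J S E" and real: "\<And>l. l \<in> S \<Longrightarrow> cnj (d l) = d l"
  shows "sep_abs_powr (J \<times> J) q (sep_comm_op J (resolution_of_identity.spectral_op S E d)) z =
         (\<lambda>ij. \<Sum>s\<in>S \<times> S. complex_of_real (cmod (d (fst s) - d (snd s)) powr q) *
                           resolution_of_identity.tensor_proj J E s z ij)"
proof -
  interpret R: resolution_of_identity J S E by (rule R)
  show ?thesis
    using R.sep_abs_powr_commutator[OF real]
      sep_comm_op_eq[OF R.spectral_op_observable[OF real]] by simp
qed

lemma sep_abs_powr_comm_op_three_point:
  fixes I :: "nat set" and p p' :: real
  assumes obs: "sep_observable I A" and fin: "finite (sep_spectrum I A)"
    and card: "card (sep_spectrum I A) \<le> 3" and p: "0 < p" "p \<le> 1" and p': "0 < p'"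
  shows "\<exists>Bs. (\<forall>B\<in>set Bs. sep_observable I B \<and> finite (sep_spectrum I B)) \<and>
    (\<forall>z ij. (\<Sum>B\<leftarrow>Bs. sep_abs_powr (I \<times> I) p' (sep_comm_op I B) z ij) =
            sep_abs_powr (I \<times> I) p (sep_comm_op I A) z ij)"
proof -
  define X where "X = sep_spectrum I A"
  obtain P where P: "resolution_of_identity I X P"
    and A: "A = resolution_of_identity.spectral_op X P (\<lambda>l. l)"
    and real: "\<And>l. l \<in> X \<Longrightarrow> cnj l = l"
    using finite_spectrum_resolution[OF obs fin] unfolding X_def by blast
  interpret R: resolution_of_identity I X P by (rule P)
  obtain c where c: "\<And>k. c k \<ge> 0"
    and star: "\<And>a b. a \<in> X \<Longrightarrow> b \<in> X \<Longrightarrow> a \<noteq> b \<Longrightarrow> c a + c b = cmod (a - b) powr p"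
    using norm_diff_powr_star[OF _ _ p] fin card unfolding X_def by blast
  define f where "f k l = (if l = k then complex_of_real (c k powr (1 / p')) else 0)" for k l
  obtain xs where xs: "set xs = X" "distinct xs"
    using finite_distinct_list[OF fin[folded X_def]] by blast
  have f_real: "cnj (f k l) = f k l" for k l by (simp add: f_def)
  show ?thesis
  proof (intro exI conjI allI)
    show "\<forall>B\<in>set (map (\<lambda>k. R.spectral_op (f k)) xs). sep_observable I B \<and> finite (sep_spectrum I B)"
      using R.spectral_op_observable f_real R.finite_spectrum_spectral_op by auto
    fix z ij
    have "(\<Sum>B\<leftarrow>map (\<lambda>k. R.spectral_op (f k)) xs. sep_abs_powr (I \<times> I) p' (sep_comm_op I B) z ij) =
        (\<Sum>k\<in>X. \<Sum>s\<in>X \<times> X. complex_of_real (cmod (f k (fst s) - f k (snd s)) powr p') *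
                             R.tensor_proj s z ij)"
      using xs sep_abs_powr_comm_spectral_op[OF P f_real]
      by (simp add: sum_list_distinct_conv_sum_set o_def)
    also have "\<dots> = (\<Sum>s\<in>X \<times> X. \<Sum>k\<in>X. complex_of_real (cmod (f k (fst s) - f k (snd s)) powr p') *
                                   R.tensor_proj s z ij)"
      by (rule sum.swap)
    also have "\<dots> = (\<Sum>s\<in>X \<times> X. complex_of_real (cmod (fst s - snd s) powr p) * R.tensor_proj s z ij)"
    proof (intro sum.cong refl)
      fix s assume "s \<in> X \<times> X"
      then obtain a b where s: "s = (a, b)" "a \<in> X" "b \<in> X" by blast
      have "(\<Sum>k\<in>X. cmod (f k a - f k b) powr p') = (if a = b then 0 else c a + c b)"
        unfolding f_def using sum_star_powr[OF fin[folded X_def] s(2,3) c p'] .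
      also have "\<dots> = cmod (a - b) powr p" using star[OF s(2,3)] by auto
      finally show "(\<Sum>k\<in>X. complex_of_real (cmod (f k (fst s) - f k (snd s)) powr p') *
          R.tensor_proj s z ij) =
          complex_of_real (cmod (fst s - snd s) powr p) * R.tensor_proj s z ij"
        unfolding s(1) by (simp flip: sum_distrib_right of_real_sum)
    qed
    also have "\<dots> = sep_abs_powr (I \<times> I) p (sep_comm_op I A) z ij"
      unfolding A using sep_abs_powr_comm_spectral_op[OF P, of "\<lambda>l. l"] real by simp
    finally show "(\<Sum>B\<leftarrow>map (\<lambda>k. R.spectral_op (f k)) xs. sep_abs_powr (I \<times> I) p'
        (sep_comm_op I B) z ij) =
        sep_abs_powr (I \<times> I) p (sep_comm_op I A) z ij" .
  qed
qed

lemma sep_C_concat: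
  assumes "\<And>A z ij. A \<in> set As \<Longrightarrow>
    (\<Sum>B\<leftarrow>f A. sep_abs_powr (I \<times> I) p' (sep_comm_op I B) z ij) = sep_abs_powr (I \<times> I) p
      (sep_comm_op I A) z ij"
  shows "sep_C I (concat (map f As)) p' = sep_C I As p"
  using assms by (induction As) (auto simp: sep_C_def fun_eq_iff)

theorem proposition4p7:
  fixes I :: "nat set" and p p' :: real
  assumes "0 < p" and "p \<le> 1" and "0 < p'"
  shows "sep_Cclass_k I 3 p \<subseteq> sep_Cclass I p'"
proof
  fix C assume "C \<in> sep_Cclass_k I 3 p"
  then obtain As where C: "C = sep_C I As p" and As: "\<forall>A\<in>set As. sep_observable I A \<and>
      finite (sep_spectrum I A) \<and> card (sep_spectrum I A) \<le> 3"
    by (auto simp: sep_Cclass_k_def)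
  have "\<forall>A\<in>set As. \<exists>Bs. (\<forall>B\<in>set Bs. sep_observable I B \<and> finite (sep_spectrum I B)) \<and>
      (\<forall>z ij. (\<Sum>B\<leftarrow>Bs. sep_abs_powr (I \<times> I) p' (sep_comm_op I B) z ij) =
              sep_abs_powr (I \<times> I) p (sep_comm_op I A) z ij)"
    using sep_abs_powr_comm_op_three_point[OF _ _ _ assms] As by blast
  then obtain f where f:
    "\<forall>A\<in>set As. (\<forall>B\<in>set (f A). sep_observable I B \<and> finite (sep_spectrum I B)) \<and>
      (\<forall>z ij. (\<Sum>B\<leftarrow>f A. sep_abs_powr (I \<times> I) p' (sep_comm_op I B) z ij) =
              sep_abs_powr (I \<times> I) p (sep_comm_op I A) z ij)"
    by (auto dest!: bchoice)
  have "C = sep_C I (concat (map f As)) p'" unfolding C using f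
    by (intro sep_C_concat[symmetric]) blast
  moreover have "\<forall>B\<in>set (concat (map f As)). sep_observable I B \<and> finite (sep_spectrum I B)"
    using f by auto
  ultimately show "C \<in> sep_Cclass I p'" unfolding sep_Cclass_def by blast
qed

end
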